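(* Let $\mathcal K$ be a 2-category which admits Eilenberg–Moore constructions for monads and in which idempotent 2-cells split. Let $(t,\mu,\eta)$ be a monad and $(c,\delta,\varepsilon)$ a comonad on a 0-cell $k$. (1) The following are equivalent: (i) there is a 2-cell $\psi:tc\Rightarrow ct$ with $c\mu\ast\psi t\ast t\psi=\psi\ast\mu c$, $\delta t\ast\psi=cc\mu\ast c\psi t\ast\psi ct\ast t\delta t\ast t\psi\ast t\eta c$ and $\varepsilon t\ast\psi=\mu\ast t\varepsilon t\ast t\psi\ast t\eta c$ (i.e. $((c,\psi),\delta,\varepsilon)$ is a comonad in $\mathrm{Mnd}^\iota(\mathcal K)$); (ii) there is a 2-cell $\psi:tc\Rightarrow ct$ such that $((c,\psi),\ \delta t\ast\psi\ast\eta c,\ \varepsilon t\ast\psi\ast\eta c)$ is a comonad on $t$ in $\mathrm{EM}^w(\mathcal K)$; (iii) there is a comonad $(\overline c,\delta^\iota,\varepsilon^\iota)$ on $J(t)$ in $\mathcal K$, where $(\overline c,\iota,\pi)$ is a weak lifting of $c$ for $t,t$, such that $\delta^\iota$ is a weak $\iota$-lifting of $\delta$ and $\varepsilon^\iota$ is a weak $\iota$-lifting of $\varepsilon$. (2) The following are equivalent: (i) there is a 2-cell $\psi:tc\Rightarrow ct$ with $c\mu\ast\psi t\ast t\psi=\psi\ast\mu c$, $c\psi\ast\psi c\ast t\delta=cc\mu\ast c\psi t\ast\psi ct\ast\eta cct\ast\delta t\ast\psi$ and $t\varepsilon=\varepsilon t\ast\psi$ (i.e. $((c,\psi),\delta,\varepsilon)$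 is a comonad in $\mathrm{Mnd}^\pi(\mathcal K)$); (ii) there is a 2-cell $\psi:tc\Rightarrow ct$ such that $((c,\psi),\ c\psi\ast\psi c\ast\eta cc\ast\delta,\ \eta\ast\varepsilon)$ is a comonad on $t$ in $\mathrm{EM}^w(\mathcal K)$; (iii) there is a comonad $(\overline c,\delta^\pi,\varepsilon^\pi)$ on $J(t)$ in $\mathcal K$, where $(\overline c,\iota,\pi)$ is a weak lifting of $c$ for $t,t$, such that $\delta^\pi$ is a weak $\pi$-lifting of $\delta$ and $\varepsilon^\pi$ is a weak $\pi$-lifting of $\varepsilon$. (3) The following are equivalent: (i) there is a 2-cell $\psi:tc\Rightarrow ct$ with $c\mu\ast\psi t\ast t\psi=\psi\ast\mu c$, $c\psi\ast\psi c\ast t\delta=\delta t\ast\psi$ and $t\varepsilon=\varepsilon t\ast\psi$; (ii) there is a comonad $(\overline c,\overline\delta,\overline\varepsilon)$ on $J(t)$ in $\mathcal K$, where $(\overline c,\iota,\pi)$ is a weak lifting of $c$ for $t,t$, such that $\overline\delta$ is both a weak $\iota$-lifting and a weak $\pi$-lifting of $\delta$ and $\overline\varepsilon$ is both a weak $\iota$-lifting and a weak $\pi$-lifting of $\varepsilon$.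
   Context: Conventions in a 2-category $\mathcal K$: horizontal composition and whiskering by juxtaposition in the order of functor composition; identity 1-cell of $k$ written $k$, identity 2-cell of $V$ written $V$; vertical composition $\ast$ with $\alpha\ast\beta$ meaning $\beta$ then $\alpha$. Monad $(t,\mu,\eta)$: $\mu:tt\Rightarrow t$, $\eta:k\Rightarrow t$ associative and unital. Comonad $(c,\delta,\varepsilon)$: $\delta:c\Rightarrow cc$, $\varepsilon:c\Rightarrow k$ with $\delta c\ast\delta=c\delta\ast\delta$, $\varepsilon c\ast\delta=c=c\varepsilon\ast\delta$. $\mathrm{EM}^w(\mathcal K)$: 0-cells monads; 1-cells $(V,\psi):(t,\mu,\eta)\to(t',\mu',\eta')$ with $\psi:t'V\Rightarrow Vt$ and $V\mu\ast\psi t\ast t'\psi=\psi\ast\mu'V$; 2-cells $(V,\psi)\Rightarrow(W,\phi)$ are $\varrho:V\Rightarrow Wt$ with $W\mu\ast\varrho t\ast\psi=W\mu\ast\phi t\ast t'\varrho$ and $\varrho=W\mu\ast\phi t\ast\eta'Wt\ast\varrho$; identity 1-cell $(k,t)$, identity 2-cell $\phi\ast\eta'W$; 1-cell composite $(V',\psi')\circ(V,\psi)=(V'V,V'\psi\ast\psi'V)$; 2-cell composites $\varrho'\circ\varrho=W'W\mu\ast W'\varrho t\ast W'\psi\ast\varrho'V$ and $\tau\bullet\varrho=U\mu\ast\tau t\ast\varrho$. $\mathrm{Mnd}^\iota(\mathcal K)$ (resp. $\mathrm{Mnd}^\pi(\mathcal K)$): same 0- and 1-cells, 2-cells $\omega:V\Rightarrow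 W$ of $\mathcal K$ with $\omega t\ast\psi=W\mu\ast\phi t\ast t'\omega t\ast t'\psi\ast t'\eta'V$ (resp. $\phi\ast t'\omega=W\mu\ast\phi t\ast\eta'Wt\ast\omega t\ast\psi$), compositions of $\mathcal K$. $\mathcal K$ admits Eilenberg–Moore constructions for monads: the inclusion of $\mathcal K$ in the Lack–Street 2-category of monads has a right 2-adjoint $J$; the monad $(t,\mu,\eta)$ gives an adjunction $f\dashv v$, $v:J(t)\to k$, unit $\eta$, counit $\epsilon$, $t=vf$, $\mu=v\epsilon f$. Idempotent 2-cells split. Weak liftings (for $t$ and $t$): a weak lifting of a 1-cell $V:k\to k$ is $(\overline V,\iota,\pi)$, $\overline V:J(t)\to J(t)$, $\iota:v\overline V\Rightarrow Vv$, $\pi:Vv\Rightarrow v\overline V$, $\pi\ast\iota$ the identity. For $\omega:V\Rightarrow W$ between 1-cells with weak liftings, a weak $\iota$-lifting is $\omega^\iota:\overline V\Rightarrow\overline W$ with $\iota\ast v\omega^\iota=\omega v\ast\iota$, a weak $\pi$-lifting is $\omega^\pi$ with $v\omega^\pi\ast\pi=\pi\ast\omega v$. In (iii) of (1),(2) and in (3)(ii), the weak lifting of $cc$ used is $(\overline c\,\overline c,\ c\iota\ast\iota\overline c,\ \pi\overline c\ast c\pi)$ and that of the identity 1-cell $k$ is $(J(t),v,v)$. *)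

theory Defs
  imports Main
begin

text \<open>A strict 2-category given by its sets of 0-, 1- and 2-cells and the structure maps.
  comp1 g f and hcomp a b are in the order of functor composition (f first, resp. b first);
  vcomp a b means b then a.\<close>

record ('o,'a,'b) twocat =
  obj :: "'o set"
  arr1 :: "'a set"
  arr2 :: "'b set"
  src :: "'a \<Rightarrow> 'o"
  trg :: "'a \<Rightarrow> 'o"
  dom2 :: "'b \<Rightarrow> 'a"
  cod2 :: "'b \<Rightarrow> 'a"
  id1 :: "'o \<Rightarrow> 'a"
  comp1 :: "'a \<Rightarrow> 'a \<Rightarrow> 'a"
  id2 :: "'a \<Rightarrow> 'b"
  vcomp :: "'b \<Rightarrow> 'b \<Rightarrow> 'b"
  hcomp :: "'b \<Rightarrow> 'b \<Rightarrow> 'b"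

definition hom1 :: "('o,'a,'b,'z) twocat_scheme \<Rightarrow> 'a \<Rightarrow> 'o \<Rightarrow> 'o \<Rightarrow> bool" where
  "hom1 C f x y \<longleftrightarrow> f \<in> arr1 C \<and> src C f = x \<and> trg C f = y"

definition hom2 :: "('o,'a,'b,'z) twocat_scheme \<Rightarrow> 'b \<Rightarrow> 'a \<Rightarrow> 'a \<Rightarrow> bool" where
  "hom2 C \<alpha> f g \<longleftrightarrow> \<alpha> \<in> arr2 C \<and> dom2 C \<alpha> = f \<and> cod2 C \<alpha> = g"

text \<open>Whiskering: wl C f a is "f a", wr C a f is "a f".\<close>
definition wl :: "('o,'a,'b,'z) twocat_scheme \<Rightarrow> 'a \<Rightarrow> 'b \<Rightarrow> 'b" where
  "wl C f \<alpha> = hcomp C (id2 C f) \<alpha>"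

definition wr :: "('o,'a,'b,'z) twocat_scheme \<Rightarrow> 'b \<Rightarrow> 'a \<Rightarrow> 'b" where
  "wr C \<alpha> f = hcomp C \<alpha> (id2 C f)"

definition two_category :: "('o,'a,'b,'z) twocat_scheme \<Rightarrow> bool" where
  "two_category C \<longleftrightarrow>
    (\<forall>f\<in>arr1 C. src C f \<in> obj C \<and> trg C f \<in> obj C) \<and>
    (\<forall>x\<in>obj C. hom1 C (id1 C x) x x) \<and>
    (\<forall>f\<in>arr1 C. \<forall>g\<in>arr1 C. src C g = trg C f \<longrightarrow>
        hom1 C (comp1 C g f) (src C f) (trg C g)) \<and>
    (\<forall>f\<in>arr1 C. \<forall>g\<in>arr1 C. \<forall>h\<in>arr1 C. src C g = trg C f \<and> src C h = trg C g \<longrightarrow>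
        comp1 C h (comp1 C g f) = comp1 C (comp1 C h g) f) \<and>
    (\<forall>f\<in>arr1 C. comp1 C (id1 C (trg C f)) f = f \<and> comp1 C f (id1 C (src C f)) = f) \<and>
    (\<forall>\<alpha>\<in>arr2 C. dom2 C \<alpha> \<in> arr1 C \<and> cod2 C \<alpha> \<in> arr1 C \<and>
        src C (dom2 C \<alpha>) = src C (cod2 C \<alpha>) \<and> trg C (dom2 C \<alpha>) = trg C (cod2 C \<alpha>)) \<and>
    (\<forall>f\<in>arr1 C. hom2 C (id2 C f) f f) \<and>
    (\<forall>\<alpha>\<in>arr2 C. \<forall>\<beta>\<in>arr2 C. dom2 C \<alpha> = cod2 C \<beta> \<longrightarrow>
        hom2 C (vcomp C \<alpha> \<beta>) (dom2 C \<beta>) (cod2 C \<alpha>)) \<and>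
    (\<forall>\<alpha>\<in>arr2 C. \<forall>\<beta>\<in>arr2 C. \<forall>\<gamma>\<in>arr2 C. dom2 C \<alpha> = cod2 C \<beta> \<and> dom2 C \<beta> = cod2 C \<gamma> \<longrightarrow>
        vcomp C \<alpha> (vcomp C \<beta> \<gamma>) = vcomp C (vcomp C \<alpha> \<beta>) \<gamma>) \<and>
    (\<forall>\<alpha>\<in>arr2 C. vcomp C (id2 C (cod2 C \<alpha>)) \<alpha> = \<alpha> \<and> vcomp C \<alpha> (id2 C (dom2 C \<alpha>)) = \<alpha>) \<and>
    (\<forall>\<alpha>\<in>arr2 C. \<forall>\<beta>\<in>arr2 C. src C (dom2 C \<alpha>) = trg C (dom2 C \<beta>) \<longrightarrow>
        hom2 C (hcomp C \<alpha> \<beta>) (comp1 C (dom2 C \<alpha>) (dom2 C \<beta>)) (comp1 C (cod2 C \<alpha>) (cod2 C \<beta>))) \<and>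
    (\<forall>\<alpha>\<in>arr2 C. \<forall>\<beta>\<in>arr2 C. \<forall>\<gamma>\<in>arr2 C.
        src C (dom2 C \<alpha>) = trg C (dom2 C \<beta>) \<and> src C (dom2 C \<beta>) = trg C (dom2 C \<gamma>) \<longrightarrow>
        hcomp C \<alpha> (hcomp C \<beta> \<gamma>) = hcomp C (hcomp C \<alpha> \<beta>) \<gamma>) \<and>
    (\<forall>f\<in>arr1 C. \<forall>g\<in>arr1 C. src C g = trg C f \<longrightarrow>
        hcomp C (id2 C g) (id2 C f) = id2 C (comp1 C g f)) \<and>
    (\<forall>\<alpha>\<in>arr2 C. hcomp C (id2 C (id1 C (trg C (dom2 C \<alpha>)))) \<alpha> = \<alpha> \<and>
        hcomp C \<alpha> (id2 C (id1 C (src C (dom2 C \<alpha>)))) = \<alpha>) \<and>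
    (\<forall>\<alpha>\<in>arr2 C. \<forall>\<alpha>'\<in>arr2 C. \<forall>\<beta>\<in>arr2 C. \<forall>\<beta>'\<in>arr2 C.
        dom2 C \<alpha>' = cod2 C \<alpha> \<and> dom2 C \<beta>' = cod2 C \<beta> \<and> src C (dom2 C \<alpha>) = trg C (dom2 C \<beta>) \<longrightarrow>
        hcomp C (vcomp C \<alpha>' \<alpha>) (vcomp C \<beta>' \<beta>) = vcomp C (hcomp C \<alpha>' \<beta>') (hcomp C \<alpha> \<beta>))"

definition is_monad :: "('o,'a,'b,'z) twocat_scheme \<Rightarrow> 'o \<Rightarrow> 'a \<Rightarrow> 'b \<Rightarrow> 'b \<Rightarrow> bool" where
  "is_monad C k t \<mu> \<eta> \<longleftrightarrow> k \<in> obj C \<and> hom1 C t k k \<and>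
     hom2 C \<mu> (comp1 C t t) t \<and> hom2 C \<eta> (id1 C k) t \<and>
     vcomp C \<mu> (wr C \<mu> t) = vcomp C \<mu> (wl C t \<mu>) \<and>
     vcomp C \<mu> (wr C \<eta> t) = id2 C t \<and> vcomp C \<mu> (wl C t \<eta>) = id2 C t"

definition is_comonad :: "('o,'a,'b,'z) twocat_scheme \<Rightarrow> 'o \<Rightarrow> 'a \<Rightarrow> 'b \<Rightarrow> 'b \<Rightarrow> bool" where
  "is_comonad C k c \<delta> \<epsilon> \<longleftrightarrow> k \<in> obj C \<and> hom1 C c k k \<and>
     hom2 C \<delta> c (comp1 C c c) \<and> hom2 C \<epsilon> c (id1 C k) \<and>
     vcomp C (wr C \<delta> c) \<delta> = vcomp C (wl C c \<delta>) \<delta> \<and>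
     vcomp C (wr C \<epsilon> c) \<delta> = id2 C c \<and> vcomp C (wl C c \<epsilon>) \<delta> = id2 C c"

text \<open>(J, v, lam) is an Eilenberg--Moore object of the monad t on k: lam is a t-action on v,
  and composing with the monad morphism (v,lam) : (J,1) \<rightarrow> (k,t) of the Lack--Street
  2-category of monads is an isomorphism of categories
  K(x,J) \<cong> Mnd(K)((x,1),(k,t)) for each 0-cell x. This is the value at t of a right
  2-adjoint to the inclusion of K in Mnd(K) (with counit (v,lam)).\<close>

definition em_object :: "('o,'a,'b,'z) twocat_scheme \<Rightarrow> 'o \<Rightarrow> 'a \<Rightarrow> 'b \<Rightarrow> 'b \<Rightarrow> 'o \<Rightarrow> 'a \<Rightarrow> 'b \<Rightarrow> bool" where
  "em_object C k t \<mu> \<eta> J v lam \<longleftrightarrow> J \<in> obj C \<and> hom1 C v J k \<and> hom2 C lam (comp1 C t v) v \<and>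
     vcomp C lam (wl C t lam) = vcomp C lam (wr C \<mu> v) \<and> vcomp C lam (wr C \<eta> v) = id2 C v \<and>
     (\<forall>x\<in>obj C. \<forall>V \<psi>. hom1 C V x k \<and> hom2 C \<psi> (comp1 C t V) V \<and>
        vcomp C \<psi> (wl C t \<psi>) = vcomp C \<psi> (wr C \<mu> V) \<and> vcomp C \<psi> (wr C \<eta> V) = id2 C V \<longrightarrow>
        (\<exists>!g. hom1 C g x J \<and> comp1 C v g = V \<and> wr C lam g = \<psi>)) \<and>
     (\<forall>x\<in>obj C. \<forall>g g' \<omega>. hom1 C g x J \<and> hom1 C g' x J \<and>
        hom2 C \<omega> (comp1 C v g) (comp1 C v g') \<and>
        vcomp C \<omega> (wr C lam g) = vcomp C (wr C lam g') (wl C t \<omega>) \<longrightarrow>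
        (\<exists>!\<theta>. hom2 C \<theta> g g' \<and> wl C v \<theta> = \<omega>))"

definition has_EM_constructions :: "('o,'a,'b,'z) twocat_scheme \<Rightarrow> bool" where
  "has_EM_constructions C \<longleftrightarrow>
     (\<forall>k t \<mu> \<eta>. is_monad C k t \<mu> \<eta> \<longrightarrow> (\<exists>J v lam. em_object C k t \<mu> \<eta> J v lam))"

definition idempotents_split :: "('o,'a,'b,'z) twocat_scheme \<Rightarrow> bool" where
  "idempotents_split C \<longleftrightarrow>
     (\<forall>e\<in>arr2 C. dom2 C e = cod2 C e \<and> vcomp C e e = e \<longrightarrow>
        (\<exists>W p i. hom2 C p (dom2 C e) W \<and> hom2 C i W (dom2 C e) \<and>
           vcomp C p i = id2 C W \<and> vcomp C i p = e))"

section \<open>The 2-category EM^w(K), restricted to endo-cells on a monad t\<close>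

definition emw_1cell :: "('o,'a,'b,'z) twocat_scheme \<Rightarrow> 'a \<Rightarrow> 'b \<Rightarrow> 'a \<Rightarrow> 'b \<Rightarrow> bool" where
  "emw_1cell C t \<mu> V \<psi> \<longleftrightarrow> hom2 C \<psi> (comp1 C t V) (comp1 C V t) \<and>
     vcomp C (wl C V \<mu>) (vcomp C (wr C \<psi> t) (wl C t \<psi>)) = vcomp C \<psi> (wr C \<mu> V)"

definition emw_2cell :: "('o,'a,'b,'z) twocat_scheme \<Rightarrow> 'a \<Rightarrow> 'b \<Rightarrow> 'b \<Rightarrow> 'a \<Rightarrow> 'b \<Rightarrow> 'a \<Rightarrow> 'b \<Rightarrow> 'b \<Rightarrow> bool" where
  "emw_2cell C t \<mu> \<eta> V \<psi> W \<phi> \<rho> \<longleftrightarrow> hom2 C \<rho> V (comp1 C W t) \<and>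
     vcomp C (wl C W \<mu>) (vcomp C (wr C \<rho> t) \<psi>) =
       vcomp C (wl C W \<mu>) (vcomp C (wr C \<phi> t) (wl C t \<rho>)) \<and>
     \<rho> = vcomp C (wl C W \<mu>) (vcomp C (wr C \<phi> t) (vcomp C (wr C \<eta> (comp1 C W t)) \<rho>))"

definition emw_hcomp :: "('o,'a,'b,'z) twocat_scheme \<Rightarrow> 'a \<Rightarrow> 'b \<Rightarrow> 'a \<Rightarrow> 'a \<Rightarrow> 'a \<Rightarrow> 'b \<Rightarrow> 'b \<Rightarrow> 'b \<Rightarrow> 'b" where
  "emw_hcomp C t \<mu> W' W V \<psi> \<rho>' \<rho> =
     vcomp C (wl C (comp1 C W' W) \<mu>) (vcomp C (wl C W' (wr C \<rho> t))
       (vcomp C (wl C W' \<psi>) (wr C \<rho>' V)))"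

definition emw_vcomp :: "('o,'a,'b,'z) twocat_scheme \<Rightarrow> 'a \<Rightarrow> 'b \<Rightarrow> 'a \<Rightarrow> 'b \<Rightarrow> 'b \<Rightarrow> 'b" where
  "emw_vcomp C t \<mu> U \<tau> \<rho> = vcomp C (wl C U \<mu>) (vcomp C (wr C \<tau> t) \<rho>)"

definition emw_id :: "('o,'a,'b,'z) twocat_scheme \<Rightarrow> 'b \<Rightarrow> 'a \<Rightarrow> 'b \<Rightarrow> 'b" where
  "emw_id C \<eta> W \<phi> = vcomp C \<phi> (wr C \<eta> W)"

definition emw_comonad :: "('o,'a,'b,'z) twocat_scheme \<Rightarrow> 'o \<Rightarrow> 'a \<Rightarrow> 'b \<Rightarrow> 'b \<Rightarrow> 'a \<Rightarrow> 'b \<Rightarrow> 'b \<Rightarrow> 'b \<Rightarrow> bool" where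
  "emw_comonad C k t \<mu> \<eta> c \<psi> D E \<longleftrightarrow>
     (let cc = comp1 C c c; \<psi>2 = vcomp C (wl C c \<psi>) (wr C \<psi> c); ic = emw_id C \<eta> c \<psi> in
     emw_1cell C t \<mu> c \<psi> \<and>
     emw_2cell C t \<mu> \<eta> c \<psi> cc \<psi>2 D \<and>
     emw_2cell C t \<mu> \<eta> c \<psi> (id1 C k) (id2 C t) E \<and>
     emw_vcomp C t \<mu> (comp1 C cc c) (emw_hcomp C t \<mu> cc c c \<psi> D ic) D =
       emw_vcomp C t \<mu> (comp1 C c cc) (emw_hcomp C t \<mu> c cc c \<psi> ic D) D \<and>
     emw_vcomp C t \<mu> (comp1 C (id1 C k) c) (emw_hcomp C t \<mu> (id1 C k) c c \<psi> E ic) D = ic \<and>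
     emw_vcomp C t \<mu> (comp1 C c (id1 C k)) (emw_hcomp C t \<mu> c (id1 C k) c \<psi> ic E) D = ic)"

definition weak_lifting :: "('o,'a,'b,'z) twocat_scheme \<Rightarrow> 'o \<Rightarrow> 'a \<Rightarrow> 'a \<Rightarrow> 'a \<Rightarrow> 'b \<Rightarrow> 'b \<Rightarrow> bool" where
  "weak_lifting C J v V Vb \<iota> \<pi> \<longleftrightarrow> hom1 C Vb J J \<and>
     hom2 C \<iota> (comp1 C v Vb) (comp1 C V v) \<and> hom2 C \<pi> (comp1 C V v) (comp1 C v Vb) \<and>
     vcomp C \<pi> \<iota> = id2 C (comp1 C v Vb)"

definition mult_law :: "('o,'a,'b,'z) twocat_scheme \<Rightarrow> 'a \<Rightarrow> 'b \<Rightarrow> 'a \<Rightarrow> 'b \<Rightarrow> bool" where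
  "mult_law C t \<mu> c \<psi> \<longleftrightarrow> hom2 C \<psi> (comp1 C t c) (comp1 C c t) \<and>
     vcomp C (wl C c \<mu>) (vcomp C (wr C \<psi> t) (wl C t \<psi>)) = vcomp C \<psi> (wr C \<mu> c)"

definition cond1i where
  "cond1i C k t \<mu> \<eta> c \<delta> \<epsilon> \<longleftrightarrow> (\<exists>\<psi>. mult_law C t \<mu> c \<psi> \<and>
     vcomp C (wr C \<delta> t) \<psi> =
       vcomp C (wl C (comp1 C c c) \<mu>) (vcomp C (wl C c (wr C \<psi> t)) (vcomp C (wr C \<psi> (comp1 C c t))
         (vcomp C (wl C t (wr C \<delta> t)) (vcomp C (wl C t \<psi>) (wl C t (wr C \<eta> c)))))) \<and>
     vcomp C (wr C \<epsilon> t) \<psi> =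
       vcomp C \<mu> (vcomp C (wl C t (wr C \<epsilon> t)) (vcomp C (wl C t \<psi>) (wl C t (wr C \<eta> c)))))"

definition cond1ii where
  "cond1ii C k t \<mu> \<eta> c \<delta> \<epsilon> \<longleftrightarrow> (\<exists>\<psi>. emw_comonad C k t \<mu> \<eta> c \<psi>
     (vcomp C (wr C \<delta> t) (vcomp C \<psi> (wr C \<eta> c)))
     (vcomp C (wr C \<epsilon> t) (vcomp C \<psi> (wr C \<eta> c))))"

definition cond1iii where
  "cond1iii C J v c \<delta> \<epsilon> \<longleftrightarrow> (\<exists>cb \<iota> \<pi> \<delta>i \<epsilon>i. weak_lifting C J v c cb \<iota> \<pi> \<and>
     is_comonad C J cb \<delta>i \<epsilon>i \<and>
     vcomp C (vcomp C (wl C c \<iota>) (wr C \<iota> cb)) (wl C v \<delta>i) = vcomp C (wr C \<delta> v) \<iota> \<and>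
     vcomp C (id2 C v) (wl C v \<epsilon>i) = vcomp C (wr C \<epsilon> v) \<iota>)"

definition cond2i where
  "cond2i C k t \<mu> \<eta> c \<delta> \<epsilon> \<longleftrightarrow> (\<exists>\<psi>. mult_law C t \<mu> c \<psi> \<and>
     vcomp C (wl C c \<psi>) (vcomp C (wr C \<psi> c) (wl C t \<delta>)) =
       vcomp C (wl C (comp1 C c c) \<mu>) (vcomp C (wl C c (wr C \<psi> t)) (vcomp C (wr C \<psi> (comp1 C c t))
         (vcomp C (wr C \<eta> (comp1 C (comp1 C c c) t)) (vcomp C (wr C \<delta> t) \<psi>)))) \<and>
     wl C t \<epsilon> = vcomp C (wr C \<epsilon> t) \<psi>)"

definition cond2ii where
  "cond2ii C k t \<mu> \<eta> c \<delta> \<epsilon> \<longleftrightarrow> (\<exists>\<psi>. emw_comonad C k t \<mu> \<eta> c \<psi>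
     (vcomp C (wl C c \<psi>) (vcomp C (wr C \<psi> c) (vcomp C (wr C \<eta> (comp1 C c c)) \<delta>)))
     (vcomp C \<eta> \<epsilon>))"

definition cond2iii where
  "cond2iii C J v c \<delta> \<epsilon> \<longleftrightarrow> (\<exists>cb \<iota> \<pi> \<delta>p \<epsilon>p. weak_lifting C J v c cb \<iota> \<pi> \<and>
     is_comonad C J cb \<delta>p \<epsilon>p \<and>
     vcomp C (wl C v \<delta>p) \<pi> = vcomp C (vcomp C (wr C \<pi> cb) (wl C c \<pi>)) (wr C \<delta> v) \<and>
     vcomp C (wl C v \<epsilon>p) \<pi> = vcomp C (id2 C v) (wr C \<epsilon> v))"

definition cond3i where
  "cond3i C k t \<mu> \<eta> c \<delta> \<epsilon> \<longleftrightarrow> (\<exists>\<psi>. mult_law C t \<mu> c \<psi> \<and>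
     vcomp C (wl C c \<psi>) (vcomp C (wr C \<psi> c) (wl C t \<delta>)) = vcomp C (wr C \<delta> t) \<psi> \<and>
     wl C t \<epsilon> = vcomp C (wr C \<epsilon> t) \<psi>)"

definition cond3ii where
  "cond3ii C J v c \<delta> \<epsilon> \<longleftrightarrow> (\<exists>cb \<iota> \<pi> \<delta>b \<epsilon>b. weak_lifting C J v c cb \<iota> \<pi> \<and>
     is_comonad C J cb \<delta>b \<epsilon>b \<and>
     vcomp C (vcomp C (wl C c \<iota>) (wr C \<iota> cb)) (wl C v \<delta>b) = vcomp C (wr C \<delta> v) \<iota> \<and>
     vcomp C (id2 C v) (wl C v \<epsilon>b) = vcomp C (wr C \<epsilon> v) \<iota> \<and>
     vcomp C (wl C v \<delta>b) \<pi> = vcomp C (vcomp C (wr C \<pi> cb) (wl C c \<pi>)) (wr C \<delta> v) \<and>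
     vcomp C (wl C v \<epsilon>b) \<pi> = vcomp C (id2 C v) (wr C \<epsilon> v))"

end

theory Submission
  imports Defs
begin

(* In the presence of the Eilenberg--Moore adjunction f -| v of t (so t = v f), a 2-cell
   \<psi> : t c \<Rightarrow> c t satisfying the multiplication law induces the idempotent c lam * \<psi> v * \<eta> c v
   on c v.  Splitting it gives a weak lifting (cb, \<iota>, \<pi>) of c, cb acquiring its t-action from \<psi>.
   The Mnd^\<iota>- (resp. Mnd^\<pi>-) comonad laws of \<psi>, transported along v, are exactly what is needed
   to lift \<delta>, \<epsilon> along \<iota> (resp. \<pi>) to 2-cells of J; these form a comonad because v is faithful
   on 2-cells and \<iota>, \<pi> are split mono resp. epi.  Conversely a weak lifting induces
   \<psi> = \<iota> f * lam cb f * t \<pi> f * t c \<eta>, and the lifted comultiplication and counit transpose to a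
   comonad on t in EM^w(K). *)

section \<open>Whiskering calculus in a strict 2-category\<close>

locale two_cat =
  fixes C :: "('o,'a,'b,'z) twocat_scheme"
  assumes two_category: "two_category C"
begin

abbreviation cell1 where "cell1 f \<equiv> f \<in> arr1 C"
abbreviation cell2 where "cell2 a \<equiv> a \<in> arr2 C"
abbreviation vcompC (infixr "\<cdot>" 55) where "a \<cdot> b \<equiv> vcomp C a b"
abbreviation wlC (infixr "\<rhd>" 60) where "f \<rhd> a \<equiv> wl C f a"
abbreviation wrC (infixl "\<lhd>" 60) where "a \<lhd> f \<equiv> wr C a f"
abbreviation comp1C (infixr "\<odot>" 70) where "f \<odot> g \<equiv> comp1 C f g"

lemmas axioms = two_category[unfolded two_category_def hom1_def hom2_def]
lemmas axioms_2cells = axioms[THEN conjunct2, THEN conjunct2, THEN conjunct2, THEN conjunct2, THEN conjunct2]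
lemmas axioms_hcomp = axioms_2cells[THEN conjunct2, THEN conjunct2, THEN conjunct2, THEN conjunct2, THEN conjunct2]

lemma src_obj: "cell1 f \<Longrightarrow> src C f \<in> obj C"
  using axioms[THEN conjunct1] by blast

lemma comp1_cell[simp]: "cell1 f \<Longrightarrow> cell1 g \<Longrightarrow> src C g = trg C f \<Longrightarrow> cell1 (g \<odot> f)"
  and comp1_src[simp]: "cell1 f \<Longrightarrow> cell1 g \<Longrightarrow> src C g = trg C f \<Longrightarrow> src C (g \<odot> f) = src C f"
  and comp1_trg[simp]: "cell1 f \<Longrightarrow> cell1 g \<Longrightarrow> src C g = trg C f \<Longrightarrow> trg C (g \<odot> f) = trg C g"
  using axioms[THEN conjunct2, THEN conjunct2, THEN conjunct1] by blast+

lemma comp1_assoc[simp]: "cell1 f \<Longrightarrow> cell1 g \<Longrightarrow> cell1 h \<Longrightarrow> src C g = trg C f \<Longrightarrow> src C h = trg C g \<Longrightarrow>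
   (h \<odot> g) \<odot> f = h \<odot> (g \<odot> f)"
  using axioms[THEN conjunct2, THEN conjunct2, THEN conjunct2, THEN conjunct1] by metis

lemma id1_cell[simp]: "x \<in> obj C \<Longrightarrow> cell1 (id1 C x)" "x \<in> obj C \<Longrightarrow> src C (id1 C x) = x"
   "x \<in> obj C \<Longrightarrow> trg C (id1 C x) = x"
  using axioms[THEN conjunct2, THEN conjunct1] by blast+

lemma comp1_id1_left[simp]: "cell1 f \<Longrightarrow> trg C f = x \<Longrightarrow> id1 C x \<odot> f = f"
  and comp1_id1_right[simp]: "cell1 f \<Longrightarrow> src C f = x \<Longrightarrow> f \<odot> id1 C x = f"
  using axioms[THEN conjunct2, THEN conjunct2, THEN conjunct2, THEN conjunct2, THEN conjunct1] by blast+

lemma dom2_cod2_cell[simp]: "cell2 a \<Longrightarrow> cell1 (dom2 C a)" "cell2 a \<Longrightarrow> cell1 (cod2 C a)"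
  "cell2 a \<Longrightarrow> src C (cod2 C a) = src C (dom2 C a)" "cell2 a \<Longrightarrow> trg C (cod2 C a) = trg C (dom2 C a)"
  using axioms_2cells[THEN conjunct1] by metis+

lemma id2_cell[simp]: "cell1 f \<Longrightarrow> cell2 (id2 C f)" "cell1 f \<Longrightarrow> dom2 C (id2 C f) = f"
  "cell1 f \<Longrightarrow> cod2 C (id2 C f) = f"
  using axioms_2cells[THEN conjunct2, THEN conjunct1] by blast+

lemma vcomp_cell[simp]: "cell2 a \<Longrightarrow> cell2 b \<Longrightarrow> dom2 C a = cod2 C b \<Longrightarrow> cell2 (a \<cdot> b)"
  and vcomp_dom[simp]: "cell2 a \<Longrightarrow> cell2 b \<Longrightarrow> dom2 C a = cod2 C b \<Longrightarrow> dom2 C (a \<cdot> b) = dom2 C b"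
  and vcomp_cod[simp]: "cell2 a \<Longrightarrow> cell2 b \<Longrightarrow> dom2 C a = cod2 C b \<Longrightarrow> cod2 C (a \<cdot> b) = cod2 C a"
  using axioms_2cells[THEN conjunct2, THEN conjunct2, THEN conjunct1] by blast+

lemma vcomp_assoc[simp]: "cell2 a \<Longrightarrow> cell2 b \<Longrightarrow> cell2 c \<Longrightarrow> dom2 C a = cod2 C b \<Longrightarrow> dom2 C b = cod2 C c \<Longrightarrow>
  (a \<cdot> b) \<cdot> c = a \<cdot> (b \<cdot> c)"
  using axioms_2cells[THEN conjunct2, THEN conjunct2, THEN conjunct2, THEN conjunct1] by metis

lemma vcomp_id2_left[simp]: "cell2 a \<Longrightarrow> cod2 C a = f \<Longrightarrow> id2 C f \<cdot> a = a"
  and vcomp_id2_right[simp]: "cell2 a \<Longrightarrow> dom2 C a = f \<Longrightarrow> a \<cdot> id2 C f = a"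
  using axioms_2cells[THEN conjunct2, THEN conjunct2, THEN conjunct2, THEN conjunct2, THEN conjunct1]
    by blast+

lemma hcomp_cell: "cell2 a \<Longrightarrow> cell2 b \<Longrightarrow> src C (dom2 C a) = trg C (dom2 C b) \<Longrightarrow> cell2 (hcomp C a b)"
  and hcomp_dom: "cell2 a \<Longrightarrow> cell2 b \<Longrightarrow> src C (dom2 C a) = trg C (dom2 C b) \<Longrightarrow>
    dom2 C (hcomp C a b) = dom2 C a \<odot> dom2 C b"
  and hcomp_cod: "cell2 a \<Longrightarrow> cell2 b \<Longrightarrow> src C (dom2 C a) = trg C (dom2 C b) \<Longrightarrow>
    cod2 C (hcomp C a b) = cod2 C a \<odot> cod2 C b"
  using axioms_hcomp[THEN conjunct1] by blast+

lemma hcomp_assoc: "cell2 a \<Longrightarrow> cell2 b \<Longrightarrow> cell2 c \<Longrightarrow> src C (dom2 C a) = trg C (dom2 C b) \<Longrightarrow>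
  src C (dom2 C b) = trg C (dom2 C c) \<Longrightarrow> hcomp C a (hcomp C b c) = hcomp C (hcomp C a b) c"
  using axioms_hcomp[THEN conjunct2, THEN conjunct1] by blast

lemma hcomp_id2: "cell1 f \<Longrightarrow> cell1 g \<Longrightarrow> src C g = trg C f \<Longrightarrow> hcomp C (id2 C g) (id2 C f) = id2 C (g \<odot> f)"
  using axioms_hcomp[THEN conjunct2, THEN conjunct2, THEN conjunct1] by blast

lemma hcomp_id1: "cell2 a \<Longrightarrow> hcomp C (id2 C (id1 C (trg C (dom2 C a)))) a = a"
   "cell2 a \<Longrightarrow> hcomp C a (id2 C (id1 C (src C (dom2 C a)))) = a"
  using axioms_hcomp[THEN conjunct2, THEN conjunct2, THEN conjunct2, THEN conjunct1] by blast+

lemma interchange: "cell2 a \<Longrightarrow> cell2 a' \<Longrightarrow> cell2 b \<Longrightarrow> cell2 b' \<Longrightarrow> dom2 C a' = cod2 C a \<Longrightarrow>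
   dom2 C b' = cod2 C b \<Longrightarrow> src C (dom2 C a) = trg C (dom2 C b) \<Longrightarrow>
   hcomp C (a' \<cdot> a) (b' \<cdot> b) = hcomp C a' b' \<cdot> hcomp C a b"
  using axioms_hcomp[THEN conjunct2, THEN conjunct2, THEN conjunct2, THEN conjunct2] by blast

lemma wl_cell[simp]: "cell1 f \<Longrightarrow> cell2 a \<Longrightarrow> src C f = trg C (dom2 C a) \<Longrightarrow> cell2 (f \<rhd> a)"
  and wl_dom[simp]: "cell1 f \<Longrightarrow> cell2 a \<Longrightarrow> src C f = trg C (dom2 C a) \<Longrightarrow> dom2 C (f \<rhd> a) = f \<odot> dom2 C a"
  and wl_cod[simp]: "cell1 f \<Longrightarrow> cell2 a \<Longrightarrow> src C f = trg C (dom2 C a) \<Longrightarrow> cod2 C (f \<rhd> a) = f \<odot> cod2 C a"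
  unfolding wl_def by (auto intro: hcomp_cell simp: hcomp_dom hcomp_cod)

lemma wr_cell[simp]: "cell1 f \<Longrightarrow> cell2 a \<Longrightarrow> src C (dom2 C a) = trg C f \<Longrightarrow> cell2 (a \<lhd> f)"
  and wr_dom[simp]: "cell1 f \<Longrightarrow> cell2 a \<Longrightarrow> src C (dom2 C a) = trg C f \<Longrightarrow> dom2 C (a \<lhd> f) = dom2 C a \<odot> f"
  and wr_cod[simp]: "cell1 f \<Longrightarrow> cell2 a \<Longrightarrow> src C (dom2 C a) = trg C f \<Longrightarrow> cod2 C (a \<lhd> f) = cod2 C a \<odot> f"
  unfolding wr_def by (auto intro: hcomp_cell simp: hcomp_dom hcomp_cod)

lemma wl_vcomp[simp]: "cell1 f \<Longrightarrow> cell2 a \<Longrightarrow> cell2 b \<Longrightarrow> dom2 C a = cod2 C b \<Longrightarrow> src C f = trg C (dom2 C b) \<Longrightarrow>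
   f \<rhd> (a \<cdot> b) = (f \<rhd> a) \<cdot> (f \<rhd> b)"
proof -
  assume h: "cell1 f" "cell2 a" "cell2 b" "dom2 C a = cod2 C b" "src C f = trg C (dom2 C b)"
  have "f \<rhd> (a \<cdot> b) = hcomp C (id2 C f \<cdot> id2 C f) (a \<cdot> b)" using h by (simp add: wl_def)
  also have "\<dots> = (f \<rhd> a) \<cdot> (f \<rhd> b)" unfolding wl_def using h
    by (subst interchange) auto
  finally show ?thesis .
qed

lemma wr_vcomp[simp]: "cell1 f \<Longrightarrow> cell2 a \<Longrightarrow> cell2 b \<Longrightarrow> dom2 C a = cod2 C b \<Longrightarrow> src C (dom2 C b) = trg C f \<Longrightarrow>
   (a \<cdot> b) \<lhd> f = (a \<lhd> f) \<cdot> (b \<lhd> f)"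
proof -
  assume h: "cell1 f" "cell2 a" "cell2 b" "dom2 C a = cod2 C b" "src C (dom2 C b) = trg C f"
  have "(a \<cdot> b) \<lhd> f = hcomp C (a \<cdot> b) (id2 C f \<cdot> id2 C f)" using h by (simp add: wr_def)
  also have "\<dots> = (a \<lhd> f) \<cdot> (b \<lhd> f)" unfolding wr_def using h
    by (subst interchange) auto
  finally show ?thesis .
qed

lemma wl_id2[simp]: "cell1 f \<Longrightarrow> cell1 g \<Longrightarrow> src C f = trg C g \<Longrightarrow> f \<rhd> id2 C g = id2 C (f \<odot> g)"
  unfolding wl_def by (simp add: hcomp_id2)
lemma wr_id2[simp]: "cell1 f \<Longrightarrow> cell1 g \<Longrightarrow> src C g = trg C f \<Longrightarrow> id2 C g \<lhd> f = id2 C (g \<odot> f)"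
  unfolding wr_def by (simp add: hcomp_id2)

lemma wl_wl[simp]: "cell1 f \<Longrightarrow> cell1 g \<Longrightarrow> cell2 a \<Longrightarrow> src C f = trg C g \<Longrightarrow> src C g = trg C (dom2 C a) \<Longrightarrow>
   f \<rhd> (g \<rhd> a) = (f \<odot> g) \<rhd> a"
  unfolding wl_def by (simp add: hcomp_assoc hcomp_id2)
lemma wr_wr[simp]: "cell1 f \<Longrightarrow> cell1 g \<Longrightarrow> cell2 a \<Longrightarrow> src C g = trg C f \<Longrightarrow> src C (dom2 C a) = trg C g \<Longrightarrow>
   (a \<lhd> g) \<lhd> f = a \<lhd> (g \<odot> f)"
  unfolding wr_def by (subst hcomp_assoc[symmetric]) (auto simp: hcomp_id2)
lemma wl_wr[simp]: "cell1 f \<Longrightarrow> cell1 g \<Longrightarrow> cell2 a \<Longrightarrow> src C f = trg C (dom2 C a) \<Longrightarrow> src C (dom2 C a) = trg C g \<Longrightarrow>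
   f \<rhd> (a \<lhd> g) = (f \<rhd> a) \<lhd> g"
  unfolding wl_def wr_def by (simp add: hcomp_assoc)

lemma wl_id1[simp]: "cell2 a \<Longrightarrow> trg C (dom2 C a) = x \<Longrightarrow> id1 C x \<rhd> a = a"
  unfolding wl_def using hcomp_id1 by blast
lemma wr_id1[simp]: "cell2 a \<Longrightarrow> src C (dom2 C a) = x \<Longrightarrow> a \<lhd> id1 C x = a"
  unfolding wr_def using hcomp_id1 by blast

lemma whisker_exchange: "cell2 a \<Longrightarrow> cell2 b \<Longrightarrow> src C (dom2 C b) = trg C (dom2 C a) \<Longrightarrow>
   (cod2 C b \<rhd> a) \<cdot> (b \<lhd> dom2 C a) = (b \<lhd> cod2 C a) \<cdot> (dom2 C b \<rhd> a)"
proof -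
  assume h: "cell2 a" "cell2 b" "src C (dom2 C b) = trg C (dom2 C a)"
  have "(cod2 C b \<rhd> a) \<cdot> (b \<lhd> dom2 C a) = hcomp C (id2 C (cod2 C b) \<cdot> b) (a \<cdot> id2 C (dom2 C a))"
    unfolding wl_def wr_def using h by (subst interchange) auto
  also have "\<dots> = hcomp C (b \<cdot> id2 C (dom2 C b)) (id2 C (cod2 C a) \<cdot> a)" using h by simp
  also have "\<dots> = (b \<lhd> cod2 C a) \<cdot> (dom2 C b \<rhd> a)"
    unfolding wl_def wr_def using h by (subst interchange) auto
  finally show ?thesis .
qed

(* simp normalises vertical composites to right-nested form; these rules let a known
   equation between composites rewrite a prefix of a longer composite. *)
lemma vcomp_prefix2: "a \<cdot> b = x \<Longrightarrow> cell2 a \<Longrightarrow> cell2 b \<Longrightarrow> cell2 r \<Longrightarrow> dom2 C a = cod2 C b \<Longrightarrow> dom2 C b = cod2 C r \<Longrightarrow>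
   a \<cdot> (b \<cdot> r) = x \<cdot> r"
  by (erule subst) simp
lemma vcomp_prefix3: "a \<cdot> (b \<cdot> d) = x \<Longrightarrow> cell2 a \<Longrightarrow> cell2 b \<Longrightarrow> cell2 d \<Longrightarrow> cell2 r \<Longrightarrow> dom2 C a = cod2 C b \<Longrightarrow>
   dom2 C b = cod2 C d \<Longrightarrow> dom2 C d = cod2 C r \<Longrightarrow>
   a \<cdot> (b \<cdot> (d \<cdot> r)) = x \<cdot> r"
  by (erule subst) simp
lemma vcomp_prefix4: "a \<cdot> (b \<cdot> (d \<cdot> e)) = x \<Longrightarrow> cell2 a \<Longrightarrow> cell2 b \<Longrightarrow> cell2 d \<Longrightarrow> cell2 e \<Longrightarrow> cell2 r \<Longrightarrow>
   dom2 C a = cod2 C b \<Longrightarrow> dom2 C b = cod2 C d \<Longrightarrow> dom2 C d = cod2 C e \<Longrightarrow> dom2 C e = cod2 C r \<Longrightarrow>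
   a \<cdot> (b \<cdot> (d \<cdot> (e \<cdot> r))) = x \<cdot> r"
  by (erule subst) simp
lemma vcomp_prefix5: "a \<cdot> (b \<cdot> (d \<cdot> (e \<cdot> g))) = x \<Longrightarrow> cell2 a \<Longrightarrow> cell2 b \<Longrightarrow> cell2 d \<Longrightarrow> cell2 e \<Longrightarrow> cell2 g \<Longrightarrow> cell2 r \<Longrightarrow>
   dom2 C a = cod2 C b \<Longrightarrow> dom2 C b = cod2 C d \<Longrightarrow> dom2 C d = cod2 C e \<Longrightarrow> dom2 C e = cod2 C g \<Longrightarrow>
   dom2 C g = cod2 C r \<Longrightarrow>
   a \<cdot> (b \<cdot> (d \<cdot> (e \<cdot> (g \<cdot> r)))) = x \<cdot> r"
  by (erule subst) simp
lemma vcomp_prefix6: "a \<cdot> (b \<cdot> (d \<cdot> (e \<cdot> (g \<cdot> h)))) = x \<Longrightarrow> cell2 a \<Longrightarrow> cell2 b \<Longrightarrow> cell2 d \<Longrightarrow> cell2 e \<Longrightarrow> cell2 g \<Longrightarrow>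
   cell2 h \<Longrightarrow> cell2 r \<Longrightarrow>
   dom2 C a = cod2 C b \<Longrightarrow> dom2 C b = cod2 C d \<Longrightarrow> dom2 C d = cod2 C e \<Longrightarrow> dom2 C e = cod2 C g \<Longrightarrow>
   dom2 C g = cod2 C h \<Longrightarrow> dom2 C h = cod2 C r \<Longrightarrow>
   a \<cdot> (b \<cdot> (d \<cdot> (e \<cdot> (g \<cdot> (h \<cdot> r))))) = x \<cdot> r"
  by (erule subst) simp

lemma vcomp_prefix7: "a \<cdot> (b \<cdot> (d \<cdot> (e \<cdot> (g \<cdot> (h \<cdot> i))))) = x \<Longrightarrow> cell2 a \<Longrightarrow> cell2 b \<Longrightarrow> cell2 d \<Longrightarrow> cell2 e \<Longrightarrow> cell2 g \<Longrightarrow>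
   cell2 h \<Longrightarrow> cell2 i \<Longrightarrow> cell2 r \<Longrightarrow>
   dom2 C a = cod2 C b \<Longrightarrow> dom2 C b = cod2 C d \<Longrightarrow> dom2 C d = cod2 C e \<Longrightarrow> dom2 C e = cod2 C g \<Longrightarrow>
   dom2 C g = cod2 C h \<Longrightarrow> dom2 C h = cod2 C i \<Longrightarrow> dom2 C i = cod2 C r \<Longrightarrow>
   a \<cdot> (b \<cdot> (d \<cdot> (e \<cdot> (g \<cdot> (h \<cdot> (i \<cdot> r)))))) = x \<cdot> r"
  by (erule subst) simp

end

section \<open>A monad with an Eilenberg--Moore object\<close>

locale em_setting = two_cat C for C :: "('o,'a,'b,'z) twocat_scheme" +
  fixes k J :: 'o and t v :: 'a and \<mu> \<eta> lam :: 'b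
  assumes monad: "is_monad C k t \<mu> \<eta>"
    and em_object: "em_object C k t \<mu> \<eta> J v lam"
begin

lemma em_objs[simp]: "k \<in> obj C" "J \<in> obj C"
  using em_object monad unfolding em_object_def is_monad_def by auto

lemma t_cell[simp]: "cell1 t" "src C t = k" "trg C t = k"
  using monad unfolding is_monad_def hom1_def by auto
lemma v_cell[simp]: "cell1 v" "src C v = J" "trg C v = k"
  using em_object unfolding em_object_def hom1_def by auto
lemma mu_cell[simp]: "cell2 \<mu>" "dom2 C \<mu> = t \<odot> t" "cod2 C \<mu> = t"
  using monad unfolding is_monad_def hom2_def by auto
lemma eta_cell[simp]: "cell2 \<eta>" "dom2 C \<eta> = id1 C k" "cod2 C \<eta> = t"
  using monad unfolding is_monad_def hom2_def by auto
lemma lam_cell[simp]: "cell2 lam" "dom2 C lam = t \<odot> v" "cod2 C lam = v"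
  using em_object unfolding em_object_def hom2_def by auto

lemma mu_assoc: "\<mu> \<cdot> (\<mu> \<lhd> t) = \<mu> \<cdot> (t \<rhd> \<mu>)" and mu_eta_left: "\<mu> \<cdot> (\<eta> \<lhd> t) = id2 C t"
  and mu_eta_right: "\<mu> \<cdot> (t \<rhd> \<eta>) = id2 C t"
  using monad unfolding is_monad_def by auto

lemma lam_assoc: "lam \<cdot> (t \<rhd> lam) = lam \<cdot> (\<mu> \<lhd> v)" and lam_unit: "lam \<cdot> (\<eta> \<lhd> v) = id2 C v"
  using em_object unfolding em_object_def by auto

lemma em_lift_1cell: "x \<in> obj C \<Longrightarrow> hom1 C V x k \<Longrightarrow> hom2 C \<psi> (t \<odot> V) V \<Longrightarrow>
        \<psi> \<cdot> (t \<rhd> \<psi>) = \<psi> \<cdot> (\<mu> \<lhd> V) \<Longrightarrow> \<psi> \<cdot> (\<eta> \<lhd> V) = id2 C V \<Longrightarrow>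
        (\<exists>g. hom1 C g x J \<and> v \<odot> g = V \<and> lam \<lhd> g = \<psi>)"
  using em_object unfolding em_object_def by blast

lemma em_lift_2cell: "x \<in> obj C \<Longrightarrow> hom1 C g x J \<Longrightarrow> hom1 C g' x J \<Longrightarrow>
        hom2 C \<omega> (v \<odot> g) (v \<odot> g') \<Longrightarrow>
        \<omega> \<cdot> (lam \<lhd> g) = (lam \<lhd> g') \<cdot> (t \<rhd> \<omega>) \<Longrightarrow>
        (\<exists>!\<theta>. hom2 C \<theta> g g' \<and> v \<rhd> \<theta> = \<omega>)"
  using em_object unfolding em_object_def by blast

lemma lam_exchange: "cell2 \<theta> \<Longrightarrow> trg C (dom2 C \<theta>) = J \<Longrightarrow>
   (v \<rhd> \<theta>) \<cdot> (lam \<lhd> dom2 C \<theta>) = (lam \<lhd> cod2 C \<theta>) \<cdot> ((t \<odot> v) \<rhd> \<theta>)"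
  using whisker_exchange[of \<theta> lam] by simp

lemma v_faithful: "cell2 \<theta>1 \<Longrightarrow> cell2 \<theta>2 \<Longrightarrow> dom2 C \<theta>1 = dom2 C \<theta>2 \<Longrightarrow> cod2 C \<theta>1 = cod2 C \<theta>2 \<Longrightarrow>
   trg C (dom2 C \<theta>1) = J \<Longrightarrow> v \<rhd> \<theta>1 = v \<rhd> \<theta>2 \<Longrightarrow> \<theta>1 = \<theta>2"
proof -
  assume h: "cell2 \<theta>1" "cell2 \<theta>2" "dom2 C \<theta>1 = dom2 C \<theta>2" "cod2 C \<theta>1 = cod2 C \<theta>2"
     "trg C (dom2 C \<theta>1) = J" "v \<rhd> \<theta>1 = v \<rhd> \<theta>2"
  let ?x = "src C (dom2 C \<theta>1)" and ?g = "dom2 C \<theta>1" and ?g' = "cod2 C \<theta>1"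
  have "\<exists>!\<theta>. hom2 C \<theta> ?g ?g' \<and> v \<rhd> \<theta> = v \<rhd> \<theta>1"
    apply (rule em_lift_2cell[of ?x])
    using h by (auto simp: hom1_def hom2_def src_obj lam_exchange)
  then show ?thesis using h unfolding hom2_def by metis
qed

lemma lift_2cell: "cell1 g \<Longrightarrow> cell1 g' \<Longrightarrow> trg C g = J \<Longrightarrow> trg C g' = J \<Longrightarrow> src C g' = src C g \<Longrightarrow>
   cell2 \<omega> \<Longrightarrow> dom2 C \<omega> = v \<odot> g \<Longrightarrow> cod2 C \<omega> = v \<odot> g' \<Longrightarrow>
   \<omega> \<cdot> (lam \<lhd> g) = (lam \<lhd> g') \<cdot> (t \<rhd> \<omega>) \<Longrightarrow>
   \<exists>\<theta>. cell2 \<theta> \<and> dom2 C \<theta> = g \<and> cod2 C \<theta> = g' \<and> v \<rhd> \<theta> = \<omega>"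
  using em_lift_2cell[of "src C g" g g' \<omega>] by (auto simp: hom1_def hom2_def src_obj)

lemma lift_1cell: "cell1 V \<Longrightarrow> src C V = J \<Longrightarrow> trg C V = k \<Longrightarrow> cell2 \<psi> \<Longrightarrow> dom2 C \<psi> = t \<odot> V \<Longrightarrow> cod2 C \<psi> = V \<Longrightarrow>
        \<psi> \<cdot> (t \<rhd> \<psi>) = \<psi> \<cdot> (\<mu> \<lhd> V) \<Longrightarrow> \<psi> \<cdot> (\<eta> \<lhd> V) = id2 C V \<Longrightarrow>
        (\<exists>g. cell1 g \<and> src C g = J \<and> trg C g = J \<and> v \<odot> g = V \<and> lam \<lhd> g = \<psi>)"
  using em_lift_1cell[of J V \<psi>] by (auto simp: hom1_def hom2_def)

definition f :: 'a where
  "f = (SOME g. cell1 g \<and> src C g = k \<and> trg C g = J \<and> v \<odot> g = t \<and> lam \<lhd> g = \<mu>)"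

lemma f_props: "cell1 f" "src C f = k" "trg C f = J" "v \<odot> f = t" "lam \<lhd> f = \<mu>"
proof -
  have "\<exists>g. cell1 g \<and> src C g = k \<and> trg C g = J \<and> v \<odot> g = t \<and> lam \<lhd> g = \<mu>"
    using em_lift_1cell[of k t \<mu>] by (auto simp: hom1_def hom2_def mu_assoc mu_eta_left)
  from someI_ex[OF this] show "cell1 f" "src C f = k" "trg C f = J" "v \<odot> f = t" "lam \<lhd> f = \<mu>"
    unfolding f_def by blast+
qed

lemma f_cell[simp]: "cell1 f" "src C f = k" "trg C f = J"
  using f_props by simp_all

lemma v_f[simp]: "v \<odot> f = t" "cell1 X \<Longrightarrow> trg C X = k \<Longrightarrow> v \<odot> (f \<odot> X) = t \<odot> X"
  using f_props(4) by (auto simp flip: comp1_assoc)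

lemma lam_f[simp]: "lam \<lhd> f = \<mu>" "cell1 X \<Longrightarrow> trg C X = k \<Longrightarrow> lam \<lhd> (f \<odot> X) = \<mu> \<lhd> X"
  using f_props(5) by (auto simp flip: wr_wr)

lemma wl_lam_f[simp]:
  assumes "cell1 X" "src C X = k"
  shows "(X \<rhd> lam) \<lhd> f = X \<rhd> \<mu>"
    and "cell1 Y \<Longrightarrow> trg C Y = k \<Longrightarrow> (X \<rhd> lam) \<lhd> (f \<odot> Y) = (X \<rhd> \<mu>) \<lhd> Y"
proof -
  show *: "(X \<rhd> lam) \<lhd> f = X \<rhd> \<mu>"
    using wl_wr[of X f lam] assms by simp
  show "(X \<rhd> lam) \<lhd> (f \<odot> Y) = (X \<rhd> \<mu>) \<lhd> Y" if "cell1 Y" "trg C Y = k"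
    using wr_wr[of Y f "X \<rhd> lam"] * assms that by simp
qed

definition counit :: 'b where
  "counit = (SOME \<theta>. cell2 \<theta> \<and> dom2 C \<theta> = f \<odot> v \<and> cod2 C \<theta> = id1 C J \<and> v \<rhd> \<theta> = lam)"

lemma counit_props: "cell2 counit" "dom2 C counit = f \<odot> v" "cod2 C counit = id1 C J" "v \<rhd> counit = lam"
proof -
  have "\<exists>\<theta>. cell2 \<theta> \<and> dom2 C \<theta> = f \<odot> v \<and> cod2 C \<theta> = id1 C J \<and> v \<rhd> \<theta> = lam"
    by (rule lift_2cell) (simp_all add: lam_assoc)
  from someI_ex[OF this] show "cell2 counit" "dom2 C counit = f \<odot> v" "cod2 C counit = id1 C J"
    "v \<rhd> counit = lam"
    unfolding counit_def by blast+
qed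

lemma counit_cell[simp]: "cell2 counit" "dom2 C counit = f \<odot> v" "cod2 C counit = id1 C J"
  using counit_props by simp_all

lemma v_counit[simp]: "v \<rhd> counit = lam" "cell1 X \<Longrightarrow> src C X = k \<Longrightarrow> (X \<odot> v) \<rhd> counit = X \<rhd> lam"
  using counit_props(4) by (auto simp flip: wl_wl)

lemma v_counit3[simp]: "cell1 X \<Longrightarrow> cell1 Y \<Longrightarrow> src C X = trg C Y \<Longrightarrow> src C Y = k \<Longrightarrow> (X \<odot> Y \<odot> v) \<rhd> counit = (X \<odot> Y) \<rhd> lam"
  "cell1 X \<Longrightarrow> cell1 Y \<Longrightarrow> cell1 Z \<Longrightarrow> src C X = trg C Y \<Longrightarrow> src C Y = trg C Z \<Longrightarrow> src C Z = k \<Longrightarrow>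
    (X \<odot> Y \<odot> Z \<odot> v) \<rhd> counit = (X \<odot> Y \<odot> Z) \<rhd> lam"
  using v_counit(2)[of "X \<odot> Y"] v_counit(2)[of "X \<odot> Y \<odot> Z"] by simp_all


section \<open>1-cells of EM^w(K) and their idempotents\<close>

definition mnd_1cell :: "'a \<Rightarrow> 'b \<Rightarrow> bool" where
  "mnd_1cell W \<phi> \<longleftrightarrow> cell1 W \<and> src C W = k \<and> trg C W = k \<and> cell2 \<phi> \<and> dom2 C \<phi> = t \<odot> W \<and>
   cod2 C \<phi> = W \<odot> t \<and> (W \<rhd> \<mu>) \<cdot> ((\<phi> \<lhd> t) \<cdot> (t \<rhd> \<phi>)) = \<phi> \<cdot> (\<mu> \<lhd> W)"

lemma mnd_1cellD: assumes "mnd_1cell W \<phi>"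
  shows "cell1 W" "src C W = k" "trg C W = k" "cell2 \<phi>" "dom2 C \<phi> = t \<odot> W"
   "cod2 C \<phi> = W \<odot> t" "(W \<rhd> \<mu>) \<cdot> ((\<phi> \<lhd> t) \<cdot> (t \<rhd> \<phi>)) = \<phi> \<cdot> (\<mu> \<lhd> W)"
  using assms unfolding mnd_1cell_def by auto

lemma mnd_1cell_unit: assumes "mnd_1cell W \<phi>" shows "(W \<rhd> \<mu>) \<cdot> ((\<phi> \<lhd> t) \<cdot> ((\<eta> \<lhd> (W \<odot> t)) \<cdot> \<phi>)) = \<phi>"
proof -
  note h = mnd_1cellD[OF assms]
  have n1: "(\<eta> \<lhd> (W \<odot> t)) \<cdot> \<phi> = (t \<rhd> \<phi>) \<cdot> (\<eta> \<lhd> (t \<odot> W))"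
    using whisker_exchange[of \<phi> \<eta>] h by simp
  have "(W \<rhd> \<mu>) \<cdot> ((\<phi> \<lhd> t) \<cdot> ((\<eta> \<lhd> (W \<odot> t)) \<cdot> \<phi>)) = (W \<rhd> \<mu>) \<cdot> ((\<phi> \<lhd> t) \<cdot> ((t \<rhd> \<phi>) \<cdot> (\<eta> \<lhd> (t \<odot> W))))"
    using h by (simp add: n1)
  also have "\<dots> = \<phi> \<cdot> ((\<mu> \<lhd> W) \<cdot> (\<eta> \<lhd> (t \<odot> W)))" using h by (simp add: vcomp_prefix3[OF h(7)])
  also have "\<dots> = \<phi> \<cdot> ((\<mu> \<cdot> (\<eta> \<lhd> t)) \<lhd> W)" using h by simp
  also have "\<dots> = \<phi>" using h by (simp add: mu_eta_left)
  finally show ?thesis .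
qed

lemma mnd_1cell_unit_mu: assumes "mnd_1cell W \<phi>" shows
  "(W \<rhd> \<mu>) \<cdot> ((\<phi> \<lhd> t) \<cdot> ((\<eta> \<lhd> (W \<odot> t)) \<cdot> ((W \<rhd> \<mu>) \<cdot> (\<phi> \<lhd> t)))) = (W \<rhd> \<mu>) \<cdot> (\<phi> \<lhd> t)"
proof -
  note h = mnd_1cellD[OF assms]
  have n1: "(\<eta> \<lhd> (W \<odot> t)) \<cdot> (W \<rhd> \<mu>) = ((t \<odot> W) \<rhd> \<mu>) \<cdot> (\<eta> \<lhd> (W \<odot> t \<odot> t))"
    using whisker_exchange[of "W \<rhd> \<mu>" \<eta>] h by simp
  have n2: "(\<phi> \<lhd> t) \<cdot> ((t \<odot> W) \<rhd> \<mu>) = ((W \<odot> t) \<rhd> \<mu>) \<cdot> (\<phi> \<lhd> (t \<odot> t))"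
    using whisker_exchange[of \<mu> \<phi>] h by simp
  have n3: "(W \<rhd> \<mu>) \<cdot> ((W \<odot> t) \<rhd> \<mu>) = (W \<rhd> \<mu>) \<cdot> ((W \<rhd> \<mu>) \<lhd> t)"
    using arg_cong[OF mu_assoc, of "wl C W"] h by simp
  have g: "((W \<rhd> \<mu>) \<lhd> t) \<cdot> ((\<phi> \<lhd> (t \<odot> t)) \<cdot> ((\<eta> \<lhd> (W \<odot> t \<odot> t)) \<cdot> (\<phi> \<lhd> t))) = \<phi> \<lhd> t"
    using arg_cong[OF mnd_1cell_unit[OF assms], of "\<lambda>x. x \<lhd> t"] h by simp
  have "(W \<rhd> \<mu>) \<cdot> ((\<phi> \<lhd> t) \<cdot> ((\<eta> \<lhd> (W \<odot> t)) \<cdot> ((W \<rhd> \<mu>) \<cdot> (\<phi> \<lhd> t)))) =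
     (W \<rhd> \<mu>) \<cdot> (((W \<odot> t) \<rhd> \<mu>) \<cdot> ((\<phi> \<lhd> (t \<odot> t)) \<cdot> ((\<eta> \<lhd> (W \<odot> t \<odot> t)) \<cdot> (\<phi> \<lhd> t))))"
    using h by (simp add: vcomp_prefix2[OF n1] vcomp_prefix2[OF n2])
  also have "\<dots> = (W \<rhd> \<mu>) \<cdot> (\<phi> \<lhd> t)"
    using h by (simp add: vcomp_prefix2[OF n3] g)
  finally show ?thesis .
qed

lemma mnd_1cell_cell2: "mnd_1cell W \<phi> \<Longrightarrow> cell2 \<phi> \<and> dom2 C \<phi> = t \<odot> W \<and> cod2 C \<phi> = W \<odot> t"
  unfolding mnd_1cell_def by simp

lemma mnd_1cell_comp:
  assumes "mnd_1cell W' \<phi>'" "mnd_1cell W \<phi>"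
  shows "mnd_1cell (W' \<odot> W) ((W' \<rhd> \<phi>) \<cdot> (\<phi>' \<lhd> W))"
proof -
  note h' = mnd_1cellD[OF assms(1)] and h = mnd_1cellD[OF assms(2)]
  have n1: "(\<phi>' \<lhd> (W \<odot> t)) \<cdot> ((t \<odot> W') \<rhd> \<phi>) = ((W' \<odot> t) \<rhd> \<phi>) \<cdot> (\<phi>' \<lhd> (t \<odot> W))"
    using whisker_exchange[of \<phi> \<phi>'] h h' by simp
  have g1: "((W' \<odot> W) \<rhd> \<mu>) \<cdot> (((W' \<rhd> \<phi>) \<lhd> t) \<cdot> ((W' \<odot> t) \<rhd> \<phi>)) = (W' \<rhd> \<phi>) \<cdot> ((W' \<rhd> \<mu>) \<lhd> W)"
    using arg_cong[OF h(7), of "wl C W'"] h(1-6) h'(1-6) by simp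
  have g2: "((W' \<rhd> \<mu>) \<lhd> W) \<cdot> ((\<phi>' \<lhd> (t \<odot> W)) \<cdot> ((t \<rhd> \<phi>') \<lhd> W)) = (\<phi>' \<lhd> W) \<cdot> (\<mu> \<lhd> (W' \<odot> W))"
    using arg_cong[OF h'(7), of "\<lambda>x. x \<lhd> W"] h(1-6) h'(1-6) by simp
  have "((W' \<odot> W) \<rhd> \<mu>) \<cdot> ((((W' \<rhd> \<phi>) \<cdot> (\<phi>' \<lhd> W)) \<lhd> t) \<cdot> (t \<rhd> ((W' \<rhd> \<phi>) \<cdot> (\<phi>' \<lhd> W)))) =
     ((W' \<odot> W) \<rhd> \<mu>) \<cdot> (((W' \<rhd> \<phi>) \<lhd> t) \<cdot> (((W' \<odot> t) \<rhd> \<phi>) \<cdot> ((\<phi>' \<lhd> (t \<odot> W)) \<cdot> ((t \<rhd> \<phi>') \<lhd> W))))"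
    using h h' by (simp add: vcomp_prefix2[OF n1])
  also have "\<dots> = ((W' \<rhd> \<phi>) \<cdot> (\<phi>' \<lhd> W)) \<cdot> (\<mu> \<lhd> (W' \<odot> W))"
    using h h' by (simp add: vcomp_prefix3[OF g1] g2)
  finally show ?thesis using h h' unfolding mnd_1cell_def by simp
qed

definition lift_idem :: "'a \<Rightarrow> 'b \<Rightarrow> 'b" where "lift_idem W \<phi> = (W \<rhd> lam) \<cdot> ((\<phi> \<lhd> v) \<cdot> (\<eta> \<lhd> (W \<odot> v)))"

lemma lift_idem_cell: assumes "mnd_1cell W \<phi>"
  shows "cell2 (lift_idem W \<phi>)" "dom2 C (lift_idem W \<phi>) = W \<odot> v" "cod2 C (lift_idem W \<phi>) = W \<odot> v"
  using mnd_1cellD[OF assms] unfolding lift_idem_def by auto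

lemma lift_idem_action: assumes "mnd_1cell W \<phi>" shows
  "(W \<rhd> lam) \<cdot> ((\<phi> \<lhd> v) \<cdot> (((t \<odot> W) \<rhd> lam) \<cdot> ((t \<rhd> \<phi>) \<lhd> v))) = (W \<rhd> lam) \<cdot> ((\<phi> \<lhd> v) \<cdot> (\<mu> \<lhd> (W \<odot> v)))"
proof -
  note h = mnd_1cellD[OF assms]
  have n1: "(\<phi> \<lhd> v) \<cdot> ((t \<odot> W) \<rhd> lam) = ((W \<odot> t) \<rhd> lam) \<cdot> (\<phi> \<lhd> (t \<odot> v))"
    using whisker_exchange[of lam \<phi>] h by simp
  have n2: "(W \<rhd> lam) \<cdot> ((W \<odot> t) \<rhd> lam) = (W \<rhd> lam) \<cdot> ((W \<rhd> \<mu>) \<lhd> v)"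
    using arg_cong[OF lam_assoc, of "wl C W"] h by simp
  have g: "((W \<rhd> \<mu>) \<lhd> v) \<cdot> ((\<phi> \<lhd> (t \<odot> v)) \<cdot> ((t \<rhd> \<phi>) \<lhd> v)) = (\<phi> \<lhd> v) \<cdot> (\<mu> \<lhd> (W \<odot> v))"
    using arg_cong[OF h(7), of "\<lambda>x. x \<lhd> v"] h(1-6) by simp
  show ?thesis using h by (simp add: vcomp_prefix2[OF n1] vcomp_prefix2[OF n2] g)
qed

lemma lift_idem_absorb_inner: assumes "mnd_1cell W \<phi>" shows
  "(W \<rhd> lam) \<cdot> ((\<phi> \<lhd> v) \<cdot> (t \<rhd> lift_idem W \<phi>)) = (W \<rhd> lam) \<cdot> (\<phi> \<lhd> v)"
proof -
  note h = mnd_1cellD[OF assms]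
  have "(W \<rhd> lam) \<cdot> ((\<phi> \<lhd> v) \<cdot> (t \<rhd> lift_idem W \<phi>)) = (W \<rhd> lam) \<cdot> ((\<phi> \<lhd> v) \<cdot> ((\<mu> \<lhd> (W \<odot> v)) \<cdot> ((t \<rhd> \<eta>) \<lhd> (W \<odot> v))))"
    using h unfolding lift_idem_def by (simp add: vcomp_prefix4[OF lift_idem_action[OF assms]])
  also have "\<dots> = (W \<rhd> lam) \<cdot> ((\<phi> \<lhd> v) \<cdot> ((\<mu> \<cdot> (t \<rhd> \<eta>)) \<lhd> (W \<odot> v)))" using h by simp
  also have "\<dots> = (W \<rhd> lam) \<cdot> (\<phi> \<lhd> v)" using h by (simp add: mu_eta_right)
  finally show ?thesis .
qed

lemma lift_idem_absorb_outer: assumes "mnd_1cell W \<phi>" shows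
  "lift_idem W \<phi> \<cdot> ((W \<rhd> lam) \<cdot> (\<phi> \<lhd> v)) = (W \<rhd> lam) \<cdot> (\<phi> \<lhd> v)"
proof -
  note h = mnd_1cellD[OF assms]
  have n1: "(\<eta> \<lhd> (W \<odot> v)) \<cdot> (W \<rhd> lam) = ((t \<odot> W) \<rhd> lam) \<cdot> (\<eta> \<lhd> (W \<odot> t \<odot> v))"
    using whisker_exchange[of "W \<rhd> lam" \<eta>] h by simp
  have n2: "(\<eta> \<lhd> (W \<odot> t \<odot> v)) \<cdot> (\<phi> \<lhd> v) = ((t \<rhd> \<phi>) \<lhd> v) \<cdot> (\<eta> \<lhd> (t \<odot> W \<odot> v))"
    using whisker_exchange[of "\<phi> \<lhd> v" \<eta>] h by simp
  have "lift_idem W \<phi> \<cdot> ((W \<rhd> lam) \<cdot> (\<phi> \<lhd> v)) =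
     (W \<rhd> lam) \<cdot> ((\<phi> \<lhd> v) \<cdot> (((t \<odot> W) \<rhd> lam) \<cdot> (((t \<rhd> \<phi>) \<lhd> v) \<cdot> (\<eta> \<lhd> (t \<odot> W \<odot> v)))))"
    using h unfolding lift_idem_def by (simp add: vcomp_prefix2[OF n1] n2)
  also have "\<dots> = (W \<rhd> lam) \<cdot> ((\<phi> \<lhd> v) \<cdot> ((\<mu> \<cdot> (\<eta> \<lhd> t)) \<lhd> (W \<odot> v)))"
    using h by (simp add: vcomp_prefix4[OF lift_idem_action[OF assms]])
  also have "\<dots> = (W \<rhd> lam) \<cdot> (\<phi> \<lhd> v)" using h by (simp add: mu_eta_left)
  finally show ?thesis .
qed

lemma lift_idem_idempotent: assumes "mnd_1cell W \<phi>" shows "lift_idem W \<phi> \<cdot> lift_idem W \<phi> = lift_idem W \<phi>"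
proof -
  note h = mnd_1cellD[OF assms] lift_idem_cell[OF assms]
  have "lift_idem W \<phi> \<cdot> lift_idem W \<phi> = (lift_idem W \<phi> \<cdot> ((W \<rhd> lam) \<cdot> (\<phi> \<lhd> v))) \<cdot> (\<eta> \<lhd> (W \<odot> v))"
    using h unfolding lift_idem_def by simp
  also have "\<dots> = lift_idem W \<phi>" using h
    by (simp only: lift_idem_absorb_outer[OF assms]) (simp add: lift_idem_def)
  finally show ?thesis .
qed

lemma split_action:
  assumes law: "mnd_1cell W \<phi>"
    and p: "cell2 p" "dom2 C p = W \<odot> v" "cod2 C p = W0" and i: "cell2 i" "dom2 C i = W0" "cod2 C i = W \<odot> v"
    and split: "p \<cdot> i = id2 C W0" "i \<cdot> p = lift_idem W \<phi>"
  defines "\<alpha> \<equiv> p \<cdot> ((W \<rhd> lam) \<cdot> ((\<phi> \<lhd> v) \<cdot> (t \<rhd> i)))"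
  shows "\<alpha> \<cdot> (\<eta> \<lhd> W0) = id2 C W0" and "\<alpha> \<cdot> (t \<rhd> \<alpha>) = \<alpha> \<cdot> (\<mu> \<lhd> W0)"
proof -
  note h = mnd_1cellD[OF law] lift_idem_cell[OF law]
  note [simp] = p i
  have W0[simp]: "cell1 W0" "src C W0 = J" "trg C W0 = k"
    using dom2_cod2_cell[of p] h by auto
  have n1: "(t \<rhd> i) \<cdot> (\<eta> \<lhd> W0) = (\<eta> \<lhd> (W \<odot> v)) \<cdot> i"
    using whisker_exchange[of i \<eta>] h by simp
  have "\<alpha> \<cdot> (\<eta> \<lhd> W0) = p \<cdot> (lift_idem W \<phi> \<cdot> i)"
    unfolding \<alpha>_def lift_idem_def using h by (simp add: n1)
  also have "\<dots> = (p \<cdot> i) \<cdot> (p \<cdot> i)" using h by (simp flip: split(2))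
  also have "\<dots> = id2 C W0" using split(1) by simp
  finally show "\<alpha> \<cdot> (\<eta> \<lhd> W0) = id2 C W0" .
  have tip: "(t \<rhd> i) \<cdot> (t \<rhd> p) = t \<rhd> lift_idem W \<phi>"
    using arg_cong[OF split(2), of "wl C t"] h by simp
  have n2: "(\<mu> \<lhd> (W \<odot> v)) \<cdot> ((t \<odot> t) \<rhd> i) = (t \<rhd> i) \<cdot> (\<mu> \<lhd> W0)"
    using whisker_exchange[of i \<mu>] h by simp
  have "\<alpha> \<cdot> (t \<rhd> \<alpha>) = p \<cdot> ((W \<rhd> lam) \<cdot> ((\<phi> \<lhd> v) \<cdot> ((t \<rhd> lift_idem W \<phi>) \<cdot>
      (((t \<odot> W) \<rhd> lam) \<cdot> (((t \<rhd> \<phi>) \<lhd> v) \<cdot> ((t \<odot> t) \<rhd> i))))))"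
    unfolding \<alpha>_def using h by (simp add: vcomp_prefix2[OF tip])
  also have "\<dots> = p \<cdot> ((W \<rhd> lam) \<cdot> ((\<phi> \<lhd> v) \<cdot> (((t \<odot> W) \<rhd> lam) \<cdot> (((t \<rhd> \<phi>) \<lhd> v) \<cdot> ((t \<odot> t) \<rhd> i)))))"
    using h by (simp add: vcomp_prefix3[OF lift_idem_absorb_inner[OF law]])
  also have "\<dots> = \<alpha> \<cdot> (\<mu> \<lhd> W0)"
    unfolding \<alpha>_def using h by (simp add: vcomp_prefix4[OF lift_idem_action[OF law]] n2)
  finally show "\<alpha> \<cdot> (t \<rhd> \<alpha>) = \<alpha> \<cdot> (\<mu> \<lhd> W0)" .
qed

(* Splitting lift_idem W \<phi> gives a 1-cell W0 into k carrying a t-action, which the universal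
   property of J turns into a 1-cell cb with v cb = W0: a weak lifting of W. *)
lemma split_lift_idem:
  assumes law: "mnd_1cell W \<phi>" and sp: "idempotents_split C"
  shows "\<exists>cb \<iota> \<pi>. cell1 cb \<and> src C cb = J \<and> trg C cb = J \<and> cell2 \<iota> \<and> dom2 C \<iota> = v \<odot> cb \<and> cod2 C \<iota> = W \<odot> v \<and>
    cell2 \<pi> \<and> dom2 C \<pi> = W \<odot> v \<and> cod2 C \<pi> = v \<odot> cb \<and> \<pi> \<cdot> \<iota> = id2 C (v \<odot> cb) \<and> \<iota> \<cdot> \<pi> = lift_idem W \<phi> \<and>
    lam \<lhd> cb = \<pi> \<cdot> ((W \<rhd> lam) \<cdot> ((\<phi> \<lhd> v) \<cdot> (t \<rhd> \<iota>)))"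
proof -
  note h = mnd_1cellD[OF law] lift_idem_cell[OF law]
  obtain W0 p i where split: "hom2 C p (W \<odot> v) W0" "hom2 C i W0 (W \<odot> v)" "p \<cdot> i = id2 C W0" "i \<cdot> p = lift_idem W \<phi>"
    using sp lift_idem_idempotent[OF law] h unfolding idempotents_split_def by metis
  have p: "cell2 p" "dom2 C p = W \<odot> v" "cod2 C p = W0" and i: "cell2 i" "dom2 C i = W0" "cod2 C i = W \<odot> v"
    using split unfolding hom2_def by auto
  have W0: "cell1 W0" "src C W0 = J" "trg C W0 = k"
    using dom2_cod2_cell[of p] p h by auto
  have "cell2 (p \<cdot> ((W \<rhd> lam) \<cdot> ((\<phi> \<lhd> v) \<cdot> (t \<rhd> i))))"
    "dom2 C (p \<cdot> ((W \<rhd> lam) \<cdot> ((\<phi> \<lhd> v) \<cdot> (t \<rhd> i)))) = t \<odot> W0"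
    "cod2 C (p \<cdot> ((W \<rhd> lam) \<cdot> ((\<phi> \<lhd> v) \<cdot> (t \<rhd> i)))) = W0"
    using h p i W0 by auto
  then obtain cb where cb: "cell1 cb" "src C cb = J" "trg C cb = J" "v \<odot> cb = W0"
      "lam \<lhd> cb = p \<cdot> ((W \<rhd> lam) \<cdot> ((\<phi> \<lhd> v) \<cdot> (t \<rhd> i)))"
    using lift_1cell[OF W0 _ _ _ split_action(2,1)[OF law p i split(3,4)]] by blast
  show ?thesis
    by (rule exI[of _ cb], rule exI[of _ i], rule exI[of _ p]) (use cb p i split(3,4) in simp)
qed

(* The EM^w-2-cell V \<Rightarrow> U t corresponding to \<Theta> : Vb \<Rightarrow> Ub between liftings, given pV : V v \<Rightarrow> v Vb and
   iU : v Ub \<Rightarrow> U v; it is the composite V \<Rightarrow> V t = V v f \<Rightarrow> v Vb f \<Rightarrow> v Ub f \<Rightarrow> U v f = U t. *)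
abbreviation transpose :: "'a \<Rightarrow> 'b \<Rightarrow> 'b \<Rightarrow> 'b \<Rightarrow> 'b" where
  "transpose V pV \<Theta> iU \<equiv> (iU \<lhd> f) \<cdot> (((v \<rhd> \<Theta>) \<lhd> f) \<cdot> ((pV \<lhd> f) \<cdot> (V \<rhd> \<eta>)))"

lemma transpose_action:
  assumes U: "cell1 U" "src C U = k" "trg C U = k" and V: "cell1 V" "src C V = k" "trg C V = k"
  and Ub: "cell1 Ub" "src C Ub = J" "trg C Ub = J" and Vb: "cell1 Vb" "src C Vb = J" "trg C Vb = J"
  and iU: "cell2 iU" "dom2 C iU = v \<odot> Ub" "cod2 C iU = U \<odot> v"
  and pV: "cell2 pV" "dom2 C pV = V \<odot> v" "cod2 C pV = v \<odot> Vb"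
  and Th: "cell2 \<Theta>" "dom2 C \<Theta> = Vb" "cod2 C \<Theta> = Ub"
  shows "(U \<rhd> lam) \<cdot> (transpose V pV \<Theta> iU \<lhd> v) = iU \<cdot> ((v \<rhd> \<Theta>) \<cdot> pV)"
proof -
  note [simp] = U V Ub Vb iU pV Th
  have n1: "(U \<rhd> lam) \<cdot> (iU \<lhd> (f \<odot> v)) = iU \<cdot> ((v \<odot> Ub) \<rhd> counit)"
    using whisker_exchange[of counit iU] by simp
  have n2: "((v \<odot> Ub) \<rhd> counit) \<cdot> ((v \<rhd> \<Theta>) \<lhd> (f \<odot> v)) = (v \<rhd> \<Theta>) \<cdot> ((v \<odot> Vb) \<rhd> counit)"
    using whisker_exchange[of counit "v \<rhd> \<Theta>"] by simp
  have n3: "((v \<odot> Vb) \<rhd> counit) \<cdot> (pV \<lhd> (f \<odot> v)) = pV \<cdot> (V \<rhd> lam)"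
    using whisker_exchange[of counit pV] by simp
  have n4: "(V \<rhd> lam) \<cdot> ((V \<rhd> \<eta>) \<lhd> v) = id2 C (V \<odot> v)"
    using arg_cong[OF lam_unit, of "wl C V"] by simp
  show ?thesis by (simp add: vcomp_prefix2[OF n1] vcomp_prefix2[OF n2] vcomp_prefix2[OF n3] n4)
qed

lemma transpose_mu:
  assumes U: "cell1 U" "src C U = k" "trg C U = k" and V: "cell1 V" "src C V = k" "trg C V = k"
  and Ub: "cell1 Ub" "src C Ub = J" "trg C Ub = J" and Vb: "cell1 Vb" "src C Vb = J" "trg C Vb = J"
  and iU: "cell2 iU" "dom2 C iU = v \<odot> Ub" "cod2 C iU = U \<odot> v"
  and pV: "cell2 pV" "dom2 C pV = V \<odot> v" "cod2 C pV = v \<odot> Vb"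
  and Th: "cell2 \<Theta>" "dom2 C \<Theta> = Vb" "cod2 C \<Theta> = Ub"
  shows "(U \<rhd> \<mu>) \<cdot> (transpose V pV \<Theta> iU \<lhd> t) = (iU \<lhd> f) \<cdot> (((v \<rhd> \<Theta>) \<lhd> f) \<cdot> (pV \<lhd> f))"
  using arg_cong[OF transpose_action[OF assms], of "\<lambda>x. x \<lhd> f"] assms by simp

lemma action_whisker: assumes W: "cell1 W" "src C W = k" "trg C W = k"
  and ph: "cell2 \<phi>" "dom2 C \<phi> = t \<odot> W" "cod2 C \<phi> = W \<odot> t"
  and rh: "cell2 \<rho>" "cod2 C \<rho> = W \<odot> t" "cell1 (dom2 C \<rho>)" "src C (dom2 C \<rho>) = k" "trg C (dom2 C \<rho>) = k"
  shows "(W \<rhd> lam) \<cdot> (((W \<rhd> \<mu>) \<cdot> ((\<phi> \<lhd> t) \<cdot> (t \<rhd> \<rho>))) \<lhd> v) =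
    (W \<rhd> lam) \<cdot> ((\<phi> \<lhd> v) \<cdot> (t \<rhd> ((W \<rhd> lam) \<cdot> (\<rho> \<lhd> v))))"
proof -
  have n1: "(\<phi> \<lhd> v) \<cdot> ((t \<odot> W) \<rhd> lam) = ((W \<odot> t) \<rhd> lam) \<cdot> (\<phi> \<lhd> (t \<odot> v))"
    using whisker_exchange[of lam \<phi>] W ph by simp
  have n2: "(W \<rhd> lam) \<cdot> ((W \<odot> t) \<rhd> lam) = (W \<rhd> lam) \<cdot> ((W \<rhd> \<mu>) \<lhd> v)"
    using arg_cong[OF lam_assoc, of "wl C W"] W by simp
  show ?thesis using W ph rh by (simp add: vcomp_prefix2[OF n1] vcomp_prefix2[OF n2])
qed

lemma action_whisker_unit: assumes W: "cell1 W" "src C W = k" "trg C W = k"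
  and ph: "cell2 \<phi>" "dom2 C \<phi> = t \<odot> W" "cod2 C \<phi> = W \<odot> t"
  and rh: "cell2 X" "cod2 C X = W \<odot> t" "cell1 (dom2 C X)" "src C (dom2 C X) = k" "trg C (dom2 C X) = k"
  shows "(W \<rhd> lam) \<cdot> (((W \<rhd> \<mu>) \<cdot> ((\<phi> \<lhd> t) \<cdot> ((\<eta> \<lhd> (W \<odot> t)) \<cdot> X))) \<lhd> v) =
    lift_idem W \<phi> \<cdot> ((W \<rhd> lam) \<cdot> (X \<lhd> v))"
proof -
  have n1: "((W \<odot> t) \<rhd> lam) \<cdot> (\<phi> \<lhd> (t \<odot> v)) = (\<phi> \<lhd> v) \<cdot> ((t \<odot> W) \<rhd> lam)"
    using whisker_exchange[of lam \<phi>] W ph by simp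
  have n2: "(W \<rhd> lam) \<cdot> ((W \<rhd> \<mu>) \<lhd> v) = (W \<rhd> lam) \<cdot> ((W \<odot> t) \<rhd> lam)"
    using arg_cong[OF lam_assoc, of "wl C W"] W by simp
  have n3: "((t \<odot> W) \<rhd> lam) \<cdot> (\<eta> \<lhd> (W \<odot> t \<odot> v)) = (\<eta> \<lhd> (W \<odot> v)) \<cdot> (W \<rhd> lam)"
    using whisker_exchange[of "W \<rhd> lam" \<eta>] W by simp
  show ?thesis using W ph rh unfolding lift_idem_def
    by (simp add: vcomp_prefix2[OF n1] vcomp_prefix2[OF n2] vcomp_prefix2[OF n3])
qed

end

section \<open>Comonad laws for a 2-cell t c \<Rightarrow> c t\<close>

locale comonad_setting = em_setting +
  fixes c \<delta> \<epsilon>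
  assumes comonad: "is_comonad C k c \<delta> \<epsilon>"
begin

lemma c_cell[simp]: "cell1 c" "src C c = k" "trg C c = k"
  using comonad unfolding is_comonad_def hom1_def by auto
lemma delta_cell[simp]: "cell2 \<delta>" "dom2 C \<delta> = c" "cod2 C \<delta> = c \<odot> c"
  using comonad unfolding is_comonad_def hom2_def by auto
lemma eps_cell[simp]: "cell2 \<epsilon>" "dom2 C \<epsilon> = c" "cod2 C \<epsilon> = id1 C k"
  using comonad unfolding is_comonad_def hom2_def by auto
lemma delta_coassoc: "(\<delta> \<lhd> c) \<cdot> \<delta> = (c \<rhd> \<delta>) \<cdot> \<delta>" and eps_delta_left: "(\<epsilon> \<lhd> c) \<cdot> \<delta> = id2 C c"
  and eps_delta_right: "(c \<rhd> \<epsilon>) \<cdot> \<delta> = id2 C c"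
  using comonad unfolding is_comonad_def by auto

(* The comonad laws of ((c,\<psi>),\<delta>,\<epsilon>) in Mnd^\<iota>(K) (prefix iota), in Mnd^\<pi>(K) (prefix pi), and the
   strict law of (3)(i); the counit laws of (2)(i) and (3)(i) agree. *)
abbreviation iota_delta_law where
  "iota_delta_law \<psi> \<equiv> (\<delta> \<lhd> t) \<cdot> \<psi> = ((c \<odot> c) \<rhd> \<mu>) \<cdot> (((c \<rhd> \<psi>) \<lhd> t) \<cdot> ((\<psi> \<lhd> (c \<odot> t)) \<cdot>
     (((t \<rhd> \<delta>) \<lhd> t) \<cdot> ((t \<rhd> \<psi>) \<cdot> ((t \<rhd> \<eta>) \<lhd> c)))))"
abbreviation iota_eps_law where
  "iota_eps_law \<psi> \<equiv> (\<epsilon> \<lhd> t) \<cdot> \<psi> = \<mu> \<cdot> (((t \<rhd> \<epsilon>) \<lhd> t) \<cdot> ((t \<rhd> \<psi>) \<cdot> ((t \<rhd> \<eta>) \<lhd> c)))"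
abbreviation pi_delta_law where
  "pi_delta_law \<psi> \<equiv> (c \<rhd> \<psi>) \<cdot> ((\<psi> \<lhd> c) \<cdot> (t \<rhd> \<delta>)) = ((c \<odot> c) \<rhd> \<mu>) \<cdot> (((c \<rhd> \<psi>) \<lhd> t) \<cdot>
     ((\<psi> \<lhd> (c \<odot> t)) \<cdot> ((\<eta> \<lhd> (c \<odot> c \<odot> t)) \<cdot> ((\<delta> \<lhd> t) \<cdot> \<psi>))))"
abbreviation pi_eps_law where
  "pi_eps_law \<psi> \<equiv> t \<rhd> \<epsilon> = (\<epsilon> \<lhd> t) \<cdot> \<psi>"
abbreviation strict_delta_law where
  "strict_delta_law \<psi> \<equiv> (c \<rhd> \<psi>) \<cdot> ((\<psi> \<lhd> c) \<cdot> (t \<rhd> \<delta>)) = (\<delta> \<lhd> t) \<cdot> \<psi>"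

abbreviation iota_emw_delta where
  "iota_emw_delta \<psi> \<equiv> (\<delta> \<lhd> t) \<cdot> (\<psi> \<cdot> (\<eta> \<lhd> c))"
abbreviation iota_emw_eps where
  "iota_emw_eps \<psi> \<equiv> (\<epsilon> \<lhd> t) \<cdot> (\<psi> \<cdot> (\<eta> \<lhd> c))"
abbreviation pi_emw_delta where
  "pi_emw_delta \<psi> \<equiv> (c \<rhd> \<psi>) \<cdot> ((\<psi> \<lhd> c) \<cdot> ((\<eta> \<lhd> (c \<odot> c)) \<cdot> \<delta>))"
abbreviation pi_emw_eps where
  "pi_emw_eps \<equiv> \<eta> \<cdot> \<epsilon>"

lemma mult_law_iff: "mult_law C t \<mu> c \<psi> \<longleftrightarrow> mnd_1cell c \<psi>"
  unfolding mult_law_def mnd_1cell_def hom2_def by auto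

lemma mnd_1cell_of_emw_comonad: "emw_comonad C k t \<mu> \<eta> c \<psi> D E \<Longrightarrow> mnd_1cell c \<psi>"
  unfolding emw_comonad_def Let_def emw_1cell_def mnd_1cell_def hom2_def by simp

lemma iota_laws_of_emw_comonad: assumes law: "mnd_1cell c \<psi>"
  and emw: "emw_comonad C k t \<mu> \<eta> c \<psi> (iota_emw_delta \<psi>) (iota_emw_eps \<psi>)"
  shows "iota_delta_law \<psi>" "iota_eps_law \<psi>"
proof -
  note h = mnd_1cellD[OF law]
  note [simp] = h(1-6)
  have delta_2cell: "((c \<odot> c) \<rhd> \<mu>) \<cdot> (((iota_emw_delta \<psi>) \<lhd> t) \<cdot> \<psi>) =
      ((c \<odot> c) \<rhd> \<mu>) \<cdot> ((((c \<rhd> \<psi>) \<cdot> (\<psi> \<lhd> c)) \<lhd> t) \<cdot> (t \<rhd> (iota_emw_delta \<psi>)))"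
    using emw unfolding emw_comonad_def emw_2cell_def Let_def by blast
  have e: "(id1 C k \<rhd> \<mu>) \<cdot> (((iota_emw_eps \<psi>) \<lhd> t) \<cdot> \<psi>) = (id1 C k \<rhd> \<mu>) \<cdot> ((id2 C t \<lhd> t) \<cdot> (t \<rhd> (iota_emw_eps \<psi>)))"
    using emw unfolding emw_comonad_def emw_2cell_def Let_def by blast
  have delta_mu_exchange: "((c \<odot> c) \<rhd> \<mu>) \<cdot> (\<delta> \<lhd> (t \<odot> t)) = (\<delta> \<lhd> t) \<cdot> (c \<rhd> \<mu>)" using whisker_exchange[of \<mu> \<delta>]
    by simp
  have eps_mu_exchange: "\<mu> \<cdot> (\<epsilon> \<lhd> (t \<odot> t)) = (\<epsilon> \<lhd> t) \<cdot> (c \<rhd> \<mu>)" using whisker_exchange[of \<mu> \<epsilon>] by simp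
  have g: "(c \<rhd> \<mu>) \<cdot> ((\<psi> \<lhd> t) \<cdot> ((\<eta> \<lhd> (c \<odot> t)) \<cdot> \<psi>)) = \<psi>" using mnd_1cell_unit[OF law] .
  show "iota_delta_law \<psi>"
    using delta_2cell by (simp add: vcomp_prefix2[OF delta_mu_exchange] g)
  show "iota_eps_law \<psi>"
    using e by (simp add: vcomp_prefix2[OF eps_mu_exchange] g)
qed

lemma pi_laws_of_emw_comonad: assumes law: "mnd_1cell c \<psi>"
  and emw: "emw_comonad C k t \<mu> \<eta> c \<psi> (pi_emw_delta \<psi>) pi_emw_eps"
  shows "pi_delta_law \<psi>" "pi_eps_law \<psi>"
proof -
  note h = mnd_1cellD[OF law]
  note [simp] = h(1-6)
  have delta_2cell: "((c \<odot> c) \<rhd> \<mu>) \<cdot> (((pi_emw_delta \<psi>) \<lhd> t) \<cdot> \<psi>) =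
      ((c \<odot> c) \<rhd> \<mu>) \<cdot> ((((c \<rhd> \<psi>) \<cdot> (\<psi> \<lhd> c)) \<lhd> t) \<cdot> (t \<rhd> (pi_emw_delta \<psi>)))"
    using emw unfolding emw_comonad_def emw_2cell_def Let_def by blast
  have e: "(id1 C k \<rhd> \<mu>) \<cdot> (((\<eta> \<cdot> \<epsilon>) \<lhd> t) \<cdot> \<psi>) = (id1 C k \<rhd> \<mu>) \<cdot> ((id2 C t \<lhd> t) \<cdot> (t \<rhd> (\<eta> \<cdot> \<epsilon>)))"
    using emw unfolding emw_comonad_def emw_2cell_def Let_def by blast
  note m2 = mnd_1cellD(7)[OF mnd_1cell_comp[OF law law], simplified]
  show "pi_delta_law \<psi>"
  proof -
    have "(c \<rhd> \<psi>) \<cdot> ((\<psi> \<lhd> c) \<cdot> (t \<rhd> \<delta>)) = (c \<rhd> \<psi>) \<cdot> ((\<psi> \<lhd> c) \<cdot> (((\<mu> \<cdot> (t \<rhd> \<eta>)) \<lhd> (c \<odot> c)) \<cdot> (t \<rhd> \<delta>)))"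
      by (simp add: mu_eta_right)
    also have "\<dots> = ((c \<odot> c) \<rhd> \<mu>) \<cdot> (((c \<rhd> \<psi>) \<lhd> t) \<cdot> ((\<psi> \<lhd> (c \<odot> t)) \<cdot> ((\<eta> \<lhd> (c \<odot> c \<odot> t)) \<cdot> ((\<delta> \<lhd> t) \<cdot> \<psi>))))"
      using delta_2cell by (simp add: vcomp_prefix3[OF m2[symmetric]])
    finally show ?thesis .
  qed
  show "pi_eps_law \<psi>" using e by (simp add: vcomp_prefix2[OF mu_eta_right] vcomp_prefix2[OF mu_eta_left])
qed

lemma laws_of_strict_laws: assumes law: "mnd_1cell c \<psi>" and D3: "strict_delta_law \<psi>"
  and E3: "pi_eps_law \<psi>"
  shows "iota_delta_law \<psi>" "iota_eps_law \<psi>" "pi_delta_law \<psi>"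
proof -
  note h = mnd_1cellD[OF law]
  note [simp] = h(1-6)
  note m2 = mnd_1cellD(7)[OF mnd_1cell_comp[OF law law], simplified]
  note g2 = mnd_1cell_unit[OF mnd_1cell_comp[OF law law], simplified]
  note D3t = arg_cong[OF D3, of "wl C t", simplified]
  note E3t = arg_cong[OF E3, of "wl C t", simplified]
  have n1: "(\<mu> \<lhd> (c \<odot> c)) \<cdot> ((t \<odot> t) \<rhd> \<delta>) = (t \<rhd> \<delta>) \<cdot> (\<mu> \<lhd> c)" using whisker_exchange[of \<delta> \<mu>] by simp
  have u: "(\<mu> \<lhd> c) \<cdot> ((t \<rhd> \<eta>) \<lhd> c) = id2 C (t \<odot> c)" using arg_cong[OF mu_eta_right, of "\<lambda>x. x \<lhd> c"] by simp
  have n2: "\<mu> \<cdot> ((t \<odot> t) \<rhd> \<epsilon>) = (t \<rhd> \<epsilon>) \<cdot> (\<mu> \<lhd> c)" using whisker_exchange[of \<epsilon> \<mu>] by simp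
  show "iota_delta_law \<psi>"
    apply (simp add: vcomp_prefix2[OF D3t[symmetric]])
    apply (simp add: vcomp_prefix5[OF m2] vcomp_prefix2[OF n1] u)
    apply (simp add: D3)
    done
  show "iota_eps_law \<psi>"
    apply (simp add: vcomp_prefix2[OF E3t[symmetric]])
    apply (simp add: vcomp_prefix2[OF n2] u)
    apply (simp add: E3)
    done
  show "pi_delta_law \<psi>"
    by (simp add: D3[symmetric] vcomp_prefix6[OF g2])
qed

lemma strict_delta_law_of_laws: assumes law: "mnd_1cell c \<psi>"
  and D1: "iota_delta_law \<psi>"
  and D2: "pi_delta_law \<psi>"
  shows "strict_delta_law \<psi>"
proof -
  note h = mnd_1cellD[OF law]
  note [simp] = h(1-6)
  note g2 = mnd_1cell_unit_mu[OF mnd_1cell_comp[OF law law], simplified]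
  show ?thesis unfolding D2 apply (simp only: D1)
    apply (simp add: vcomp_prefix7[OF g2])
    done
qed

end

section \<open>Weak liftings of c\<close>

locale weak_lift = comonad_setting +
  fixes cb \<iota> \<pi>
  assumes cb_cell[simp]: "cell1 cb" "src C cb = J" "trg C cb = J"
  and iota_cell[simp]: "cell2 \<iota>" "dom2 C \<iota> = v \<odot> cb" "cod2 C \<iota> = c \<odot> v"
  and pi_cell[simp]: "cell2 \<pi>" "dom2 C \<pi> = c \<odot> v" "cod2 C \<pi> = v \<odot> cb"
  and pi_iota: "\<pi> \<cdot> \<iota> = id2 C (v \<odot> cb)"
begin

lemma is_weak_lifting: "weak_lifting C J v c cb \<iota> \<pi>"
  unfolding weak_lifting_def hom1_def hom2_def by (simp add: pi_iota)

abbreviation "iota2 \<equiv> (c \<rhd> \<iota>) \<cdot> (\<iota> \<lhd> cb)"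
abbreviation "pi2 \<equiv> (\<pi> \<lhd> cb) \<cdot> (c \<rhd> \<pi>)"

abbreviation iota_lifts_delta where
  "iota_lifts_delta db \<equiv> iota2 \<cdot> (v \<rhd> db) = (\<delta> \<lhd> v) \<cdot> \<iota>"
abbreviation iota_lifts_eps where
  "iota_lifts_eps eb \<equiv> v \<rhd> eb = (\<epsilon> \<lhd> v) \<cdot> \<iota>"
abbreviation pi_lifts_delta where
  "pi_lifts_delta db \<equiv> (v \<rhd> db) \<cdot> \<pi> = pi2 \<cdot> (\<delta> \<lhd> v)"
abbreviation pi_lifts_eps where
  "pi_lifts_eps eb \<equiv> (v \<rhd> eb) \<cdot> \<pi> = \<epsilon> \<lhd> v"

lemma pi2_iota2: "pi2 \<cdot> iota2 = id2 C (v \<odot> cb \<odot> cb)"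
proof -
  have a: "(c \<rhd> \<pi>) \<cdot> (c \<rhd> \<iota>) = id2 C (c \<odot> v \<odot> cb)" using arg_cong[OF pi_iota, of "wl C c"] by simp
  have b: "(\<pi> \<lhd> cb) \<cdot> (\<iota> \<lhd> cb) = id2 C (v \<odot> cb \<odot> cb)" using arg_cong[OF pi_iota, of "\<lambda>x. x \<lhd> cb"] by simp
  show ?thesis by (simp add: vcomp_prefix2[OF a] b)
qed

lemma iota_cancel: "cell2 x \<Longrightarrow> cell2 y \<Longrightarrow> cod2 C x = v \<odot> cb \<Longrightarrow> cod2 C y = v \<odot> cb \<Longrightarrow> \<iota> \<cdot> x = \<iota> \<cdot> y \<Longrightarrow> x = y"
  by (metis pi_iota vcomp_assoc vcomp_id2_left iota_cell pi_cell)

lemma pi_cancel: "cell2 x \<Longrightarrow> cell2 y \<Longrightarrow> dom2 C x = v \<odot> cb \<Longrightarrow> dom2 C y = v \<odot> cb \<Longrightarrow> x \<cdot> \<pi> = y \<cdot> \<pi> \<Longrightarrow> x = y"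
  by (metis pi_iota vcomp_assoc vcomp_id2_right iota_cell pi_cell)

abbreviation "iota3 \<equiv> ((c \<odot> c) \<rhd> \<iota>) \<cdot> (((c \<rhd> \<iota>) \<lhd> cb) \<cdot> (\<iota> \<lhd> (cb \<odot> cb)))"
abbreviation "pi3 \<equiv> (\<pi> \<lhd> (cb \<odot> cb)) \<cdot> (((c \<rhd> \<pi>) \<lhd> cb) \<cdot> ((c \<odot> c) \<rhd> \<pi>))"

lemma pi3_iota3: "pi3 \<cdot> iota3 = id2 C (v \<odot> cb \<odot> cb \<odot> cb)"
proof -
  have a: "((c \<odot> c) \<rhd> \<pi>) \<cdot> ((c \<odot> c) \<rhd> \<iota>) = id2 C (c \<odot> c \<odot> v \<odot> cb)"
    using arg_cong[OF pi_iota, of "wl C (c \<odot> c)"] by simp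
  have b: "((c \<rhd> \<pi>) \<lhd> cb) \<cdot> ((c \<rhd> \<iota>) \<lhd> cb) = id2 C (c \<odot> v \<odot> cb \<odot> cb)"
    using arg_cong[OF pi_iota, of "\<lambda>x. (c \<rhd> x) \<lhd> cb"] by simp
  have d: "(\<pi> \<lhd> (cb \<odot> cb)) \<cdot> (\<iota> \<lhd> (cb \<odot> cb)) = id2 C (v \<odot> cb \<odot> cb \<odot> cb)"
    using arg_cong[OF pi_iota, of "\<lambda>x. x \<lhd> (cb \<odot> cb)"] by simp
  show ?thesis by (simp add: vcomp_prefix2[OF a] vcomp_prefix2[OF b] d)
qed

lemma iota3_cancel: "cell2 x \<Longrightarrow> cell2 y \<Longrightarrow> cod2 C x = v \<odot> cb \<odot> cb \<odot> cb \<Longrightarrow> cod2 C y = v \<odot> cb \<odot> cb \<odot> cb \<Longrightarrow>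
    iota3 \<cdot> x = iota3 \<cdot> y \<Longrightarrow> x = y"
proof -
  assume h: "cell2 x" "cell2 y" "cod2 C x = v \<odot> cb \<odot> cb \<odot> cb" "cod2 C y = v \<odot> cb \<odot> cb \<odot> cb" "iota3 \<cdot> x = iota3 \<cdot> y"
  have "x = (pi3 \<cdot> iota3) \<cdot> x" using h by (simp add: pi3_iota3)
  also have "\<dots> = pi3 \<cdot> (iota3 \<cdot> x)" using h by simp
  also have "\<dots> = pi3 \<cdot> (iota3 \<cdot> y)" using h by simp
  also have "\<dots> = (pi3 \<cdot> iota3) \<cdot> y" using h by simp
  also have "\<dots> = y" using h by (simp add: pi3_iota3)
  finally show ?thesis .
qed

lemma delta_coassoc_v: "(\<delta> \<lhd> (c \<odot> v)) \<cdot> (\<delta> \<lhd> v) = ((c \<rhd> \<delta>) \<lhd> v) \<cdot> (\<delta> \<lhd> v)"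
  using arg_cong[OF delta_coassoc, of "\<lambda>x. x \<lhd> v"] by simp

(* A law between 2-cells into J is checked after whiskering with v, which is faithful on such
   2-cells; there the split monos \<iota>, iota3 (resp. split epis \<pi>, pi3) can be cancelled. *)
lemma iota_lifting_coassoc:
  assumes dbT: "cell2 db" "dom2 C db = cb" "cod2 C db = cb \<odot> cb"
  and idb: "iota_lifts_delta db"
  shows "(db \<lhd> cb) \<cdot> db = (cb \<rhd> db) \<cdot> db"
proof -
  note [simp] = dbT
  have idb': "(c \<rhd> \<iota>) \<cdot> ((\<iota> \<lhd> cb) \<cdot> (v \<rhd> db)) = (\<delta> \<lhd> v) \<cdot> \<iota>" using idb by simp
  have i1: "((c \<rhd> \<iota>) \<lhd> cb) \<cdot> ((\<iota> \<lhd> (cb \<odot> cb)) \<cdot> ((v \<rhd> db) \<lhd> cb)) = (\<delta> \<lhd> (v \<odot> cb)) \<cdot> (\<iota> \<lhd> cb)"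
    using arg_cong[OF idb', of "\<lambda>x. x \<lhd> cb"] by simp
  have i2: "((c \<odot> c) \<rhd> \<iota>) \<cdot> (((c \<rhd> \<iota>) \<lhd> cb) \<cdot> ((c \<odot> v) \<rhd> db)) = ((c \<rhd> \<delta>) \<lhd> v) \<cdot> (c \<rhd> \<iota>)"
    using arg_cong[OF idb', of "wl C c"] by simp
  have n1: "((c \<odot> c) \<rhd> \<iota>) \<cdot> (\<delta> \<lhd> (v \<odot> cb)) = (\<delta> \<lhd> (c \<odot> v)) \<cdot> (c \<rhd> \<iota>)"
    using whisker_exchange[of \<iota> \<delta>] by simp
  have n2: "(\<iota> \<lhd> (cb \<odot> cb)) \<cdot> ((v \<odot> cb) \<rhd> db) = ((c \<odot> v) \<rhd> db) \<cdot> (\<iota> \<lhd> cb)"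
    using whisker_exchange[of db \<iota>] by simp
  show ?thesis
  proof (rule v_faithful)
    show "v \<rhd> ((db \<lhd> cb) \<cdot> db) = v \<rhd> ((cb \<rhd> db) \<cdot> db)"
    proof (rule iota3_cancel)
      have "iota3 \<cdot> (v \<rhd> ((db \<lhd> cb) \<cdot> db)) = (\<delta> \<lhd> (c \<odot> v)) \<cdot> ((\<delta> \<lhd> v) \<cdot> \<iota>)"
        by (simp add: vcomp_prefix3[OF i1] vcomp_prefix2[OF n1] idb')
      also have "\<dots> = ((c \<rhd> \<delta>) \<lhd> v) \<cdot> ((\<delta> \<lhd> v) \<cdot> \<iota>)" by (simp add: vcomp_prefix2[OF delta_coassoc_v])
      also have "\<dots> = iota3 \<cdot> (v \<rhd> ((cb \<rhd> db) \<cdot> db))"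
        by (simp add: vcomp_prefix2[OF n2] vcomp_prefix3[OF i2] idb')
      finally show "iota3 \<cdot> (v \<rhd> ((db \<lhd> cb) \<cdot> db)) = iota3 \<cdot> (v \<rhd> ((cb \<rhd> db) \<cdot> db))" .
    qed simp_all
  qed simp_all
qed

lemma iota_lifting_counit:
  assumes dbT: "cell2 db" "dom2 C db = cb" "cod2 C db = cb \<odot> cb"
  and ebT: "cell2 eb" "dom2 C eb = cb" "cod2 C eb = id1 C J"
  and idb: "iota_lifts_delta db"
  and ieb: "iota_lifts_eps eb"
  shows "(eb \<lhd> cb) \<cdot> db = id2 C cb" "(cb \<rhd> eb) \<cdot> db = id2 C cb"
proof -
  note [simp] = dbT ebT
  have idb': "(c \<rhd> \<iota>) \<cdot> ((\<iota> \<lhd> cb) \<cdot> (v \<rhd> db)) = (\<delta> \<lhd> v) \<cdot> \<iota>" using idb by simp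
  have e1: "\<iota> \<cdot> ((v \<rhd> eb) \<lhd> cb) = (\<epsilon> \<lhd> (c \<odot> v)) \<cdot> ((c \<rhd> \<iota>) \<cdot> (\<iota> \<lhd> cb))"
  proof -
    have n: "\<iota> \<cdot> (\<epsilon> \<lhd> (v \<odot> cb)) = (\<epsilon> \<lhd> (c \<odot> v)) \<cdot> (c \<rhd> \<iota>)" using whisker_exchange[of \<iota> \<epsilon>] by simp
    show ?thesis by (simp add: ieb vcomp_prefix2[OF n])
  qed
  show "(eb \<lhd> cb) \<cdot> db = id2 C cb"
  proof (rule v_faithful)
    show "v \<rhd> ((eb \<lhd> cb) \<cdot> db) = v \<rhd> id2 C cb"
    proof (rule iota_cancel)
      have "\<iota> \<cdot> (v \<rhd> ((eb \<lhd> cb) \<cdot> db)) = (\<epsilon> \<lhd> (c \<odot> v)) \<cdot> ((\<delta> \<lhd> v) \<cdot> \<iota>)"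
        by (simp add: vcomp_prefix2[OF e1] idb')
      also have "\<dots> = ((\<epsilon> \<lhd> c) \<cdot> \<delta>) \<lhd> v \<cdot> \<iota>" by simp
      also have "\<dots> = \<iota> \<cdot> (v \<rhd> id2 C cb)" by (simp add: eps_delta_left)
      finally show "\<iota> \<cdot> (v \<rhd> ((eb \<lhd> cb) \<cdot> db)) = \<iota> \<cdot> (v \<rhd> id2 C cb)" .
    qed simp_all
  qed simp_all
  have e2: "\<iota> \<cdot> ((v \<odot> cb) \<rhd> eb) = ((c \<rhd> \<epsilon>) \<lhd> v) \<cdot> ((c \<rhd> \<iota>) \<cdot> (\<iota> \<lhd> cb))"
  proof -
    have n: "\<iota> \<cdot> ((v \<odot> cb) \<rhd> eb) = ((c \<odot> v) \<rhd> eb) \<cdot> (\<iota> \<lhd> cb)" using whisker_exchange[of eb \<iota>] by simp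
    have m: "(c \<odot> v) \<rhd> eb = ((c \<rhd> \<epsilon>) \<lhd> v) \<cdot> (c \<rhd> \<iota>)" using arg_cong[OF ieb, of "wl C c"] by simp
    show ?thesis by (simp add: n m)
  qed
  show "(cb \<rhd> eb) \<cdot> db = id2 C cb"
  proof (rule v_faithful)
    show "v \<rhd> ((cb \<rhd> eb) \<cdot> db) = v \<rhd> id2 C cb"
    proof (rule iota_cancel)
      have "\<iota> \<cdot> (v \<rhd> ((cb \<rhd> eb) \<cdot> db)) = ((c \<rhd> \<epsilon>) \<lhd> v) \<cdot> ((\<delta> \<lhd> v) \<cdot> \<iota>)"
        by (simp add: vcomp_prefix2[OF e2] idb')
      also have "\<dots> = ((c \<rhd> \<epsilon>) \<cdot> \<delta>) \<lhd> v \<cdot> \<iota>" by simp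
      also have "\<dots> = \<iota> \<cdot> (v \<rhd> id2 C cb)" by (simp add: eps_delta_right)
      finally show "\<iota> \<cdot> (v \<rhd> ((cb \<rhd> eb) \<cdot> db)) = \<iota> \<cdot> (v \<rhd> id2 C cb)" .
    qed simp_all
  qed simp_all
qed

lemma comonad_of_iota_lifting:
  assumes dbT: "cell2 db" "dom2 C db = cb" "cod2 C db = cb \<odot> cb"
  and ebT: "cell2 eb" "dom2 C eb = cb" "cod2 C eb = id1 C J"
  and idb: "iota_lifts_delta db"
  and ieb: "iota_lifts_eps eb"
  shows "is_comonad C J cb db eb"
  unfolding is_comonad_def hom1_def hom2_def
  using iota_lifting_coassoc[OF dbT idb] iota_lifting_counit[OF dbT ebT idb ieb] dbT ebT by simp

lemma pi_lifting_coassoc: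
  assumes dbT: "cell2 db" "dom2 C db = cb" "cod2 C db = cb \<odot> cb"
  and pdb: "pi_lifts_delta db"
  shows "(db \<lhd> cb) \<cdot> db = (cb \<rhd> db) \<cdot> db"
proof -
  note [simp] = dbT
  have pdb': "(v \<rhd> db) \<cdot> \<pi> = (\<pi> \<lhd> cb) \<cdot> ((c \<rhd> \<pi>) \<cdot> (\<delta> \<lhd> v))" using pdb by simp
  have p1: "((v \<rhd> db) \<lhd> cb) \<cdot> (\<pi> \<lhd> cb) = (\<pi> \<lhd> (cb \<odot> cb)) \<cdot> (((c \<rhd> \<pi>) \<lhd> cb) \<cdot> (\<delta> \<lhd> (v \<odot> cb)))"
    using arg_cong[OF pdb', of "\<lambda>x. x \<lhd> cb"] by simp
  have p2: "((c \<odot> v) \<rhd> db) \<cdot> (c \<rhd> \<pi>) = ((c \<rhd> \<pi>) \<lhd> cb) \<cdot> (((c \<odot> c) \<rhd> \<pi>) \<cdot> ((c \<rhd> \<delta>) \<lhd> v))"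
    using arg_cong[OF pdb', of "wl C c"] by simp
  have n1: "(\<delta> \<lhd> (v \<odot> cb)) \<cdot> (c \<rhd> \<pi>) = ((c \<odot> c) \<rhd> \<pi>) \<cdot> (\<delta> \<lhd> (c \<odot> v))"
    using whisker_exchange[of \<pi> \<delta>] by simp
  have n2: "((v \<odot> cb) \<rhd> db) \<cdot> (\<pi> \<lhd> cb) = (\<pi> \<lhd> (cb \<odot> cb)) \<cdot> ((c \<odot> v) \<rhd> db)"
    using whisker_exchange[of db \<pi>] by simp
  show ?thesis
  proof (rule v_faithful)
    show "v \<rhd> ((db \<lhd> cb) \<cdot> db) = v \<rhd> ((cb \<rhd> db) \<cdot> db)"
    proof (rule pi_cancel)
      have "(v \<rhd> ((db \<lhd> cb) \<cdot> db)) \<cdot> \<pi> = pi3 \<cdot> ((\<delta> \<lhd> (c \<odot> v)) \<cdot> (\<delta> \<lhd> v))"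
        by (simp add: pdb' vcomp_prefix2[OF pdb'] vcomp_prefix2[OF p1] vcomp_prefix2[OF n1])
      also have "\<dots> = pi3 \<cdot> (((c \<rhd> \<delta>) \<lhd> v) \<cdot> (\<delta> \<lhd> v))" by (simp add: delta_coassoc_v)
      also have "\<dots> = (v \<rhd> ((cb \<rhd> db) \<cdot> db)) \<cdot> \<pi>"
        by (simp add: pdb' vcomp_prefix2[OF pdb'] vcomp_prefix2[OF n2] vcomp_prefix2[OF p2])
      finally show "(v \<rhd> ((db \<lhd> cb) \<cdot> db)) \<cdot> \<pi> = (v \<rhd> ((cb \<rhd> db) \<cdot> db)) \<cdot> \<pi>" .
    qed simp_all
  qed simp_all
qed

lemma pi_lifting_counit:
  assumes dbT: "cell2 db" "dom2 C db = cb" "cod2 C db = cb \<odot> cb"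
  and ebT: "cell2 eb" "dom2 C eb = cb" "cod2 C eb = id1 C J"
  and pdb: "pi_lifts_delta db"
  and peb: "pi_lifts_eps eb"
  shows "(eb \<lhd> cb) \<cdot> db = id2 C cb" "(cb \<rhd> eb) \<cdot> db = id2 C cb"
proof -
  note [simp] = dbT ebT
  have pdb': "(v \<rhd> db) \<cdot> \<pi> = (\<pi> \<lhd> cb) \<cdot> ((c \<rhd> \<pi>) \<cdot> (\<delta> \<lhd> v))" using pdb by simp
  have peb1: "((v \<rhd> eb) \<lhd> cb) \<cdot> (\<pi> \<lhd> cb) = \<epsilon> \<lhd> (v \<odot> cb)"
    using arg_cong[OF peb, of "\<lambda>x. x \<lhd> cb"] by simp
  have peb2: "((c \<odot> v) \<rhd> eb) \<cdot> (c \<rhd> \<pi>) = (c \<rhd> \<epsilon>) \<lhd> v"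
    using arg_cong[OF peb, of "wl C c"] by simp
  have n3: "(\<epsilon> \<lhd> (v \<odot> cb)) \<cdot> (c \<rhd> \<pi>) = \<pi> \<cdot> (\<epsilon> \<lhd> (c \<odot> v))"
    using whisker_exchange[of \<pi> \<epsilon>] by simp
  have n4: "((v \<odot> cb) \<rhd> eb) \<cdot> (\<pi> \<lhd> cb) = \<pi> \<cdot> ((c \<odot> v) \<rhd> eb)"
    using whisker_exchange[of eb \<pi>] by simp
  show "(eb \<lhd> cb) \<cdot> db = id2 C cb"
  proof (rule v_faithful)
    show "v \<rhd> ((eb \<lhd> cb) \<cdot> db) = v \<rhd> id2 C cb"
    proof (rule pi_cancel)
      have "(v \<rhd> ((eb \<lhd> cb) \<cdot> db)) \<cdot> \<pi> = \<pi> \<cdot> (((\<epsilon> \<lhd> c) \<cdot> \<delta>) \<lhd> v)"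
        by (simp add: pdb' vcomp_prefix2[OF pdb'] vcomp_prefix2[OF peb1] vcomp_prefix2[OF n3])
      also have "\<dots> = (v \<rhd> id2 C cb) \<cdot> \<pi>" by (simp add: eps_delta_left)
      finally show "(v \<rhd> ((eb \<lhd> cb) \<cdot> db)) \<cdot> \<pi> = (v \<rhd> id2 C cb) \<cdot> \<pi>" .
    qed simp_all
  qed simp_all
  show "(cb \<rhd> eb) \<cdot> db = id2 C cb"
  proof (rule v_faithful)
    show "v \<rhd> ((cb \<rhd> eb) \<cdot> db) = v \<rhd> id2 C cb"
    proof (rule pi_cancel)
      have "(v \<rhd> ((cb \<rhd> eb) \<cdot> db)) \<cdot> \<pi> = \<pi> \<cdot> (((c \<rhd> \<epsilon>) \<cdot> \<delta>) \<lhd> v)"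
        by (simp add: pdb' vcomp_prefix2[OF pdb'] vcomp_prefix2[OF n4] vcomp_prefix2[OF peb2])
      also have "\<dots> = (v \<rhd> id2 C cb) \<cdot> \<pi>" by (simp add: eps_delta_right)
      finally show "(v \<rhd> ((cb \<rhd> eb) \<cdot> db)) \<cdot> \<pi> = (v \<rhd> id2 C cb) \<cdot> \<pi>" .
    qed simp_all
  qed simp_all
qed

lemma comonad_of_pi_lifting:
  assumes dbT: "cell2 db" "dom2 C db = cb" "cod2 C db = cb \<odot> cb"
  and ebT: "cell2 eb" "dom2 C eb = cb" "cod2 C eb = id1 C J"
  and pdb: "pi_lifts_delta db"
  and peb: "pi_lifts_eps eb"
  shows "is_comonad C J cb db eb"
  unfolding is_comonad_def hom1_def hom2_def
  using pi_lifting_coassoc[OF dbT pdb] pi_lifting_counit[OF dbT ebT pdb peb] dbT ebT by simp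

definition psi_lift where "psi_lift = (\<iota> \<lhd> f) \<cdot> ((lam \<lhd> (cb \<odot> f)) \<cdot> (((t \<rhd> \<pi>) \<lhd> f) \<cdot> ((t \<odot> c) \<rhd> \<eta>)))"

lemma psi_lift_cell[simp]: "cell2 psi_lift" "dom2 C psi_lift = t \<odot> c" "cod2 C psi_lift = c \<odot> t"
  unfolding psi_lift_def by simp_all

lemma psi_lift_action: "(c \<rhd> lam) \<cdot> (psi_lift \<lhd> v) = \<iota> \<cdot> ((lam \<lhd> cb) \<cdot> (t \<rhd> \<pi>))"
proof -
  have n1: "(c \<rhd> lam) \<cdot> (\<iota> \<lhd> (f \<odot> v)) = \<iota> \<cdot> ((v \<odot> cb) \<rhd> counit)" using whisker_exchange[of counit \<iota>] by simp
  have n2: "((v \<odot> cb) \<rhd> counit) \<cdot> (lam \<lhd> (cb \<odot> f \<odot> v)) = (lam \<lhd> cb) \<cdot> ((t \<odot> v \<odot> cb) \<rhd> counit)"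
    using whisker_exchange[of counit "lam \<lhd> cb"] by simp
  have n3: "((t \<odot> v \<odot> cb) \<rhd> counit) \<cdot> ((t \<rhd> \<pi>) \<lhd> (f \<odot> v)) = (t \<rhd> \<pi>) \<cdot> ((t \<odot> c) \<rhd> lam)"
    using whisker_exchange[of counit "t \<rhd> \<pi>"] by simp
  have u: "((t \<odot> c) \<rhd> lam) \<cdot> (((t \<odot> c) \<rhd> \<eta>) \<lhd> v) = id2 C (t \<odot> c \<odot> v)"
    using arg_cong[OF lam_unit, of "wl C (t \<odot> c)"] by simp
  show ?thesis unfolding psi_lift_def
    by (simp add: vcomp_prefix2[OF n1] vcomp_prefix2[OF n2] vcomp_prefix2[OF n3] u)
qed

lemma pi_iota_f: "(\<pi> \<lhd> f) \<cdot> (\<iota> \<lhd> f) = id2 C (v \<odot> cb \<odot> f)" using arg_cong[OF pi_iota, of "\<lambda>x. x \<lhd> f"] by simp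

lemma t_pi_iota: "(t \<rhd> \<pi>) \<cdot> (t \<rhd> \<iota>) = id2 C (t \<odot> v \<odot> cb)" using arg_cong[OF pi_iota, of "wl C t"] by simp

lemma t_pi_iota_f: "((t \<rhd> \<pi>) \<lhd> f) \<cdot> ((t \<rhd> \<iota>) \<lhd> f) = id2 C (t \<odot> v \<odot> cb \<odot> f)"
  using arg_cong[OF pi_iota, of "\<lambda>x. (t \<rhd> x) \<lhd> f"] by simp

lemma psi_lift_mu: "(c \<rhd> \<mu>) \<cdot> (psi_lift \<lhd> t) = (\<iota> \<lhd> f) \<cdot> ((lam \<lhd> (cb \<odot> f)) \<cdot> ((t \<rhd> \<pi>) \<lhd> f))"
  using arg_cong[OF psi_lift_action, of "\<lambda>x. x \<lhd> f"] by simp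

lemma psi_lift_action_iota: "(c \<rhd> lam) \<cdot> ((psi_lift \<lhd> v) \<cdot> (t \<rhd> \<iota>)) = \<iota> \<cdot> (lam \<lhd> cb)"
  by (simp add: vcomp_prefix2[OF psi_lift_action] t_pi_iota)

lemma psi_lift_mu_iota: "(c \<rhd> \<mu>) \<cdot> ((psi_lift \<lhd> t) \<cdot> ((t \<rhd> \<iota>) \<lhd> f)) = (\<iota> \<lhd> f) \<cdot> (lam \<lhd> (cb \<odot> f))"
  by (simp add: vcomp_prefix2[OF psi_lift_mu] t_pi_iota_f)

lemma pi_psi_lift: "(\<pi> \<lhd> f) \<cdot> psi_lift = (lam \<lhd> (cb \<odot> f)) \<cdot> (((t \<rhd> \<pi>) \<lhd> f) \<cdot> ((t \<odot> c) \<rhd> \<eta>))"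
  unfolding psi_lift_def by (simp add: vcomp_prefix2[OF pi_iota_f])

lemma mnd_1cell_psi_lift: "mnd_1cell c psi_lift"
proof -
  have tp: "t \<rhd> psi_lift = ((t \<rhd> \<iota>) \<lhd> f) \<cdot> (((t \<rhd> lam) \<lhd> (cb \<odot> f)) \<cdot> ((((t \<odot> t) \<rhd> \<pi>) \<lhd> f) \<cdot> ((t \<odot> t \<odot> c) \<rhd> \<eta>)))"
    unfolding psi_lift_def by simp
  have la: "(lam \<lhd> (cb \<odot> f)) \<cdot> ((t \<rhd> lam) \<lhd> (cb \<odot> f)) = (lam \<lhd> (cb \<odot> f)) \<cdot> (\<mu> \<lhd> (v \<odot> cb \<odot> f))"
    using arg_cong[OF lam_assoc, of "\<lambda>x. x \<lhd> (cb \<odot> f)"] by simp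
  have n1: "(\<mu> \<lhd> (v \<odot> cb \<odot> f)) \<cdot> (((t \<odot> t) \<rhd> \<pi>) \<lhd> f) = ((t \<rhd> \<pi>) \<lhd> f) \<cdot> (\<mu> \<lhd> (c \<odot> t))"
    using whisker_exchange[of "\<pi> \<lhd> f" \<mu>] by simp
  have n2: "(\<mu> \<lhd> (c \<odot> t)) \<cdot> ((t \<odot> t \<odot> c) \<rhd> \<eta>) = ((t \<odot> c) \<rhd> \<eta>) \<cdot> (\<mu> \<lhd> c)"
    using whisker_exchange[of "c \<rhd> \<eta>" \<mu>] by simp
  have "(c \<rhd> \<mu>) \<cdot> ((psi_lift \<lhd> t) \<cdot> (t \<rhd> psi_lift)) =
      (\<iota> \<lhd> f) \<cdot> ((lam \<lhd> (cb \<odot> f)) \<cdot> (((t \<rhd> \<pi>) \<lhd> f) \<cdot> (((t \<odot> c) \<rhd> \<eta>) \<cdot> (\<mu> \<lhd> c))))"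
    unfolding tp
      by (simp add: vcomp_prefix2[OF psi_lift_mu] vcomp_prefix2[OF t_pi_iota_f] vcomp_prefix2[OF la] vcomp_prefix2[OF n1] n2)
  also have "\<dots> = psi_lift \<cdot> (\<mu> \<lhd> c)" by (simp add: psi_lift_def)
  finally show ?thesis unfolding mnd_1cell_def by simp
qed

lemma psi_lift_unit_aux: "(lam \<lhd> (cb \<odot> f)) \<cdot> (((t \<rhd> \<pi>) \<lhd> f) \<cdot> (((t \<odot> c) \<rhd> \<eta>) \<cdot> (\<eta> \<lhd> c))) = (\<pi> \<lhd> f) \<cdot> (c \<rhd> \<eta>)"
proof -
  have n1: "((t \<odot> c) \<rhd> \<eta>) \<cdot> (\<eta> \<lhd> c) = (\<eta> \<lhd> (c \<odot> t)) \<cdot> (c \<rhd> \<eta>)" using whisker_exchange[of "c \<rhd> \<eta>" \<eta>] by simp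
  have n2: "((t \<rhd> \<pi>) \<lhd> f) \<cdot> (\<eta> \<lhd> (c \<odot> t)) = (\<eta> \<lhd> (v \<odot> cb \<odot> f)) \<cdot> (\<pi> \<lhd> f)" using whisker_exchange[of "\<pi> \<lhd> f" \<eta>]
    by simp
  have lu: "(lam \<lhd> (cb \<odot> f)) \<cdot> (\<eta> \<lhd> (v \<odot> cb \<odot> f)) = id2 C (v \<odot> cb \<odot> f)"
    using arg_cong[OF lam_unit, of "\<lambda>x. x \<lhd> (cb \<odot> f)"] by simp
  show ?thesis by (simp add: n1 vcomp_prefix2[OF n2] vcomp_prefix2[OF lu])
qed

lemma psi_lift_unit: "psi_lift \<cdot> (\<eta> \<lhd> c) = (\<iota> \<lhd> f) \<cdot> ((\<pi> \<lhd> f) \<cdot> (c \<rhd> \<eta>))"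
  unfolding psi_lift_def by (simp add: psi_lift_unit_aux)

lemma emw_hcomp_transpose: assumes W: "cell1 W" "src C W = k" "trg C W = k"
  and Wb: "cell1 Wb" "src C Wb = J" "trg C Wb = J"
  and iW: "cell2 iW" "dom2 C iW = v \<odot> Wb" "cod2 C iW = W \<odot> v"
    and th: "cell2 th" "dom2 C th = cb" "cod2 C th = Wb"
  and W': "cell1 W'" "src C W' = k" "trg C W' = k" and Wb': "cell1 Wb'" "src C Wb' = J" "trg C Wb' = J"
  and iW': "cell2 iW'" "dom2 C iW' = v \<odot> Wb'" "cod2 C iW' = W' \<odot> v"
    and th': "cell2 th'" "dom2 C th' = cb" "cod2 C th' = Wb'"
  shows "emw_hcomp C t \<mu> W' W c psi_lift (transpose c \<pi> th' iW') (transpose c \<pi> th iW) =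
    transpose (c \<odot> c) pi2 ((Wb' \<rhd> th) \<cdot> (th' \<lhd> cb)) ((W' \<rhd> iW) \<cdot> (iW' \<lhd> Wb))"
proof -
  note [simp] = W Wb iW th W' Wb' iW' th'
  have ab: "(W \<rhd> \<mu>) \<cdot> (((iW \<lhd> f) \<cdot> (((v \<rhd> th) \<lhd> f) \<cdot> ((\<pi> \<lhd> f) \<cdot> (c \<rhd> \<eta>)))) \<lhd> t) = (iW \<lhd> f) \<cdot> (((v \<rhd> th) \<lhd> f) \<cdot> (\<pi> \<lhd> f))"
    by (rule transpose_mu) simp_all
  note abw = arg_cong[OF ab, of "wl C W'", simplified]
  note psw = arg_cong[OF pi_psi_lift, of "wl C W'", simplified]
  have ln0: "(v \<rhd> th) \<cdot> (lam \<lhd> cb) = (lam \<lhd> Wb) \<cdot> ((t \<odot> v) \<rhd> th)" using whisker_exchange[of th lam] by simp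
  note ln = arg_cong[OF ln0, of "\<lambda>x. W' \<rhd> (x \<lhd> f)", simplified]
  define Q where "Q = ((v \<rhd> th) \<lhd> f) \<cdot> ((\<pi> \<lhd> f) \<cdot> (c \<rhd> \<eta>))"
  define \<rho>' where "\<rho>' = (iW' \<lhd> f) \<cdot> (((v \<rhd> th') \<lhd> f) \<cdot> ((\<pi> \<lhd> f) \<cdot> (c \<rhd> \<eta>)))"
  have QT: "cell2 Q" "dom2 C Q = c" "cod2 C Q = v \<odot> Wb \<odot> f" unfolding Q_def by simp_all
  have rT: "cell2 \<rho>'" "dom2 C \<rho>' = c" "cod2 C \<rho>' = W' \<odot> t" unfolding \<rho>'_def by simp_all
  have nq0: "((W' \<odot> t) \<rhd> Q) \<cdot> (\<rho>' \<lhd> c) = (\<rho>' \<lhd> (v \<odot> Wb \<odot> f)) \<cdot> (c \<rhd> Q)"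
    using whisker_exchange[of Q \<rho>'] QT rT by simp
  note nq = nq0[unfolded Q_def \<rho>'_def, simplified]
  have rv0: "(W' \<rhd> lam) \<cdot> (((iW' \<lhd> f) \<cdot> (((v \<rhd> th') \<lhd> f) \<cdot> ((\<pi> \<lhd> f) \<cdot> (c \<rhd> \<eta>)))) \<lhd> v) = iW' \<cdot> ((v \<rhd> th') \<cdot> \<pi>)"
    by (rule transpose_action) simp_all
  note rv = arg_cong[OF rv0, of "\<lambda>x. x \<lhd> (Wb \<odot> f)", simplified]
  have n60: "((v \<odot> cb) \<rhd> th) \<cdot> (\<pi> \<lhd> cb) = (\<pi> \<lhd> Wb) \<cdot> ((c \<odot> v) \<rhd> th)" using whisker_exchange[of th \<pi>] by simp
  note n6 = arg_cong[OF n60, of "\<lambda>x. x \<lhd> f", simplified, symmetric]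
  have n70: "((v \<odot> Wb') \<rhd> th) \<cdot> ((v \<rhd> th') \<lhd> cb) = ((v \<rhd> th') \<lhd> Wb) \<cdot> ((v \<odot> cb) \<rhd> th)"
    using whisker_exchange[of th "v \<rhd> th'"] by simp
  note n7 = arg_cong[OF n70, of "\<lambda>x. x \<lhd> f", simplified, symmetric]
  show ?thesis unfolding emw_hcomp_def
    by (simp add: vcomp_prefix5[OF abw] vcomp_prefix2[OF psw] vcomp_prefix2[OF ln] nq
      vcomp_prefix5[OF rv] vcomp_prefix2[OF n6] vcomp_prefix2[OF n7])
qed

lemma emw_2cell_transpose: assumes X: "cell1 X" "src C X = k" "trg C X = k"
  and Xb: "cell1 Xb" "src C Xb = J" "trg C Xb = J"
  and iX: "cell2 iX" "dom2 C iX = v \<odot> Xb" "cod2 C iX = X \<odot> v"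
    and th: "cell2 th" "dom2 C th = cb" "cod2 C th = Xb"
  and ph: "cell2 phX" "dom2 C phX = t \<odot> X" "cod2 C phX = X \<odot> t"
  and S2X: "(X \<rhd> \<mu>) \<cdot> ((phX \<lhd> t) \<cdot> ((t \<rhd> iX) \<lhd> f)) = (iX \<lhd> f) \<cdot> (lam \<lhd> (Xb \<odot> f))"
  shows "emw_2cell C t \<mu> \<eta> c psi_lift X phX (transpose c \<pi> th iX)"
proof -
  note [simp] = X Xb iX th ph
  define \<rho> where "\<rho> = (iX \<lhd> f) \<cdot> (((v \<rhd> th) \<lhd> f) \<cdot> ((\<pi> \<lhd> f) \<cdot> (c \<rhd> \<eta>)))"
  have rT[simp]: "cell2 \<rho>" "dom2 C \<rho> = c" "cod2 C \<rho> = X \<odot> t" unfolding \<rho>_def by simp_all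
  have ab: "(X \<rhd> \<mu>) \<cdot> (\<rho> \<lhd> t) = (iX \<lhd> f) \<cdot> (((v \<rhd> th) \<lhd> f) \<cdot> (\<pi> \<lhd> f))"
    unfolding \<rho>_def by (rule transpose_mu) simp_all
  have ln0: "(v \<rhd> th) \<cdot> (lam \<lhd> cb) = (lam \<lhd> Xb) \<cdot> ((t \<odot> v) \<rhd> th)" using whisker_exchange[of th lam] by simp
  note lnf = arg_cong[OF ln0, of "\<lambda>x. x \<lhd> f", simplified, symmetric]
  have a: "(X \<rhd> \<mu>) \<cdot> ((\<rho> \<lhd> t) \<cdot> psi_lift) =
      (iX \<lhd> f) \<cdot> (((v \<rhd> th) \<lhd> f) \<cdot> ((lam \<lhd> (cb \<odot> f)) \<cdot> (((t \<rhd> \<pi>) \<lhd> f) \<cdot> ((t \<odot> c) \<rhd> \<eta>))))"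
  proof -
    have "(X \<rhd> \<mu>) \<cdot> ((\<rho> \<lhd> t) \<cdot> psi_lift) = ((X \<rhd> \<mu>) \<cdot> (\<rho> \<lhd> t)) \<cdot> psi_lift" by simp
    also have "\<dots> = ((iX \<lhd> f) \<cdot> (((v \<rhd> th) \<lhd> f) \<cdot> (\<pi> \<lhd> f))) \<cdot> psi_lift" by (simp only: ab)
    also have "\<dots> = (iX \<lhd> f) \<cdot> (((v \<rhd> th) \<lhd> f) \<cdot> ((lam \<lhd> (cb \<odot> f)) \<cdot> (((t \<rhd> \<pi>) \<lhd> f) \<cdot> ((t \<odot> c) \<rhd> \<eta>))))"
      by (simp add: pi_psi_lift)
    finally show ?thesis .
  qed
  have b: "(X \<rhd> \<mu>) \<cdot> ((phX \<lhd> t) \<cdot> (t \<rhd> \<rho>)) =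
      (iX \<lhd> f) \<cdot> (((v \<rhd> th) \<lhd> f) \<cdot> ((lam \<lhd> (cb \<odot> f)) \<cdot> (((t \<rhd> \<pi>) \<lhd> f) \<cdot> ((t \<odot> c) \<rhd> \<eta>))))"
    unfolding \<rho>_def by (simp add: vcomp_prefix3[OF S2X] vcomp_prefix2[OF lnf])
  have nr: "(\<eta> \<lhd> (X \<odot> t)) \<cdot> \<rho> = (t \<rhd> \<rho>) \<cdot> (\<eta> \<lhd> c)" using whisker_exchange[of \<rho> \<eta>] by simp
  have c: "\<rho> = (X \<rhd> \<mu>) \<cdot> ((phX \<lhd> t) \<cdot> ((\<eta> \<lhd> (X \<odot> t)) \<cdot> \<rho>))"
  proof -
    have "(X \<rhd> \<mu>) \<cdot> ((phX \<lhd> t) \<cdot> ((\<eta> \<lhd> (X \<odot> t)) \<cdot> \<rho>)) = ((X \<rhd> \<mu>) \<cdot> ((phX \<lhd> t) \<cdot> (t \<rhd> \<rho>))) \<cdot> (\<eta> \<lhd> c)"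
      by (simp add: nr)
    also have "\<dots> = \<rho>" unfolding b by (simp add: psi_lift_unit_aux \<rho>_def)
    finally show ?thesis by simp
  qed
  show ?thesis unfolding emw_2cell_def hom2_def \<rho>_def[symmetric] using a b c by simp
qed

lemma psi_lift2_mu_iota2:
  "((c \<odot> c) \<rhd> \<mu>) \<cdot> (((c \<rhd> psi_lift) \<lhd> t) \<cdot> ((psi_lift \<lhd> (c \<odot> t)) \<cdot> ((((t \<odot> c) \<rhd> \<iota>) \<lhd> f) \<cdot> ((t \<rhd> \<iota>) \<lhd> (cb \<odot> f))))) =
   ((c \<rhd> \<iota>) \<lhd> f) \<cdot> ((\<iota> \<lhd> (cb \<odot> f)) \<cdot> (lam \<lhd> (cb \<odot> cb \<odot> f)))"
proof -
  have n: "(psi_lift \<lhd> (c \<odot> t)) \<cdot> (((t \<odot> c) \<rhd> \<iota>) \<lhd> f) = (((c \<odot> t) \<rhd> \<iota>) \<lhd> f) \<cdot> (psi_lift \<lhd> (v \<odot> cb \<odot> f))"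
    using whisker_exchange[of "\<iota> \<lhd> f" psi_lift] by simp
  note s2c = arg_cong[OF psi_lift_mu_iota, of "wl C c", simplified]
  note s1c = arg_cong[OF psi_lift_action_iota, of "\<lambda>x. x \<lhd> (cb \<odot> f)", simplified]
  show ?thesis apply (simp add: vcomp_prefix2[OF n])
    apply (simp add: vcomp_prefix3[OF s2c])
    apply (simp add: s1c)
    done
qed

abbreviation emw_delta where "emw_delta db \<equiv> transpose c \<pi> db iota2"
abbreviation emw_eps where "emw_eps eb \<equiv> transpose c \<pi> eb (id2 C v)"
abbreviation emw_unit where "emw_unit \<equiv> transpose c \<pi> (id2 C cb) \<iota>"

lemma emw_id_psi_lift: "emw_id C \<eta> c psi_lift = emw_unit"
  unfolding emw_id_def by (simp add: psi_lift_unit)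

lemma emw_vcomp_transpose:
  assumes U: "cell1 U" "src C U = k" "trg C U = k"
    and Th: "cell2 \<Theta>" "dom2 C \<Theta> = cb \<odot> cb" "trg C (cod2 C \<Theta>) = J"
    and iU: "cell2 iU" "dom2 C iU = v \<odot> cod2 C \<Theta>" "cod2 C iU = U \<odot> v"
    and db: "cell2 db" "dom2 C db = cb" "cod2 C db = cb \<odot> cb"
  shows "emw_vcomp C t \<mu> U (transpose (c \<odot> c) pi2 \<Theta> iU) (emw_delta db) = transpose c \<pi> (\<Theta> \<cdot> db) iU"
proof -
  note [simp] = U iU Th db
  note inv = arg_cong[OF pi2_iota2, of "\<lambda>x. x \<lhd> f", simplified]
  have mu: "(U \<rhd> \<mu>) \<cdot> (transpose (c \<odot> c) pi2 \<Theta> iU \<lhd> t) = (iU \<lhd> f) \<cdot> (((v \<rhd> \<Theta>) \<lhd> f) \<cdot> (pi2 \<lhd> f))"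
    by (rule transpose_mu[where Ub = "cod2 C \<Theta>" and Vb = "cb \<odot> cb"]) simp_all
  have "emw_vcomp C t \<mu> U (transpose (c \<odot> c) pi2 \<Theta> iU) (emw_delta db) =
      ((U \<rhd> \<mu>) \<cdot> (transpose (c \<odot> c) pi2 \<Theta> iU \<lhd> t)) \<cdot> emw_delta db"
    unfolding emw_vcomp_def by simp
  also have "\<dots> = ((iU \<lhd> f) \<cdot> (((v \<rhd> \<Theta>) \<lhd> f) \<cdot> (pi2 \<lhd> f))) \<cdot> emw_delta db"
    by (simp only: mu)
  also have "\<dots> = transpose c \<pi> (\<Theta> \<cdot> db) iU"
    by (simp add: vcomp_prefix4[OF inv])
  finally show ?thesis .
qed

lemma emw_coassoc_psi_lift:
  assumes db: "cell2 db" "dom2 C db = cb" "cod2 C db = cb \<odot> cb"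
    and coassoc: "(db \<lhd> cb) \<cdot> db = (cb \<rhd> db) \<cdot> db"
  shows "emw_vcomp C t \<mu> ((c \<odot> c) \<odot> c) (emw_hcomp C t \<mu> (c \<odot> c) c c psi_lift (emw_delta db) emw_unit)
      (emw_delta db) =
    emw_vcomp C t \<mu> (c \<odot> (c \<odot> c)) (emw_hcomp C t \<mu> c (c \<odot> c) c psi_lift emw_unit (emw_delta db))
      (emw_delta db)"
proof -
  note [simp] = db
  note coassoc_v = arg_cong[OF coassoc, of "\<lambda>x. (v \<rhd> x) \<lhd> f", simplified]
  have left: "emw_hcomp C t \<mu> (c \<odot> c) c c psi_lift (emw_delta db) emw_unit =
      transpose (c \<odot> c) pi2 (((cb \<odot> cb) \<rhd> id2 C cb) \<cdot> (db \<lhd> cb)) (((c \<odot> c) \<rhd> \<iota>) \<cdot> (iota2 \<lhd> cb))"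
    by (rule emw_hcomp_transpose) simp_all
  have right: "emw_hcomp C t \<mu> c (c \<odot> c) c psi_lift emw_unit (emw_delta db) =
      transpose (c \<odot> c) pi2 ((cb \<rhd> db) \<cdot> (id2 C cb \<lhd> cb)) ((c \<rhd> iota2) \<cdot> (\<iota> \<lhd> (cb \<odot> cb)))"
    by (rule emw_hcomp_transpose) simp_all
  have "emw_vcomp C t \<mu> ((c \<odot> c) \<odot> c) (emw_hcomp C t \<mu> (c \<odot> c) c c psi_lift (emw_delta db) emw_unit)
      (emw_delta db) =
      transpose c \<pi> ((((cb \<odot> cb) \<rhd> id2 C cb) \<cdot> (db \<lhd> cb)) \<cdot> db) (((c \<odot> c) \<rhd> \<iota>) \<cdot> (iota2 \<lhd> cb))"
    unfolding left by (rule emw_vcomp_transpose) simp_all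
  also have "\<dots> = transpose c \<pi> (((cb \<rhd> db) \<cdot> (id2 C cb \<lhd> cb)) \<cdot> db) ((c \<rhd> iota2) \<cdot> (\<iota> \<lhd> (cb \<odot> cb)))"
    by (simp add: vcomp_prefix2[OF coassoc_v])
  also have "\<dots> = emw_vcomp C t \<mu> (c \<odot> (c \<odot> c)) (emw_hcomp C t \<mu> c (c \<odot> c) c psi_lift emw_unit (emw_delta db))
      (emw_delta db)"
    unfolding right by (rule emw_vcomp_transpose[symmetric]) simp_all
  finally show ?thesis .
qed

lemma emw_counit_psi_lift:
  assumes db: "cell2 db" "dom2 C db = cb" "cod2 C db = cb \<odot> cb"
    and eb: "cell2 eb" "dom2 C eb = cb" "cod2 C eb = id1 C J"
    and counit_left: "(eb \<lhd> cb) \<cdot> db = id2 C cb" and counit_right: "(cb \<rhd> eb) \<cdot> db = id2 C cb"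
  shows "emw_vcomp C t \<mu> (id1 C k \<odot> c) (emw_hcomp C t \<mu> (id1 C k) c c psi_lift (emw_eps eb) emw_unit)
      (emw_delta db) = emw_unit"
    and "emw_vcomp C t \<mu> (c \<odot> id1 C k) (emw_hcomp C t \<mu> c (id1 C k) c psi_lift emw_unit (emw_eps eb))
      (emw_delta db) = emw_unit"
proof -
  note [simp] = db eb
  note left_v = arg_cong[OF counit_left, of "\<lambda>x. (v \<rhd> x) \<lhd> f", simplified]
  note right_v = arg_cong[OF counit_right, of "\<lambda>x. (v \<rhd> x) \<lhd> f", simplified]
  have left: "emw_hcomp C t \<mu> (id1 C k) c c psi_lift (emw_eps eb) emw_unit =
      transpose (c \<odot> c) pi2 ((id1 C J \<rhd> id2 C cb) \<cdot> (eb \<lhd> cb)) ((id1 C k \<rhd> \<iota>) \<cdot> (id2 C v \<lhd> cb))"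
    by (rule emw_hcomp_transpose) simp_all
  have "emw_vcomp C t \<mu> (id1 C k \<odot> c) (emw_hcomp C t \<mu> (id1 C k) c c psi_lift (emw_eps eb) emw_unit)
      (emw_delta db) =
      transpose c \<pi> (((id1 C J \<rhd> id2 C cb) \<cdot> (eb \<lhd> cb)) \<cdot> db) ((id1 C k \<rhd> \<iota>) \<cdot> (id2 C v \<lhd> cb))"
    unfolding left by (rule emw_vcomp_transpose) simp_all
  also have "\<dots> = emw_unit"
    by (simp add: vcomp_prefix2[OF left_v])
  finally show "emw_vcomp C t \<mu> (id1 C k \<odot> c) (emw_hcomp C t \<mu> (id1 C k) c c psi_lift (emw_eps eb) emw_unit)
      (emw_delta db) = emw_unit" .
  have right: "emw_hcomp C t \<mu> c (id1 C k) c psi_lift emw_unit (emw_eps eb) =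
      transpose (c \<odot> c) pi2 ((cb \<rhd> eb) \<cdot> (id2 C cb \<lhd> cb)) ((c \<rhd> id2 C v) \<cdot> (\<iota> \<lhd> id1 C J))"
    by (rule emw_hcomp_transpose) simp_all
  have "emw_vcomp C t \<mu> (c \<odot> id1 C k) (emw_hcomp C t \<mu> c (id1 C k) c psi_lift emw_unit (emw_eps eb))
      (emw_delta db) =
      transpose c \<pi> (((cb \<rhd> eb) \<cdot> (id2 C cb \<lhd> cb)) \<cdot> db) ((c \<rhd> id2 C v) \<cdot> (\<iota> \<lhd> id1 C J))"
    unfolding right by (rule emw_vcomp_transpose) simp_all
  also have "\<dots> = emw_unit"
    by (simp add: vcomp_prefix2[OF right_v])
  finally show "emw_vcomp C t \<mu> (c \<odot> id1 C k) (emw_hcomp C t \<mu> c (id1 C k) c psi_lift emw_unit (emw_eps eb))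
      (emw_delta db) = emw_unit" .
qed

lemma emw_comonad_psi_lift:
  assumes "is_comonad C J cb db eb"
  shows "emw_comonad C k t \<mu> \<eta> c psi_lift (emw_delta db) (emw_eps eb)"
proof -
  have db[simp]: "cell2 db" "dom2 C db = cb" "cod2 C db = cb \<odot> cb"
    and eb[simp]: "cell2 eb" "dom2 C eb = cb" "cod2 C eb = id1 C J"
    and coassoc: "(db \<lhd> cb) \<cdot> db = (cb \<rhd> db) \<cdot> db"
    and counit: "(eb \<lhd> cb) \<cdot> db = id2 C cb" "(cb \<rhd> eb) \<cdot> db = id2 C cb"
    using assms unfolding is_comonad_def hom2_def by auto
  have "emw_1cell C t \<mu> c psi_lift"
    using mnd_1cell_psi_lift unfolding mnd_1cell_def emw_1cell_def hom2_def by simp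
  moreover have "emw_2cell C t \<mu> \<eta> c psi_lift (c \<odot> c) ((c \<rhd> psi_lift) \<cdot> (psi_lift \<lhd> c)) (emw_delta db)"
    by (rule emw_2cell_transpose[where Xb = "cb \<odot> cb"]) (simp_all add: psi_lift2_mu_iota2)
  moreover have "emw_2cell C t \<mu> \<eta> c psi_lift (id1 C k) (id2 C t) (emw_eps eb)"
    by (rule emw_2cell_transpose[where Xb = "id1 C J"]) simp_all
  ultimately show ?thesis
    unfolding emw_comonad_def Let_def emw_id_psi_lift
    using emw_coassoc_psi_lift[OF db coassoc] emw_counit_psi_lift[OF db eb counit] by blast
qed

lemma delta_iota_transpose: assumes dbT: "cell2 db" "dom2 C db = cb" "cod2 C db = cb \<odot> cb"
  and idb: "iota_lifts_delta db"
  shows "iota_emw_delta psi_lift = emw_delta db"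
proof -
  note [simp] = dbT
  note idbf = arg_cong[OF idb, of "\<lambda>x. x \<lhd> f", simplified]
  show ?thesis by (simp add: psi_lift_unit vcomp_prefix3[OF idbf])
qed

lemma eps_iota_transpose: assumes ebT: "cell2 eb" "dom2 C eb = cb" "cod2 C eb = id1 C J"
  and ieb: "iota_lifts_eps eb"
  shows "iota_emw_eps psi_lift = emw_eps eb"
proof -
  note [simp] = ebT
  note iebf = arg_cong[OF ieb, of "\<lambda>x. x \<lhd> f", simplified]
  show ?thesis by (simp add: psi_lift_unit iebf)
qed

lemma psi_lift2_unit: "(c \<rhd> psi_lift) \<cdot> ((psi_lift \<lhd> c) \<cdot> (\<eta> \<lhd> (c \<odot> c))) =
  ((c \<rhd> \<iota>) \<lhd> f) \<cdot> ((\<iota> \<lhd> (cb \<odot> f)) \<cdot> ((\<pi> \<lhd> (cb \<odot> f)) \<cdot> (((c \<rhd> \<pi>) \<lhd> f) \<cdot> ((c \<odot> c) \<rhd> \<eta>))))"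
proof -
  note s4c = arg_cong[OF psi_lift_unit, of "\<lambda>x. x \<lhd> c", simplified]
  have c_psi_lift: "c \<rhd> psi_lift = ((c \<rhd> \<iota>) \<lhd> f) \<cdot> (((c \<rhd> lam) \<lhd> (cb \<odot> f)) \<cdot> ((((c \<odot> t) \<rhd> \<pi>) \<lhd> f) \<cdot> ((c \<odot> t \<odot> c) \<rhd> \<eta>)))"
    unfolding psi_lift_def by simp
  have n1: "((c \<odot> t \<odot> c) \<rhd> \<eta>) \<cdot> (\<iota> \<lhd> (f \<odot> c)) = (\<iota> \<lhd> (f \<odot> c \<odot> t)) \<cdot> ((v \<odot> cb \<odot> f \<odot> c) \<rhd> \<eta>)"
    using whisker_exchange[of \<eta> "\<iota> \<lhd> (f \<odot> c)"] by simp
  have n2: "(((c \<odot> t) \<rhd> \<pi>) \<lhd> f) \<cdot> (\<iota> \<lhd> (f \<odot> c \<odot> t)) = (\<iota> \<lhd> (f \<odot> v \<odot> cb \<odot> f)) \<cdot> (((v \<odot> cb \<odot> f) \<rhd> \<pi>) \<lhd> f)"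
    using whisker_exchange[of "\<pi> \<lhd> f" "\<iota> \<lhd> f"] by simp
  have n30: "(c \<rhd> lam) \<cdot> (\<iota> \<lhd> (f \<odot> v)) = \<iota> \<cdot> ((v \<odot> cb) \<rhd> counit)" using whisker_exchange[of counit \<iota>] by simp
  note n3 = arg_cong[OF n30, of "\<lambda>x. x \<lhd> (cb \<odot> f)", simplified]
  have n4: "((v \<odot> cb \<odot> f \<odot> c) \<rhd> \<eta>) \<cdot> (\<pi> \<lhd> (f \<odot> c)) = (\<pi> \<lhd> (f \<odot> c \<odot> t)) \<cdot> ((c \<odot> v \<odot> f \<odot> c) \<rhd> \<eta>)"
    using whisker_exchange[of \<eta> "\<pi> \<lhd> (f \<odot> c)"] by simp
  have n5: "(((v \<odot> cb \<odot> f) \<rhd> \<pi>) \<lhd> f) \<cdot> (\<pi> \<lhd> (f \<odot> c \<odot> t)) = (\<pi> \<lhd> (f \<odot> v \<odot> cb \<odot> f)) \<cdot> (((c \<odot> v \<odot> f) \<rhd> \<pi>) \<lhd> f)"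
    using whisker_exchange[of "\<pi> \<lhd> f" "\<pi> \<lhd> f"] by simp
  have n60: "((v \<odot> cb) \<rhd> counit) \<cdot> (\<pi> \<lhd> (f \<odot> v)) = \<pi> \<cdot> (c \<rhd> lam)" using whisker_exchange[of counit \<pi>] by simp
  note n6 = arg_cong[OF n60, of "\<lambda>x. x \<lhd> (cb \<odot> f)", simplified]
  note pe0c = arg_cong[OF psi_lift_unit_aux, of "wl C c", simplified]
  show ?thesis unfolding c_psi_lift
    apply (simp add: s4c)
    apply (simp add: vcomp_prefix2[OF n1])
    apply (simp add: vcomp_prefix2[OF n2])
    apply (simp add: vcomp_prefix2[OF n3])
    apply (simp add: vcomp_prefix2[OF n4])
    apply (simp add: vcomp_prefix2[OF n5])
    apply (simp add: vcomp_prefix2[OF n6])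
    apply (simp add: pe0c)
    done
qed

lemma delta_pi_transpose: assumes dbT: "cell2 db" "dom2 C db = cb" "cod2 C db = cb \<odot> cb"
  and pdb: "pi_lifts_delta db"
  shows "pi_emw_delta psi_lift = emw_delta db"
proof -
  note [simp] = dbT
  note pdbf = arg_cong[OF pdb, of "\<lambda>x. x \<lhd> f", simplified]
  have n: "((c \<odot> c) \<rhd> \<eta>) \<cdot> \<delta> = (\<delta> \<lhd> t) \<cdot> (c \<rhd> \<eta>)" using whisker_exchange[of \<eta> \<delta>] by simp
  show ?thesis by (simp add: vcomp_prefix3[OF psi_lift2_unit] n vcomp_prefix3[OF pdbf[symmetric]])
qed

lemma eps_pi_transpose: assumes ebT: "cell2 eb" "dom2 C eb = cb" "cod2 C eb = id1 C J"
  and peb: "pi_lifts_eps eb"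
  shows "pi_emw_eps = emw_eps eb"
proof -
  note [simp] = ebT
  note pebf = arg_cong[OF peb, of "\<lambda>x. x \<lhd> f", simplified]
  have n: "\<eta> \<cdot> \<epsilon> = (\<epsilon> \<lhd> t) \<cdot> (c \<rhd> \<eta>)" using whisker_exchange[of \<eta> \<epsilon>] by simp
  show ?thesis by (simp add: vcomp_prefix2[OF pebf] n)
qed

lemma emw_comonad_of_iota_lifting:
  assumes comonad: "is_comonad C J cb db eb" and "iota_lifts_delta db" "iota_lifts_eps eb"
  shows "emw_comonad C k t \<mu> \<eta> c psi_lift (iota_emw_delta psi_lift) (iota_emw_eps psi_lift)"
proof -
  have db: "cell2 db" "dom2 C db = cb" "cod2 C db = cb \<odot> cb"
    and eb: "cell2 eb" "dom2 C eb = cb" "cod2 C eb = id1 C J"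
    using comonad unfolding is_comonad_def hom2_def by auto
  show ?thesis
    using emw_comonad_psi_lift[OF comonad]
    by (simp only: delta_iota_transpose[OF db assms(2)] eps_iota_transpose[OF eb assms(3)])
qed

lemma emw_comonad_of_pi_lifting:
  assumes comonad: "is_comonad C J cb db eb" and "pi_lifts_delta db" "pi_lifts_eps eb"
  shows "emw_comonad C k t \<mu> \<eta> c psi_lift (pi_emw_delta psi_lift) pi_emw_eps"
proof -
  have db: "cell2 db" "dom2 C db = cb" "cod2 C db = cb \<odot> cb"
    and eb: "cell2 eb" "dom2 C eb = cb" "cod2 C eb = id1 C J"
    using comonad unfolding is_comonad_def hom2_def by auto
  show ?thesis
    using emw_comonad_psi_lift[OF comonad]
    by (simp only: delta_pi_transpose[OF db assms(2)] eps_pi_transpose[OF eb assms(3)])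
qed

end

section \<open>The weak lifting induced by a 2-cell t c \<Rightarrow> c t\<close>

locale split_lift = weak_lift +
  fixes \<psi>
  assumes law: "mnd_1cell c \<psi>"
    and iota_pi: "\<iota> \<cdot> \<pi> = lift_idem c \<psi>"
    and lam_cb: "lam \<lhd> cb = \<pi> \<cdot> ((c \<rhd> lam) \<cdot> ((\<psi> \<lhd> v) \<cdot> (t \<rhd> \<iota>)))"
begin

lemma psi_cell[simp]: "cell2 \<psi>" "dom2 C \<psi> = t \<odot> c" "cod2 C \<psi> = c \<odot> t"
  using mnd_1cellD[OF law] by auto
lemma lift_idem_c_cell[simp]:
  "cell2 (lift_idem c \<psi>)" "dom2 C (lift_idem c \<psi>) = c \<odot> v" "cod2 C (lift_idem c \<psi>) = c \<odot> v"
  using lift_idem_cell[OF law] by auto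

abbreviation "psi2 \<equiv> (c \<rhd> \<psi>) \<cdot> (\<psi> \<lhd> c)"

(* The Mnd-laws of \<psi>, transported along v into equations between 2-cells with codomain v. *)
abbreviation iota_delta_action_law where
  "iota_delta_action_law \<equiv> (\<delta> \<lhd> v) \<cdot> ((c \<rhd> lam) \<cdot> (\<psi> \<lhd> v)) =
     ((c \<odot> c) \<rhd> lam) \<cdot> (((c \<rhd> \<psi>) \<lhd> v) \<cdot> ((\<psi> \<lhd> (c \<odot> v)) \<cdot> (((t \<rhd> \<delta>) \<lhd> v) \<cdot> (t \<rhd> lift_idem c \<psi>))))"
abbreviation iota_eps_action_law where
  "iota_eps_action_law \<equiv> (\<epsilon> \<lhd> v) \<cdot> ((c \<rhd> lam) \<cdot> (\<psi> \<lhd> v)) = lam \<cdot> (((t \<rhd> \<epsilon>) \<lhd> v) \<cdot> (t \<rhd> lift_idem c \<psi>))"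
abbreviation pi_delta_action_law where
  "pi_delta_action_law \<equiv> ((c \<odot> c) \<rhd> lam) \<cdot> (((c \<rhd> \<psi>) \<lhd> v) \<cdot> ((\<psi> \<lhd> (c \<odot> v)) \<cdot> ((t \<rhd> \<delta>) \<lhd> v))) =
     lift_idem (c \<odot> c) psi2 \<cdot> ((\<delta> \<lhd> v) \<cdot> ((c \<rhd> lam) \<cdot> (\<psi> \<lhd> v)))"
abbreviation pi_eps_action_law where
  "pi_eps_action_law \<equiv> (\<epsilon> \<lhd> v) \<cdot> ((c \<rhd> lam) \<cdot> (\<psi> \<lhd> v)) = lam \<cdot> ((t \<rhd> \<epsilon>) \<lhd> v)"

lemma lift_idem_iota: "lift_idem c \<psi> \<cdot> \<iota> = \<iota>"
proof -
  have "lift_idem c \<psi> \<cdot> \<iota> = \<iota> \<cdot> (\<pi> \<cdot> \<iota>)" by (simp flip: iota_pi)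
  then show ?thesis by (simp add: pi_iota)
qed

lemma iota_action_pi: "\<iota> \<cdot> ((lam \<lhd> cb) \<cdot> (t \<rhd> \<pi>)) = (c \<rhd> lam) \<cdot> (\<psi> \<lhd> v)"
proof -
  have tip: "(t \<rhd> \<iota>) \<cdot> (t \<rhd> \<pi>) = t \<rhd> lift_idem c \<psi>"
    using arg_cong[OF iota_pi, of "wl C t"] by simp
  have "\<iota> \<cdot> ((lam \<lhd> cb) \<cdot> (t \<rhd> \<pi>)) = lift_idem c \<psi> \<cdot> ((c \<rhd> lam) \<cdot> ((\<psi> \<lhd> v) \<cdot> (t \<rhd> lift_idem c \<psi>)))"
    by (simp add: lam_cb vcomp_prefix2[OF iota_pi] tip)
  also have "\<dots> = (c \<rhd> lam) \<cdot> (\<psi> \<lhd> v)"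
    by (simp add: lift_idem_absorb_inner[OF law] lift_idem_absorb_outer[OF law])
  finally show ?thesis .
qed

lemma iota_action: "\<iota> \<cdot> (lam \<lhd> cb) = (c \<rhd> lam) \<cdot> ((\<psi> \<lhd> v) \<cdot> (t \<rhd> \<iota>))"
proof -
  have "(c \<rhd> lam) \<cdot> ((\<psi> \<lhd> v) \<cdot> (t \<rhd> \<iota>)) = \<iota> \<cdot> ((lam \<lhd> cb) \<cdot> ((t \<rhd> \<pi>) \<cdot> (t \<rhd> \<iota>)))"
    by (simp add: vcomp_prefix3[OF iota_action_pi])
  then show ?thesis by (simp add: t_pi_iota)
qed

lemma mnd_1cell_psi2: "mnd_1cell (c \<odot> c) psi2" using mnd_1cell_comp[OF law law] .

lemma lift_idem2_cell[simp]: "cell2 (lift_idem (c \<odot> c) psi2)"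
  "dom2 C (lift_idem (c \<odot> c) psi2) = c \<odot> c \<odot> v" "cod2 C (lift_idem (c \<odot> c) psi2) = c \<odot> c \<odot> v"
  using lift_idem_cell[OF mnd_1cell_psi2] by auto

lemma lam_cb2: "lam \<lhd> (cb \<odot> cb) = pi2 \<cdot> (((c \<odot> c) \<rhd> lam) \<cdot> ((psi2 \<lhd> v) \<cdot> (t \<rhd> iota2)))"
proof -
  have l2: "(c \<rhd> lam) \<lhd> cb = (c \<rhd> \<pi>) \<cdot> (((c \<odot> c) \<rhd> lam) \<cdot> (((c \<rhd> \<psi>) \<lhd> v) \<cdot> ((c \<odot> t) \<rhd> \<iota>)))"
    using arg_cong[OF lam_cb, of "wl C c"] by simp
  have n: "((c \<odot> t) \<rhd> \<iota>) \<cdot> (\<psi> \<lhd> (v \<odot> cb)) = (\<psi> \<lhd> (c \<odot> v)) \<cdot> ((t \<odot> c) \<rhd> \<iota>)"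
    using whisker_exchange[of \<iota> \<psi>] by simp
  have "lam \<lhd> (cb \<odot> cb) = (lam \<lhd> cb) \<lhd> cb" by simp
  also have "\<dots> = (\<pi> \<cdot> ((c \<rhd> lam) \<cdot> ((\<psi> \<lhd> v) \<cdot> (t \<rhd> \<iota>)))) \<lhd> cb" by (simp only: lam_cb)
  also have "\<dots> = (\<pi> \<lhd> cb) \<cdot> (((c \<rhd> lam) \<lhd> cb) \<cdot> ((\<psi> \<lhd> (v \<odot> cb)) \<cdot> ((t \<rhd> \<iota>) \<lhd> cb)))" by simp
  also have "\<dots> = pi2 \<cdot> (((c \<odot> c) \<rhd> lam) \<cdot> ((psi2 \<lhd> v) \<cdot> (t \<rhd> iota2)))"
    by (simp add: l2 vcomp_prefix2[OF n])
  finally show ?thesis .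
qed

lemma iota2_pi2: "iota2 \<cdot> pi2 = lift_idem (c \<odot> c) psi2"
proof -
  have ILc: "(c \<rhd> \<iota>) \<cdot> (((c \<rhd> lam) \<lhd> cb) \<cdot> ((c \<odot> t) \<rhd> \<pi>)) = ((c \<odot> c) \<rhd> lam) \<cdot> ((c \<rhd> \<psi>) \<lhd> v)"
    using arg_cong[OF iota_action_pi, of "wl C c"] by simp
  have n1: "(\<eta> \<lhd> (c \<odot> v \<odot> cb)) \<cdot> (c \<rhd> \<pi>) = ((t \<odot> c) \<rhd> \<pi>) \<cdot> (\<eta> \<lhd> (c \<odot> c \<odot> v))"
    using whisker_exchange[of "c \<rhd> \<pi>" \<eta>] by simp
  have n2: "(\<psi> \<lhd> (v \<odot> cb)) \<cdot> ((t \<odot> c) \<rhd> \<pi>) = ((c \<odot> t) \<rhd> \<pi>) \<cdot> (\<psi> \<lhd> (c \<odot> v))"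
    using whisker_exchange[of \<pi> \<psi>] by simp
  have e: "(\<iota> \<lhd> cb) \<cdot> (\<pi> \<lhd> cb) = lift_idem c \<psi> \<lhd> cb" using arg_cong[OF iota_pi, of "\<lambda>x. x \<lhd> cb"] by simp
  have "iota2 \<cdot> pi2 = (c \<rhd> \<iota>) \<cdot> ((lift_idem c \<psi> \<lhd> cb) \<cdot> (c \<rhd> \<pi>))" by (simp add: vcomp_prefix2[OF e])
  also have "\<dots> = (c \<rhd> \<iota>) \<cdot> (((c \<rhd> lam) \<lhd> cb) \<cdot> ((\<psi> \<lhd> (v \<odot> cb)) \<cdot> ((\<eta> \<lhd> (c \<odot> v \<odot> cb)) \<cdot> (c \<rhd> \<pi>))))"
    unfolding lift_idem_def by simp
  also have "\<dots> = lift_idem (c \<odot> c) psi2"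
    unfolding lift_idem_def by (simp add: n1 vcomp_prefix2[OF n2] vcomp_prefix3[OF ILc])
  finally show ?thesis .
qed

lemma delta_lam_exchange: "((c \<odot> c) \<rhd> lam) \<cdot> (\<delta> \<lhd> (t \<odot> v)) = (\<delta> \<lhd> v) \<cdot> (c \<rhd> lam)"
  using whisker_exchange[of lam \<delta>] by simp

lemma eps_lam_exchange: "lam \<cdot> (\<epsilon> \<lhd> (t \<odot> v)) = (\<epsilon> \<lhd> v) \<cdot> (c \<rhd> lam)"
  using whisker_exchange[of lam \<epsilon>] by simp

lemma iota_delta_action: assumes delta_law: "iota_delta_law \<psi>"
  shows "iota_delta_action_law"
proof -
  have transported: "((c \<odot> c) \<rhd> lam) \<cdot> ((((c \<odot> c) \<rhd> \<mu>) \<cdot> ((psi2 \<lhd> t) \<cdot> (t \<rhd> (iota_emw_delta \<psi>)))) \<lhd> v) =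
    ((c \<odot> c) \<rhd> lam) \<cdot> ((psi2 \<lhd> v) \<cdot> (t \<rhd> (((c \<odot> c) \<rhd> lam) \<cdot> ((iota_emw_delta \<psi>) \<lhd> v))))"
    by (rule action_whisker) simp_all
  show ?thesis using transported unfolding lift_idem_def
    by (simp add: delta_law[symmetric] vcomp_prefix2[OF delta_lam_exchange])
qed

lemma iota_eps_action: assumes eps_law: "iota_eps_law \<psi>"
  shows "iota_eps_action_law"
proof -
  have transported: "(id1 C k \<rhd> lam) \<cdot> (((id1 C k \<rhd> \<mu>) \<cdot> ((id2 C t \<lhd> t) \<cdot> (t \<rhd> (iota_emw_eps \<psi>)))) \<lhd> v) =
    (id1 C k \<rhd> lam) \<cdot> ((id2 C t \<lhd> v) \<cdot> (t \<rhd> ((id1 C k \<rhd> lam) \<cdot> ((iota_emw_eps \<psi>) \<lhd> v))))"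
    by (rule action_whisker) simp_all
  show ?thesis using transported unfolding lift_idem_def
    by (simp add: eps_law[symmetric] vcomp_prefix2[OF eps_lam_exchange])
qed

lemma pi_delta_action: assumes delta_law: "pi_delta_law \<psi>"
  shows "pi_delta_action_law"
proof -
  have transported: "((c \<odot> c) \<rhd> lam) \<cdot> ((((c \<odot> c) \<rhd> \<mu>) \<cdot> ((psi2 \<lhd> t) \<cdot> ((\<eta> \<lhd> ((c \<odot> c) \<odot> t)) \<cdot> ((\<delta> \<lhd> t) \<cdot> \<psi>)))) \<lhd> v) =
    lift_idem (c \<odot> c) psi2 \<cdot> (((c \<odot> c) \<rhd> lam) \<cdot> (((\<delta> \<lhd> t) \<cdot> \<psi>) \<lhd> v))"
    by (rule action_whisker_unit) simp_all
  show ?thesis using transported by (simp add: delta_law[symmetric] vcomp_prefix2[OF delta_lam_exchange])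
qed

lemma pi_eps_action: assumes eps_law: "pi_eps_law \<psi>"
  shows "pi_eps_action_law"
proof -
  have "lam \<cdot> ((t \<rhd> \<epsilon>) \<lhd> v) = lam \<cdot> (((\<epsilon> \<lhd> t) \<cdot> \<psi>) \<lhd> v)" by (simp only: eps_law)
  then show ?thesis by (simp add: vcomp_prefix2[OF eps_lam_exchange])
qed

lemma t_lift_idem_iota: "(t \<rhd> lift_idem c \<psi>) \<cdot> (t \<rhd> \<iota>) = t \<rhd> \<iota>"
  using arg_cong[OF lift_idem_iota, of "wl C t"] by simp

lemma pi2_lift_idem2: "(\<pi> \<lhd> cb) \<cdot> ((c \<rhd> \<pi>) \<cdot> lift_idem (c \<odot> c) psi2) = (\<pi> \<lhd> cb) \<cdot> (c \<rhd> \<pi>)"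
proof -
  have "pi2 \<cdot> lift_idem (c \<odot> c) psi2 = (pi2 \<cdot> iota2) \<cdot> pi2" by (simp flip: iota2_pi2)
  then show ?thesis by (simp add: pi2_iota2)
qed

lemma lift_idem2_absorb: "((c \<odot> c) \<rhd> lam) \<cdot> (((c \<rhd> \<psi>) \<lhd> v) \<cdot> ((\<psi> \<lhd> (c \<odot> v)) \<cdot> (t \<rhd> lift_idem (c \<odot> c) psi2))) =
   ((c \<odot> c) \<rhd> lam) \<cdot> (((c \<rhd> \<psi>) \<lhd> v) \<cdot> (\<psi> \<lhd> (c \<odot> v)))"
  using lift_idem_absorb_inner[OF mnd_1cell_psi2] by simp

lemma t_iota2_pi2: "((t \<odot> c) \<rhd> \<iota>) \<cdot> (((t \<rhd> \<iota>) \<lhd> cb) \<cdot> (((t \<rhd> \<pi>) \<lhd> cb) \<cdot> ((t \<odot> c) \<rhd> \<pi>))) = t \<rhd> lift_idem (c \<odot> c) psi2"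
  using arg_cong[OF iota2_pi2, of "wl C t"] by simp

definition "delta_liftable \<longleftrightarrow> pi2 \<cdot> ((\<delta> \<lhd> v) \<cdot> ((c \<rhd> lam) \<cdot> ((\<psi> \<lhd> v) \<cdot> (t \<rhd> \<iota>)))) =
   pi2 \<cdot> (((c \<odot> c) \<rhd> lam) \<cdot> (((c \<rhd> \<psi>) \<lhd> v) \<cdot> ((\<psi> \<lhd> (c \<odot> v)) \<cdot> (((t \<rhd> \<delta>) \<lhd> v) \<cdot> (t \<rhd> \<iota>)))))"
definition "eps_liftable \<longleftrightarrow> (\<epsilon> \<lhd> v) \<cdot> ((c \<rhd> lam) \<cdot> ((\<psi> \<lhd> v) \<cdot> (t \<rhd> \<iota>))) = lam \<cdot> (((t \<rhd> \<epsilon>) \<lhd> v) \<cdot> (t \<rhd> \<iota>))"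

lemma delta_liftable_of_iota: assumes "iota_delta_action_law"
  shows delta_liftable
  unfolding delta_liftable_def by (simp add: vcomp_prefix3[OF assms] t_lift_idem_iota)

lemma delta_liftable_of_pi: assumes "pi_delta_action_law"
  shows delta_liftable
  unfolding delta_liftable_def by (simp add: vcomp_prefix4[OF assms] vcomp_prefix3[OF pi2_lift_idem2])

lemma eps_liftable_of_iota: assumes "iota_eps_action_law"
  shows eps_liftable
  unfolding eps_liftable_def by (simp add: vcomp_prefix3[OF assms] t_lift_idem_iota)

lemma eps_liftable_of_pi: assumes "pi_eps_action_law"
  shows eps_liftable
  unfolding eps_liftable_def by (simp add: vcomp_prefix3[OF assms])

lemma lift_delta_eps: assumes delta_liftable eps_liftable
  shows "\<exists>db eb. cell2 db \<and> dom2 C db = cb \<and> cod2 C db = cb \<odot> cb \<and> cell2 eb \<and> dom2 C eb = cb \<and> cod2 C eb = id1 C J \<and>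
     v \<rhd> db = pi2 \<cdot> ((\<delta> \<lhd> v) \<cdot> \<iota>) \<and> v \<rhd> eb = (\<epsilon> \<lhd> v) \<cdot> \<iota>"
proof -
  have IL2': "\<iota> \<cdot> (lam \<lhd> cb) = (c \<rhd> lam) \<cdot> ((\<psi> \<lhd> v) \<cdot> (t \<rhd> \<iota>))" by (rule iota_action)
  have cd: "(pi2 \<cdot> ((\<delta> \<lhd> v) \<cdot> \<iota>)) \<cdot> (lam \<lhd> cb) = (lam \<lhd> (cb \<odot> cb)) \<cdot> (t \<rhd> (pi2 \<cdot> ((\<delta> \<lhd> v) \<cdot> \<iota>)))"
  proof -
    have "(pi2 \<cdot> ((\<delta> \<lhd> v) \<cdot> \<iota>)) \<cdot> (lam \<lhd> cb) = pi2 \<cdot> ((\<delta> \<lhd> v) \<cdot> ((c \<rhd> lam) \<cdot> ((\<psi> \<lhd> v) \<cdot> (t \<rhd> \<iota>))))"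
      by (simp add: IL2')
    also have "\<dots> = pi2 \<cdot> (((c \<odot> c) \<rhd> lam) \<cdot> (((c \<rhd> \<psi>) \<lhd> v) \<cdot> ((\<psi> \<lhd> (c \<odot> v)) \<cdot> (((t \<rhd> \<delta>) \<lhd> v) \<cdot> (t \<rhd> \<iota>)))))"
      using assms(1) unfolding delta_liftable_def .
    also have "\<dots> = (lam \<lhd> (cb \<odot> cb)) \<cdot> (t \<rhd> (pi2 \<cdot> ((\<delta> \<lhd> v) \<cdot> \<iota>)))"
      by (simp add: lam_cb2 vcomp_prefix4[OF t_iota2_pi2] vcomp_prefix4[OF lift_idem2_absorb])
    finally show ?thesis .
  qed
  have ce: "((\<epsilon> \<lhd> v) \<cdot> \<iota>) \<cdot> (lam \<lhd> cb) = (lam \<lhd> id1 C J) \<cdot> (t \<rhd> ((\<epsilon> \<lhd> v) \<cdot> \<iota>))"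
    using assms(2) unfolding eps_liftable_def by (simp add: IL2')
  obtain db where db: "cell2 db" "dom2 C db = cb" "cod2 C db = cb \<odot> cb" "v \<rhd> db = pi2 \<cdot> ((\<delta> \<lhd> v) \<cdot> \<iota>)"
    using lift_2cell[of cb "cb \<odot> cb" "pi2 \<cdot> ((\<delta> \<lhd> v) \<cdot> \<iota>)"] cd by auto
  obtain eb where eb: "cell2 eb" "dom2 C eb = cb" "cod2 C eb = id1 C J" "v \<rhd> eb = (\<epsilon> \<lhd> v) \<cdot> \<iota>"
    using lift_2cell[of cb "id1 C J" "(\<epsilon> \<lhd> v) \<cdot> \<iota>"] ce by auto
  show ?thesis using db eb by blast
qed

lemma iota2_pi2': "(c \<rhd> \<iota>) \<cdot> ((\<iota> \<lhd> cb) \<cdot> ((\<pi> \<lhd> cb) \<cdot> (c \<rhd> \<pi>))) = lift_idem (c \<odot> c) psi2"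
  using iota2_pi2 by simp

lemma iota_lifting_delta: assumes D: "iota_delta_action_law"
  and db: "v \<rhd> db = pi2 \<cdot> ((\<delta> \<lhd> v) \<cdot> \<iota>)"
  shows "iota_lifts_delta db"
proof -
  have nX: "((t \<rhd> \<delta>) \<lhd> v) \<cdot> ((t \<rhd> lift_idem c \<psi>) \<cdot> (\<eta> \<lhd> (c \<odot> v))) = (\<eta> \<lhd> (c \<odot> c \<odot> v)) \<cdot> ((\<delta> \<lhd> v) \<cdot> lift_idem c \<psi>)"
    using whisker_exchange[of "(\<delta> \<lhd> v) \<cdot> lift_idem c \<psi>" \<eta>] by simp
  have "(\<delta> \<lhd> v) \<cdot> lift_idem c \<psi> = (\<delta> \<lhd> v) \<cdot> ((c \<rhd> lam) \<cdot> ((\<psi> \<lhd> v) \<cdot> (\<eta> \<lhd> (c \<odot> v))))"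
    by (simp add: lift_idem_def[of c \<psi>])
  also have "\<dots> = ((c \<odot> c) \<rhd> lam) \<cdot> (((c \<rhd> \<psi>) \<lhd> v) \<cdot> ((\<psi> \<lhd> (c \<odot> v)) \<cdot> ((\<eta> \<lhd> (c \<odot> c \<odot> v)) \<cdot> ((\<delta> \<lhd> v) \<cdot> lift_idem c \<psi>))))"
    by (simp add: vcomp_prefix3[OF D] nX)
  also have "\<dots> = lift_idem (c \<odot> c) psi2 \<cdot> ((\<delta> \<lhd> v) \<cdot> lift_idem c \<psi>)"
    by (simp add: lift_idem_def[of "c \<odot> c" psi2])
  finally have absorb: "lift_idem (c \<odot> c) psi2 \<cdot> ((\<delta> \<lhd> v) \<cdot> lift_idem c \<psi>) = (\<delta> \<lhd> v) \<cdot> lift_idem c \<psi>" by simp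
  have "iota2 \<cdot> (v \<rhd> db) = lift_idem (c \<odot> c) psi2 \<cdot> ((\<delta> \<lhd> v) \<cdot> (lift_idem c \<psi> \<cdot> \<iota>))"
    by (simp add: db vcomp_prefix4[OF iota2_pi2'] lift_idem_iota)
  also have "\<dots> = (\<delta> \<lhd> v) \<cdot> \<iota>" by (simp add: vcomp_prefix3[OF absorb]) (simp add: lift_idem_iota)
  finally show ?thesis .
qed

lemma pi_lifting_delta: assumes D: "pi_delta_action_law"
  and db: "v \<rhd> db = pi2 \<cdot> ((\<delta> \<lhd> v) \<cdot> \<iota>)"
  shows "pi_lifts_delta db"
proof -
  have nd2: "((t \<rhd> \<delta>) \<lhd> v) \<cdot> (\<eta> \<lhd> (c \<odot> v)) = (\<eta> \<lhd> (c \<odot> c \<odot> v)) \<cdot> (\<delta> \<lhd> v)"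
    using whisker_exchange[of "\<delta> \<lhd> v" \<eta>] by simp
  have "(v \<rhd> db) \<cdot> \<pi> = (\<pi> \<lhd> cb) \<cdot> ((c \<rhd> \<pi>) \<cdot> ((\<delta> \<lhd> v) \<cdot> lift_idem c \<psi>))"
    by (simp add: db iota_pi)
  also have "\<dots> = (\<pi> \<lhd> cb) \<cdot> ((c \<rhd> \<pi>) \<cdot> (lift_idem (c \<odot> c) psi2 \<cdot> ((\<delta> \<lhd> v) \<cdot> ((c \<rhd> lam) \<cdot> ((\<psi> \<lhd> v) \<cdot> (\<eta> \<lhd> (c \<odot> v)))))))"
    by (simp add: vcomp_prefix3[OF pi2_lift_idem2] lift_idem_def[of c \<psi>])
  also have "\<dots> = (\<pi> \<lhd> cb) \<cdot> ((c \<rhd> \<pi>) \<cdot> (((c \<odot> c) \<rhd> lam) \<cdot> (((c \<rhd> \<psi>) \<lhd> v) \<cdot>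
      ((\<psi> \<lhd> (c \<odot> v)) \<cdot> (((t \<rhd> \<delta>) \<lhd> v) \<cdot> (\<eta> \<lhd> (c \<odot> v)))))))"
    by (simp add: vcomp_prefix4[OF D[symmetric]])
  also have "\<dots> = (\<pi> \<lhd> cb) \<cdot> ((c \<rhd> \<pi>) \<cdot> (lift_idem (c \<odot> c) psi2 \<cdot> (\<delta> \<lhd> v)))"
    by (simp add: nd2 lift_idem_def[of "c \<odot> c" psi2])
  also have "\<dots> = pi2 \<cdot> (\<delta> \<lhd> v)" by (simp add: vcomp_prefix3[OF pi2_lift_idem2])
  finally show ?thesis .
qed

lemma pi_lifting_eps: assumes E: "pi_eps_action_law"
  and eb: "v \<rhd> eb = (\<epsilon> \<lhd> v) \<cdot> \<iota>"
  shows "pi_lifts_eps eb"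
proof -
  have ne2: "((t \<rhd> \<epsilon>) \<lhd> v) \<cdot> (\<eta> \<lhd> (c \<odot> v)) = (\<eta> \<lhd> v) \<cdot> (\<epsilon> \<lhd> v)"
    using whisker_exchange[of "\<epsilon> \<lhd> v" \<eta>] by simp
  have "(v \<rhd> eb) \<cdot> \<pi> = (\<epsilon> \<lhd> v) \<cdot> ((c \<rhd> lam) \<cdot> ((\<psi> \<lhd> v) \<cdot> (\<eta> \<lhd> (c \<odot> v))))"
    by (simp add: eb iota_pi lift_idem_def)
  also have "\<dots> = (lam \<cdot> (\<eta> \<lhd> v)) \<cdot> (\<epsilon> \<lhd> v)" by (simp add: vcomp_prefix3[OF E] ne2)
  also have "\<dots> = \<epsilon> \<lhd> v" by (simp add: lam_unit)
  finally show ?thesis .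
qed

lemma iota_lifted_comonad:
  assumes "iota_delta_law \<psi>" "iota_eps_law \<psi>"
  obtains db eb where "is_comonad C J cb db eb" "iota_lifts_delta db" "iota_lifts_eps eb"
proof -
  note D = iota_delta_action[OF assms(1)] and E = iota_eps_action[OF assms(2)]
  obtain db eb where dbe: "cell2 db" "dom2 C db = cb" "cod2 C db = cb \<odot> cb"
      "cell2 eb" "dom2 C eb = cb" "cod2 C eb = id1 C J" "v \<rhd> db = pi2 \<cdot> ((\<delta> \<lhd> v) \<cdot> \<iota>)" "iota_lifts_eps eb"
    using lift_delta_eps[OF delta_liftable_of_iota[OF D] eps_liftable_of_iota[OF E]] by blast
  have delta: "iota_lifts_delta db" using iota_lifting_delta[OF D dbe(7)] .
  have "is_comonad C J cb db eb" using comonad_of_iota_lifting[OF dbe(1-6) delta dbe(8)] .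
  from this delta dbe(8) show thesis by (rule that)
qed

lemma pi_lifted_comonad:
  assumes "pi_delta_law \<psi>" "pi_eps_law \<psi>"
  obtains db eb where "is_comonad C J cb db eb" "pi_lifts_delta db" "pi_lifts_eps eb"
proof -
  note D = pi_delta_action[OF assms(1)] and E = pi_eps_action[OF assms(2)]
  obtain db eb where dbe: "cell2 db" "dom2 C db = cb" "cod2 C db = cb \<odot> cb"
      "cell2 eb" "dom2 C eb = cb" "cod2 C eb = id1 C J" "v \<rhd> db = pi2 \<cdot> ((\<delta> \<lhd> v) \<cdot> \<iota>)" "iota_lifts_eps eb"
    using lift_delta_eps[OF delta_liftable_of_pi[OF D] eps_liftable_of_pi[OF E]] by blast
  have delta: "pi_lifts_delta db" using pi_lifting_delta[OF D dbe(7)] .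
  have eps: "pi_lifts_eps eb" using pi_lifting_eps[OF E dbe(8)] .
  have "is_comonad C J cb db eb" using comonad_of_pi_lifting[OF dbe(1-6) delta eps] .
  from this delta eps show thesis by (rule that)
qed

(* Under the strict laws both kinds of Mnd-laws hold, and the lifting built from the \<iota>-laws
   also satisfies the \<pi>-conditions. *)
lemma strict_lifted_comonad:
  assumes "strict_delta_law \<psi>" "pi_eps_law \<psi>"
  obtains db eb where "is_comonad C J cb db eb" "iota_lifts_delta db" "iota_lifts_eps eb"
    "pi_lifts_delta db" "pi_lifts_eps eb"
proof -
  note laws = laws_of_strict_laws[OF law assms]
  note D1 = iota_delta_action[OF laws(1)] and E1 = iota_eps_action[OF laws(2)]
    and D2 = pi_delta_action[OF laws(3)] and E2 = pi_eps_action[OF assms(2)]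
  obtain db eb where dbe: "cell2 db" "dom2 C db = cb" "cod2 C db = cb \<odot> cb"
      "cell2 eb" "dom2 C eb = cb" "cod2 C eb = id1 C J" "v \<rhd> db = pi2 \<cdot> ((\<delta> \<lhd> v) \<cdot> \<iota>)" "iota_lifts_eps eb"
    using lift_delta_eps[OF delta_liftable_of_iota[OF D1] eps_liftable_of_iota[OF E1]] by blast
  have iota_delta: "iota_lifts_delta db" using iota_lifting_delta[OF D1 dbe(7)] .
  have pi_delta: "pi_lifts_delta db" using pi_lifting_delta[OF D2 dbe(7)] .
  have pi_eps: "pi_lifts_eps eb" using pi_lifting_eps[OF E2 dbe(8)] .
  have "is_comonad C J cb db eb" using comonad_of_iota_lifting[OF dbe(1-6) iota_delta dbe(8)] .
  from this iota_delta dbe(8) pi_delta pi_eps show thesis by (rule that)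
qed

end

context comonad_setting begin

lemma cond1i_iff: "cond1i C k t \<mu> \<eta> c \<delta> \<epsilon> \<longleftrightarrow> (\<exists>\<psi>. mnd_1cell c \<psi> \<and> iota_delta_law \<psi> \<and> iota_eps_law \<psi>)"
  unfolding cond1i_def mult_law_iff by (intro ex_cong1 conj_cong[OF refl]) (auto dest!: mnd_1cell_cell2)

lemma cond2i_iff: "cond2i C k t \<mu> \<eta> c \<delta> \<epsilon> \<longleftrightarrow> (\<exists>\<psi>. mnd_1cell c \<psi> \<and> pi_delta_law \<psi> \<and> pi_eps_law \<psi>)"
  unfolding cond2i_def mult_law_iff by (intro ex_cong1 conj_cong[OF refl]) (auto dest!: mnd_1cell_cell2)

lemma cond3i_iff: "cond3i C k t \<mu> \<eta> c \<delta> \<epsilon> \<longleftrightarrow> (\<exists>\<psi>. mnd_1cell c \<psi> \<and> strict_delta_law \<psi> \<and> pi_eps_law \<psi>)"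
  unfolding cond3i_def mult_law_iff by (intro ex_cong1 conj_cong[OF refl]) (auto dest!: mnd_1cell_cell2)

lemma weak_liftI: "weak_lifting C J v c cb \<iota> \<pi> \<Longrightarrow> weak_lift C k J t v \<mu> \<eta> lam c \<delta> \<epsilon> cb \<iota> \<pi>"
  unfolding weak_lifting_def hom1_def hom2_def by unfold_locales auto

lemma split_lift_exists:
  assumes "idempotents_split C" "mnd_1cell c \<psi>"
  obtains cb \<iota> \<pi> where "split_lift C k J t v \<mu> \<eta> lam c \<delta> \<epsilon> cb \<iota> \<pi> \<psi>"
  using split_lift_idem[OF assms(2,1)]
proof (elim exE conjE)
  fix cb \<iota> \<pi>
  assume cbi: "cell1 cb" "src C cb = J" "trg C cb = J" "cell2 \<iota>" "dom2 C \<iota> = v \<odot> cb" "cod2 C \<iota> = c \<odot> v"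
    "cell2 \<pi>" "dom2 C \<pi> = c \<odot> v" "cod2 C \<pi> = v \<odot> cb" "\<pi> \<cdot> \<iota> = id2 C (v \<odot> cb)" "\<iota> \<cdot> \<pi> = lift_idem c \<psi>"
    "lam \<lhd> cb = \<pi> \<cdot> ((c \<rhd> lam) \<cdot> ((\<psi> \<lhd> v) \<cdot> (t \<rhd> \<iota>)))"
  have "split_lift C k J t v \<mu> \<eta> lam c \<delta> \<epsilon> cb \<iota> \<pi> \<psi>"
    by unfold_locales (simp_all add: cbi assms(2))
  then show thesis by (rule that)
qed

lemma cond1iii_of_cond1i:
  assumes "idempotents_split C" "cond1i C k t \<mu> \<eta> c \<delta> \<epsilon>"
  shows "cond1iii C J v c \<delta> \<epsilon>"
proof -
  obtain \<psi> where law: "mnd_1cell c \<psi>" and laws: "iota_delta_law \<psi>" "iota_eps_law \<psi>"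
    using assms(2) unfolding cond1i_iff by blast
  obtain cb \<iota> \<pi> where "split_lift C k J t v \<mu> \<eta> lam c \<delta> \<epsilon> cb \<iota> \<pi> \<psi>"
    using split_lift_exists[OF assms(1) law] .
  then interpret L: split_lift C k J t v \<mu> \<eta> lam c \<delta> \<epsilon> cb \<iota> \<pi> \<psi> .
  obtain db eb where comonad: "is_comonad C J cb db eb"
    and delta: "L.iota_lifts_delta db" and eps: "L.iota_lifts_eps eb"
    using L.iota_lifted_comonad[OF laws] .
  have "id2 C v \<cdot> (v \<rhd> eb) = (\<epsilon> \<lhd> v) \<cdot> \<iota>"
    using eps comonad by (simp add: is_comonad_def hom2_def)
  then show ?thesis
    unfolding cond1iii_def using L.is_weak_lifting comonad delta by blast
qed

lemma cond1ii_of_cond1iii: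
  assumes "cond1iii C J v c \<delta> \<epsilon>"
  shows "cond1ii C k t \<mu> \<eta> c \<delta> \<epsilon>"
proof -
  obtain cb \<iota> \<pi> db eb where w: "weak_lifting C J v c cb \<iota> \<pi>" and comonad: "is_comonad C J cb db eb"
    and delta: "((c \<rhd> \<iota>) \<cdot> (\<iota> \<lhd> cb)) \<cdot> (v \<rhd> db) = (\<delta> \<lhd> v) \<cdot> \<iota>"
    and eps: "id2 C v \<cdot> (v \<rhd> eb) = (\<epsilon> \<lhd> v) \<cdot> \<iota>"
    using assms unfolding cond1iii_def by blast
  interpret L: weak_lift C k J t v \<mu> \<eta> lam c \<delta> \<epsilon> cb \<iota> \<pi>
    using weak_liftI[OF w] .
  have "L.iota_lifts_eps eb" using eps comonad by (simp add: is_comonad_def hom2_def)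
  then show ?thesis
    unfolding cond1ii_def using L.emw_comonad_of_iota_lifting[OF comonad delta] by blast
qed

lemma cond1i_of_cond1ii:
  assumes "cond1ii C k t \<mu> \<eta> c \<delta> \<epsilon>"
  shows "cond1i C k t \<mu> \<eta> c \<delta> \<epsilon>"
proof -
  obtain \<psi> where emw: "emw_comonad C k t \<mu> \<eta> c \<psi> (iota_emw_delta \<psi>) (iota_emw_eps \<psi>)"
    using assms unfolding cond1ii_def by blast
  have law: "mnd_1cell c \<psi>" using mnd_1cell_of_emw_comonad[OF emw] .
  show ?thesis unfolding cond1i_iff using law iota_laws_of_emw_comonad[OF law emw] by blast
qed

lemma cond2iii_of_cond2i:
  assumes "idempotents_split C" "cond2i C k t \<mu> \<eta> c \<delta> \<epsilon>"
  shows "cond2iii C J v c \<delta> \<epsilon>"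
proof -
  obtain \<psi> where law: "mnd_1cell c \<psi>" and laws: "pi_delta_law \<psi>" "pi_eps_law \<psi>"
    using assms(2) unfolding cond2i_iff by blast
  obtain cb \<iota> \<pi> where "split_lift C k J t v \<mu> \<eta> lam c \<delta> \<epsilon> cb \<iota> \<pi> \<psi>"
    using split_lift_exists[OF assms(1) law] .
  then interpret L: split_lift C k J t v \<mu> \<eta> lam c \<delta> \<epsilon> cb \<iota> \<pi> \<psi> .
  obtain db eb where comonad: "is_comonad C J cb db eb"
    and delta: "L.pi_lifts_delta db" and eps: "L.pi_lifts_eps eb"
    using L.pi_lifted_comonad[OF laws] .
  have "(v \<rhd> eb) \<cdot> \<pi> = id2 C v \<cdot> (\<epsilon> \<lhd> v)"
    using eps by simp
  then show ?thesis
    unfolding cond2iii_def using L.is_weak_lifting comonad delta by blast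
qed

lemma cond2ii_of_cond2iii:
  assumes "cond2iii C J v c \<delta> \<epsilon>"
  shows "cond2ii C k t \<mu> \<eta> c \<delta> \<epsilon>"
proof -
  obtain cb \<iota> \<pi> db eb where w: "weak_lifting C J v c cb \<iota> \<pi>" and comonad: "is_comonad C J cb db eb"
    and delta: "(v \<rhd> db) \<cdot> \<pi> = ((\<pi> \<lhd> cb) \<cdot> (c \<rhd> \<pi>)) \<cdot> (\<delta> \<lhd> v)"
    and eps: "(v \<rhd> eb) \<cdot> \<pi> = id2 C v \<cdot> (\<epsilon> \<lhd> v)"
    using assms unfolding cond2iii_def by blast
  interpret L: weak_lift C k J t v \<mu> \<eta> lam c \<delta> \<epsilon> cb \<iota> \<pi>
    using weak_liftI[OF w] .
  have "L.pi_lifts_eps eb" using eps by simp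
  then show ?thesis
    unfolding cond2ii_def using L.emw_comonad_of_pi_lifting[OF comonad delta] by blast
qed

lemma cond2i_of_cond2ii:
  assumes "cond2ii C k t \<mu> \<eta> c \<delta> \<epsilon>"
  shows "cond2i C k t \<mu> \<eta> c \<delta> \<epsilon>"
proof -
  obtain \<psi> where emw: "emw_comonad C k t \<mu> \<eta> c \<psi> (pi_emw_delta \<psi>) pi_emw_eps"
    using assms unfolding cond2ii_def by blast
  have law: "mnd_1cell c \<psi>" using mnd_1cell_of_emw_comonad[OF emw] .
  show ?thesis unfolding cond2i_iff using law pi_laws_of_emw_comonad[OF law emw] by blast
qed

lemma cond3ii_of_cond3i:
  assumes "idempotents_split C" "cond3i C k t \<mu> \<eta> c \<delta> \<epsilon>"
  shows "cond3ii C J v c \<delta> \<epsilon>"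
proof -
  obtain \<psi> where law: "mnd_1cell c \<psi>" and laws: "strict_delta_law \<psi>" "pi_eps_law \<psi>"
    using assms(2) unfolding cond3i_iff by blast
  obtain cb \<iota> \<pi> where "split_lift C k J t v \<mu> \<eta> lam c \<delta> \<epsilon> cb \<iota> \<pi> \<psi>"
    using split_lift_exists[OF assms(1) law] .
  then interpret L: split_lift C k J t v \<mu> \<eta> lam c \<delta> \<epsilon> cb \<iota> \<pi> \<psi> .
  obtain db eb where comonad: "is_comonad C J cb db eb"
    and iota_delta: "L.iota_lifts_delta db" and iota_eps: "L.iota_lifts_eps eb"
    and pi_delta: "L.pi_lifts_delta db" and pi_eps: "L.pi_lifts_eps eb"
    using L.strict_lifted_comonad[OF laws] .
  have "id2 C v \<cdot> (v \<rhd> eb) = (\<epsilon> \<lhd> v) \<cdot> \<iota>"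
    using iota_eps comonad by (simp add: is_comonad_def hom2_def)
  moreover have "(v \<rhd> eb) \<cdot> \<pi> = id2 C v \<cdot> (\<epsilon> \<lhd> v)"
    using pi_eps by simp
  ultimately show ?thesis
    unfolding cond3ii_def using L.is_weak_lifting comonad iota_delta pi_delta by blast
qed

lemma cond3i_of_cond3ii:
  assumes "cond3ii C J v c \<delta> \<epsilon>"
  shows "cond3i C k t \<mu> \<eta> c \<delta> \<epsilon>"
proof -
  obtain cb \<iota> \<pi> db eb where w: "weak_lifting C J v c cb \<iota> \<pi>" and comonad: "is_comonad C J cb db eb"
    and iota_delta: "((c \<rhd> \<iota>) \<cdot> (\<iota> \<lhd> cb)) \<cdot> (v \<rhd> db) = (\<delta> \<lhd> v) \<cdot> \<iota>"
    and iota_eps: "id2 C v \<cdot> (v \<rhd> eb) = (\<epsilon> \<lhd> v) \<cdot> \<iota>"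
    and pi_delta: "(v \<rhd> db) \<cdot> \<pi> = ((\<pi> \<lhd> cb) \<cdot> (c \<rhd> \<pi>)) \<cdot> (\<delta> \<lhd> v)"
    and pi_eps: "(v \<rhd> eb) \<cdot> \<pi> = id2 C v \<cdot> (\<epsilon> \<lhd> v)"
    using assms unfolding cond3ii_def by blast
  interpret L: weak_lift C k J t v \<mu> \<eta> lam c \<delta> \<epsilon> cb \<iota> \<pi>
    using weak_liftI[OF w] .
  have "L.iota_lifts_eps eb" using iota_eps comonad by (simp add: is_comonad_def hom2_def)
  note emw_iota = L.emw_comonad_of_iota_lifting[OF comonad iota_delta this]
  have "L.pi_lifts_eps eb" using pi_eps by simp
  note emw_pi = L.emw_comonad_of_pi_lifting[OF comonad pi_delta this]
  have law: "mnd_1cell c L.psi_lift" using mnd_1cell_of_emw_comonad[OF emw_iota] .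
  have "strict_delta_law L.psi_lift"
    using strict_delta_law_of_laws[OF law iota_laws_of_emw_comonad(1)[OF law emw_iota]
      pi_laws_of_emw_comonad(1)[OF law emw_pi]] .
  then show ?thesis unfolding cond3i_iff using law pi_laws_of_emw_comonad(2)[OF law emw_pi] by blast
qed

end

theorem corollary5p1:
  fixes C :: "('o,'a,'b,'z) twocat_scheme"
    and k J :: 'o and t c v :: 'a and \<mu> \<eta> \<delta> \<epsilon> lam :: 'b
  assumes "two_category C"
    and "has_EM_constructions C"
    and "idempotents_split C"
    and "is_monad C k t \<mu> \<eta>"
    and "is_comonad C k c \<delta> \<epsilon>"
    and "em_object C k t \<mu> \<eta> J v lam"
  shows "(cond1i C k t \<mu> \<eta> c \<delta> \<epsilon> \<longleftrightarrow> cond1ii C k t \<mu> \<eta> c \<delta> \<epsilon>) \<and>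
         (cond1ii C k t \<mu> \<eta> c \<delta> \<epsilon> \<longleftrightarrow> cond1iii C J v c \<delta> \<epsilon>) \<and>
         (cond2i C k t \<mu> \<eta> c \<delta> \<epsilon> \<longleftrightarrow> cond2ii C k t \<mu> \<eta> c \<delta> \<epsilon>) \<and>
         (cond2ii C k t \<mu> \<eta> c \<delta> \<epsilon> \<longleftrightarrow> cond2iii C J v c \<delta> \<epsilon>) \<and>
         (cond3i C k t \<mu> \<eta> c \<delta> \<epsilon> \<longleftrightarrow> cond3ii C J v c \<delta> \<epsilon>)"
proof -
  interpret comonad_setting C k J t v \<mu> \<eta> lam c \<delta> \<epsilon>
    by unfold_locales (simp_all add: assms)
  show ?thesis
    using cond1iii_of_cond1i[OF assms(3)] cond1ii_of_cond1iii cond1i_of_cond1ii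
      cond2iii_of_cond2i[OF assms(3)] cond2ii_of_cond2iii cond2i_of_cond2ii
      cond3ii_of_cond3i[OF assms(3)] cond3i_of_cond3ii
    by blast
qed

end
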